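(* Under the standing setup (C1)–(C4), fix a small $\varepsilon>0$ and $L\ge4$ with $L\varepsilon<\gamma/4$, and define the blocks $Y_k$ as in the context. Then for every real $t$ there is $K_\varepsilon(t)>0$ such that for all $N\ge\exp(2/\varepsilon)$, $$\Big|E\exp\Big(\frac{it}{\sqrt N}\sum_{1\le k\le m(N)}Y_k\Big)-\prod_{1\le k\le m(N)}E\exp\Big(\frac{it}{\sqrt N}Y_k\Big)\Big|\le K_\varepsilon(t)N^{-\frac\varepsilon2\sqrt N}.$$
   Context: Standing setup. $(\Omega,\mathcal F,P)$ is a probability space, $\ell\ge1$, $X_1,\dots,X_\ell$ are real stationary processes $X_j(n)$, $n\ge0$, with $|X_j(n)|\le D$ a.s. $\{\mathcal F_{kl}\}$ is a family of sub-$\sigma$-algebras, $\mathcal F_{kl}\subset\mathcal F_{k'l'}$ for $k'\le k$, $l'\ge l$. $\alpha(n)=\sup_{k\ge0}\sup_{A\in\mathcal F_{-\infty,k},B\in\mathcal F_{k+n,\infty}}|P(A\cap B)-P(A)P(B)|$, $\beta_j(n)=\sup_{m\ge0}E|X_j(m)-E(X_j(m)\mid\mathcal F_{m-n,m+n})|$. (C1): $\alpha(n)+\max_j\beta_j(n)\le\kappa^{-1}e^{-\kappa n}$ for some $\kappa>0$ and all $n$. (C2): $q_1(n)=rn+p$ with integers $r>0,p\ge0$. There exist $\gamma\in(0,1)$, $n_0>1$ such that for $n\ge n_0$: (C3) $q_j(n+1)\ge q_j(n)+n^\gamma$ for $j=2,\dots,\ell$; (C4) $q_{j+1}([n^{1-\gamma}])\ge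 q_j(n)n^\gamma$ for $j=1,\dots,\ell-1$. $a_j=EX_j(0)$, $R(n)=\prod_{j=1}^\ell X_j(q_j(n))-\prod_{j=1}^\ell a_j$. Blocks: $\tau(N)=[N^{1-\varepsilon}]$, $\theta(N)=[N^{1-L\varepsilon}]$, $m(N)=[N/(\theta(N)+\tau(N))]$; for $k=1,\dots,m(N)$, $\Gamma_k(N)=\{n:\theta(N)+(k-1)(\theta(N)+\tau(N))\le n\le k(\theta(N)+\tau(N))\}$ and $Y_k=\sum_{n\in\Gamma_k(N)}R(n)$. *)

theory Defs
  imports "HOL-Probability.Probability"
begin

definition stationary_process :: "'a measure \<Rightarrow> (nat \<Rightarrow> 'a \<Rightarrow> real) \<Rightarrow> bool" where
  "stationary_process M X \<longleftrightarrow>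
     (\<forall>n. X n \<in> borel_measurable M) \<and>
     (\<forall>s. distr M (Pi\<^sub>M UNIV (\<lambda>_. borel)) (\<lambda>\<omega> n. X (n + s) \<omega>)
          = distr M (Pi\<^sub>M UNIV (\<lambda>_. borel)) (\<lambda>\<omega> n. X n \<omega>))"

text \<open>Strong mixing coefficient alpha(n); the sigma-algebras F k l are indexed by extended
  reals so that -\<infinity> and \<infinity> are allowed (only integer / infinite indices are used).\<close>
definition mix_alpha :: "'a measure \<Rightarrow> (ereal \<Rightarrow> ereal \<Rightarrow> 'a measure) \<Rightarrow> nat \<Rightarrow> real" where
  "mix_alpha M F n =
     (SUP k\<in>(UNIV::nat set). SUP AB\<in>sets (F (-\<infinity>) (ereal (real k))) \<times> sets (F (ereal (real (k + n))) \<infinity>).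
        \<bar>measure M (fst AB \<inter> snd AB) - measure M (fst AB) * measure M (snd AB)\<bar>)"

definition approx_beta :: "'a measure \<Rightarrow> (ereal \<Rightarrow> ereal \<Rightarrow> 'a measure) \<Rightarrow> (nat \<Rightarrow> 'a \<Rightarrow> real) \<Rightarrow> nat \<Rightarrow> real" where
  "approx_beta M F X n =
     (SUP m\<in>(UNIV::nat set).
        (\<integral>\<omega>. \<bar>X m \<omega> - real_cond_exp M (F (ereal (real m - real n)) (ereal (real m + real n))) (X m) \<omega>\<bar> \<partial>M))"

definition Rfun :: "'a measure \<Rightarrow> nat \<Rightarrow> (nat \<Rightarrow> nat \<Rightarrow> 'a \<Rightarrow> real) \<Rightarrow> (nat \<Rightarrow> nat \<Rightarrow> nat) \<Rightarrow> nat \<Rightarrow> 'a \<Rightarrow> real" where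
  "Rfun M l X q n \<omega> = (\<Prod>j=1..l. X j (q j n) \<omega>) - (\<Prod>j=1..l. (\<integral>\<omega>'. X j 0 \<omega>' \<partial>M))"

definition tau_blk :: "real \<Rightarrow> nat \<Rightarrow> nat" where
  "tau_blk \<epsilon> N = nat \<lfloor>real N powr (1 - \<epsilon>)\<rfloor>"

definition theta_blk :: "real \<Rightarrow> real \<Rightarrow> nat \<Rightarrow> nat" where
  "theta_blk L \<epsilon> N = nat \<lfloor>real N powr (1 - L * \<epsilon>)\<rfloor>"

definition m_blk :: "real \<Rightarrow> real \<Rightarrow> nat \<Rightarrow> nat" where
  "m_blk L \<epsilon> N = nat \<lfloor>real N / real (theta_blk L \<epsilon> N + tau_blk \<epsilon> N)\<rfloor>"

definition Gamma_blk :: "real \<Rightarrow> real \<Rightarrow> nat \<Rightarrow> nat \<Rightarrow> nat set" where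
  "Gamma_blk L \<epsilon> N k = {n. theta_blk L \<epsilon> N + (k - 1) * (theta_blk L \<epsilon> N + tau_blk \<epsilon> N) \<le> n
                          \<and> n \<le> k * (theta_blk L \<epsilon> N + tau_blk \<epsilon> N)}"

definition Y_blk :: "'a measure \<Rightarrow> nat \<Rightarrow> (nat \<Rightarrow> nat \<Rightarrow> 'a \<Rightarrow> real) \<Rightarrow> (nat \<Rightarrow> nat \<Rightarrow> nat)
                      \<Rightarrow> real \<Rightarrow> real \<Rightarrow> nat \<Rightarrow> nat \<Rightarrow> 'a \<Rightarrow> real" where
  "Y_blk M l X q L \<epsilon> N k \<omega> = (\<Sum>n\<in>Gamma_blk L \<epsilon> N k. Rfun M l X q n \<omega>)"

end

theory Submission
  imports Defs "HOL-Real_Asymp.Real_Asymp"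
begin

text \<open>
  Write s = t / sqrt N.  Up to a unimodular phase coming from the centring constants, the
  characteristic function of the block sum is E prod_k prod_{n in Gamma_k} exp(i s P_n) with
  P_n = prod_j X_j(q_j(n)).  We compare it with the product of the block expectations in
  three steps: each X_j(q_j(n)) is replaced by its conditional expectation on the window
  F(q_j(n) - h, q_j(n) + h), clipped to [-max 1 D, max 1 D] (error controlled by beta(h));
  each exponential is replaced by its Taylor polynomial of degree N (Lagrange remainder); the resulting
  polynomials are expanded into monomials whose factors, indexed by (j, k), are measurable in
  windows that are separated by gaps g when ordered lexicographically in (j, k) -- this is where
  the growth conditions (C2)-(C4) enter -- so the covariance inequality for strongly mixing
  sigma-algebras decouples them at cost alpha(g).  With h and g of order theta = N^(1 - L eps)
  >= N^(3/4) the three errors are O(N exp(C sqrt N - kappa N^(3/4) / 4)), which is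
  eventually below N^(-(eps/2) sqrt N); small N are absorbed into the constant.
\<close>

lemma norm_prod_diff_le:
  fixes a b :: "'i \<Rightarrow> 'c::real_normed_field"
  assumes "finite I" and "\<And>i. i \<in> I \<Longrightarrow> norm (a i) \<le> B i" and "\<And>i. i \<in> I \<Longrightarrow> norm (b i) \<le> B i"
    and "\<And>i. i \<in> I \<Longrightarrow> 1 \<le> B i"
  shows "norm ((\<Prod>i\<in>I. a i) - (\<Prod>i\<in>I. b i)) \<le> (\<Prod>i\<in>I. B i) * (\<Sum>i\<in>I. norm (a i - b i))"
  using assms
proof (induction I rule: finite_induct)
  case empty
  then show ?case by simp
next
  case (insert x F)
  have Bx: "1 \<le> B x" "norm (a x) \<le> B x" "norm (b x) \<le> B x" using insert.prems by auto
  have BF: "1 \<le> (\<Prod>i\<in>F. B i)" using insert.prems by (intro prod_ge_1) auto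
  have naF: "norm (\<Prod>i\<in>F. a i) \<le> (\<Prod>i\<in>F. B i)"
    unfolding prod_norm[symmetric] using insert.prems by (intro prod_mono) auto
  have IH: "norm ((\<Prod>i\<in>F. a i) - (\<Prod>i\<in>F. b i)) \<le> (\<Prod>i\<in>F. B i) * (\<Sum>i\<in>F. norm (a i - b i))"
    using insert by auto
  have "(\<Prod>i\<in>insert x F. a i) - (\<Prod>i\<in>insert x F. b i)
      = (a x - b x) * (\<Prod>i\<in>F. a i) + b x * ((\<Prod>i\<in>F. a i) - (\<Prod>i\<in>F. b i))"
    using insert by (simp add: algebra_simps)
  also have "norm \<dots> \<le> norm (a x - b x) * (\<Prod>i\<in>F. B i) + B x * ((\<Prod>i\<in>F. B i) * (\<Sum>i\<in>F. norm (a i - b i)))"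
    by (rule order.trans[OF norm_triangle_ineq]) (auto simp: norm_mult intro!: add_mono mult_mono naF IH Bx order.trans[OF norm_ge_zero Bx(2)])
  also have "\<dots> \<le> B x * (\<Prod>i\<in>F. B i) * (norm (a x - b x) + (\<Sum>i\<in>F. norm (a i - b i)))"
  proof -
    have "norm (a x - b x) \<le> B x * norm (a x - b x)"
      using mult_right_mono[OF Bx(1) norm_ge_zero[of "a x - b x"]] by simp
    then have "norm (a x - b x) * (\<Prod>i\<in>F. B i) \<le> B x * norm (a x - b x) * (\<Prod>i\<in>F. B i)"
      using BF by (intro mult_right_mono) auto
    then show ?thesis by (simp add: algebra_simps)
  qed
  also have "\<dots> = (\<Prod>i\<in>insert x F. B i) * (\<Sum>i\<in>insert x F. norm (a i - b i))"
    using insert by simp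
  finally show ?case .
qed

lemma iexp_diff_le: "cmod (exp (\<i> * complex_of_real a) - exp (\<i> * complex_of_real b)) \<le> \<bar>a - b\<bar>"
proof -
  have "exp (\<i> * complex_of_real a) - exp (\<i> * complex_of_real b)
      = exp (\<i> * complex_of_real b) * (exp (\<i> * complex_of_real (a - b)) - 1)"
    by (simp add: algebra_simps flip: exp_add)
  also have "cmod \<dots> = cmod (exp (\<i> * complex_of_real (a - b)) - 1)"
    by (simp add: norm_mult)
  also have "\<dots> \<le> \<bar>a - b\<bar>" using iexp_approx1[of "a - b" 0] by simp
  finally show ?thesis .
qed

lemma exp_partial_sum_le:
  fixes c :: real assumes "0 \<le> c"
  shows "(\<Sum>b\<le>d. c ^ b / fact b) \<le> exp c"
proof -
  have s: "summable (\<lambda>n. c ^ n / fact n)" using summable_exp[of c] by (simp add: divide_inverse mult.commute)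
  have "(\<Sum>b\<le>d. c ^ b / fact b) \<le> (\<Sum>n. c ^ n / fact n)"
    by (rule sum_le_suminf[OF s]) (use assms in auto)
  also have "\<dots> = exp c" by (simp add: exp_def divide_inverse mult.commute)
  finally show ?thesis .
qed

lemma taylor_poly_norm_le: "norm (\<Sum>b\<le>d. (\<i> * complex_of_real x)^b / fact b) \<le> exp \<bar>x\<bar>"
proof -
  have "norm (\<Sum>b\<le>d. (\<i> * complex_of_real x)^b / fact b) \<le> (\<Sum>b\<le>d. norm ((\<i> * complex_of_real x)^b / fact b))"
    by (rule norm_sum)
  also have "\<dots> = (\<Sum>b\<le>d. \<bar>x\<bar>^b / fact b)" by (simp add: norm_divide norm_power norm_mult)
  also have "\<dots> \<le> exp \<bar>x\<bar>" by (rule exp_partial_sum_le) simp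
  finally show ?thesis .
qed

lemma le_mult_ge_one: "0 \<le> (a::real) \<Longrightarrow> 1 \<le> e \<Longrightarrow> a \<le> a * e"
  using mult_left_mono[of 1 e a] by simp

lemma nat_floor_le: "0 \<le> x \<Longrightarrow> real (nat \<lfloor>x\<rfloor>) \<le> x"
  by (simp add: of_nat_nat)

lemma nat_floor_ge: "0 \<le> x \<Longrightarrow> x - 1 \<le> real (nat \<lfloor>x\<rfloor>)"
  by (simp add: of_nat_nat)

lemma integrable_bounded_prob:
  fixes f :: "'a \<Rightarrow> 'b::{banach, second_countable_topology}"
  assumes M: "prob_space M" and "f \<in> borel_measurable M" and "\<And>x. x \<in> space M \<Longrightarrow> norm (f x) \<le> B"
  shows "integrable M f"
proof -
  interpret prob_space M by (rule M)
  show ?thesis by (rule integrable_const_bound[where B=B]) (use assms in auto)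
qed

text \<open>The expectation of a function bounded by B has norm at most B (also when it is not integrable).\<close>
lemma norm_integral_le_const:
  fixes f :: "'a \<Rightarrow> 'b::{banach, second_countable_topology}"
  assumes M: "prob_space M" and b: "\<And>x. x \<in> space M \<Longrightarrow> norm (f x) \<le> B"
  shows "norm (integral\<^sup>L M f) \<le> B"
proof -
  interpret prob_space M by (rule M)
  obtain x0 where x0: "x0 \<in> space M" using not_empty by blast
  have B: "0 \<le> B" using b[OF x0] norm_ge_zero order.trans by blast
  show ?thesis
  proof (cases "integrable M f")
    case True
    have "norm (integral\<^sup>L M f) \<le> (\<integral>x. norm (f x) \<partial>M)" by (rule integral_norm_bound)
    also have "\<dots> \<le> (\<integral>x. B \<partial>M)" using True b by (intro integral_mono) auto
    also have "\<dots> = B" by (simp add: prob_space)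
    finally show ?thesis .
  next
    case False
    then show ?thesis using B by (simp add: not_integrable_integral_eq)
  qed
qed

lemma integral_le_const_AE:
  fixes f :: "'a \<Rightarrow> real"
  assumes M: "prob_space M" and "AE x in M. f x \<le> c" and "0 \<le> c"
  shows "(\<integral>x. f x \<partial>M) \<le> c"
proof (cases "integrable M f")
  case True
  interpret prob_space M by (rule M)
  have "(\<integral>x. f x \<partial>M) \<le> (\<integral>x. c \<partial>M)" by (rule integral_mono_AE[OF True _ assms(2)]) simp
  then show ?thesis by (simp add: prob_space)
next
  case False
  then show ?thesis using assms(3) by (simp add: not_integrable_integral_eq)
qed

lemma measurable_sets_mono:
  assumes "subalgebra M F1" "subalgebra M F2" "sets F1 \<subseteq> sets F2" "f \<in> borel_measurable F1"
  shows "f \<in> borel_measurable F2"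
proof (rule measurable_from_subalg[OF _ assms(4)])
  show "subalgebra F2 F1" using assms(1-3) by (auto simp: subalgebra_def)
qed

subsection \<open>The covariance inequality for strongly mixing sigma-algebras\<close>

text \<open>First half of the covariance inequality: the covariance of a bounded G-measurable f with g is
  dominated by that of the sign of E(g | G) - E g, a +-1 valued G-measurable variable.\<close>
lemma cond_exp_sign_covariance:
  assumes M: "prob_space M" and sub: "subalgebra M H"
    and f: "f \<in> borel_measurable H" and fb: "\<And>x. x \<in> space M \<Longrightarrow> \<bar>f x\<bar> \<le> Bf"
    and g: "g \<in> borel_measurable M" and gb: "\<And>x. x \<in> space M \<Longrightarrow> \<bar>g x\<bar> \<le> Bg"
  shows "\<exists>B\<in>sets H. \<bar>(\<integral>x. f x * g x \<partial>M) - (\<integral>x. f x \<partial>M) * (\<integral>x. g x \<partial>M)\<bar>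
     \<le> Bf * ((\<integral>x. (if x \<in> B then 1 else -1) * g x \<partial>M) - (\<integral>x. (if x \<in> B then 1 else -1::real) \<partial>M) * (\<integral>x. g x \<partial>M))"
proof -
  interpret prob_space M by (rule M)
  interpret finite_measure_subalgebra M H
    by unfold_locales (rule sub)
  have fM: "f \<in> borel_measurable M" by (rule measurable_from_subalg[OF sub f])
  have sp: "space H = space M" using sub by (simp add: subalgebra_def)
  have gi: "integrable M g" by (rule integrable_const_bound[where B=Bg]) (auto simp: gb g)
  have fi: "integrable M f" by (rule integrable_const_bound[where B=Bf]) (auto simp: fb fM)
  have fgi: "integrable M (\<lambda>x. f x * g x)"
    by (rule integrable_const_bound[where B="Bf*Bg"]) (auto simp: fb gb fM g abs_mult intro!: mult_mono order.trans[OF abs_ge_zero fb] borel_measurable_times)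
  define W where "W = real_cond_exp M H g"
  define c where "c = (\<integral>x. g x \<partial>M)"
  have Wm: "W \<in> borel_measurable H" unfolding W_def by simp
  have Wi: "integrable M W" "(\<integral>x. W x \<partial>M) = c" unfolding W_def c_def using real_cond_exp_int[OF gi] by auto
  have fW: "integrable M (\<lambda>x. f x * W x)" "(\<integral>x. f x * W x \<partial>M) = (\<integral>x. f x * g x \<partial>M)"
    unfolding W_def using real_cond_exp_intg[OF fgi f g] by auto
  define B where "B = {x \<in> space H. c \<le> W x}"
  have Bs: "B \<in> sets H" unfolding B_def using Wm by measurable
  define \<xi> where "\<xi> = (\<lambda>x. if x \<in> B then 1 else -1::real)"
  have \<xi>m: "\<xi> \<in> borel_measurable H" unfolding \<xi>_def using Bs by measurable
  have \<xi>mM: "\<xi> \<in> borel_measurable M" by (rule measurable_from_subalg[OF sub \<xi>m])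
  have \<xi>i: "integrable M \<xi>" by (rule integrable_const_bound[where B=1]) (auto simp: \<xi>mM, auto simp: \<xi>_def)
  have \<xi>gi: "integrable M (\<lambda>x. \<xi> x * g x)"
  proof (rule integrable_const_bound[where B="Bg"])
    show "(\<lambda>x. \<xi> x * g x) \<in> borel_measurable M" using \<xi>mM g by (rule borel_measurable_times)
  qed (auto simp: \<xi>_def gb)
  have \<xi>W: "integrable M (\<lambda>x. \<xi> x * W x)" "(\<integral>x. \<xi> x * W x \<partial>M) = (\<integral>x. \<xi> x * g x \<partial>M)"
    using real_cond_exp_intg[OF \<xi>gi \<xi>m g] unfolding W_def by auto
  have "(\<integral>x. f x * g x \<partial>M) - (\<integral>x. f x \<partial>M) * c = (\<integral>x. f x * (W x - c) \<partial>M)"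
    using fW fi by (simp add: right_diff_distrib)
  also have "\<bar>\<dots>\<bar> \<le> (\<integral>x. \<bar>f x * (W x - c)\<bar> \<partial>M)" by (rule integral_abs_bound)
  also have "\<dots> \<le> (\<integral>x. Bf * \<bar>W x - c\<bar> \<partial>M)"
  proof (rule integral_mono)
    show "integrable M (\<lambda>x. \<bar>f x * (W x - c)\<bar>)"
      using fW fi by (simp add: right_diff_distrib)
    show "integrable M (\<lambda>x. Bf * \<bar>W x - c\<bar>)" using Wi by auto
    fix x assume "x \<in> space M"
    then show "\<bar>f x * (W x - c)\<bar> \<le> Bf * \<bar>W x - c\<bar>"
      by (simp add: abs_mult mult_right_mono fb)
  qed
  also have "(\<integral>x. Bf * \<bar>W x - c\<bar> \<partial>M) = Bf * (\<integral>x. \<bar>W x - c\<bar> \<partial>M)" by simp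
  also have "(\<integral>x. \<bar>W x - c\<bar> \<partial>M) = (\<integral>x. \<xi> x * W x - c * \<xi> x \<partial>M)"
    by (rule Bochner_Integration.integral_cong) (auto simp: \<xi>_def B_def sp)
  also have "\<dots> = (\<integral>x. \<xi> x * g x \<partial>M) - c * (\<integral>x. \<xi> x \<partial>M)"
    using \<xi>W \<xi>i by simp
  finally show ?thesis using Bs unfolding \<xi>_def c_def by (auto simp: mult.commute)
qed

lemma sign_covariance_eq:
  assumes M: "prob_space M" and A: "A \<in> sets M" and B: "B \<in> sets M"
  shows "(\<integral>x. (if x \<in> A then 1 else -1) * (if x \<in> B then 1 else -1::real) \<partial>M)
     - (\<integral>x. (if x \<in> A then 1 else -1::real) \<partial>M) * (\<integral>x. (if x \<in> B then 1 else -1::real) \<partial>M)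
     = 4 * (measure M (A \<inter> B) - measure M A * measure M B)"
proof -
  interpret prob_space M by (rule M)
  have AB: "A \<inter> B \<in> sets M" using A B by auto
  have e1: "\<And>C. C \<in> sets M \<Longrightarrow> (\<integral>x. (if x \<in> C then 1 else -1::real) \<partial>M) = 2 * prob C - 1"
  proof -
    fix C assume C: "C \<in> sets M"
    have "(\<integral>x. (if x \<in> C then 1 else -1::real) \<partial>M) = (\<integral>x. 2 * indicator C x - 1 \<partial>M)"
      by (rule Bochner_Integration.integral_cong) (auto simp: indicator_def)
    also have "\<dots> = 2 * prob C - 1"
      using C by (subst Bochner_Integration.integral_diff) (auto simp: prob_space less_top[symmetric] intro!: integrable_real_indicator)
    finally show "(\<integral>x. (if x \<in> C then 1 else -1::real) \<partial>M) = 2 * prob C - 1" .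
  qed
  have "(\<integral>x. (if x \<in> A then 1 else -1) * (if x \<in> B then 1 else -1::real) \<partial>M)
      = (\<integral>x. 4 * indicator (A \<inter> B) x - 2 * indicator A x - 2 * indicator B x + 1 \<partial>M)"
    by (rule Bochner_Integration.integral_cong) (auto simp: indicator_def)
  also have "\<dots> = 4 * prob (A \<inter> B) - 2 * prob A - 2 * prob B + 1"
  proof -
    have i: "\<And>C. C \<in> sets M \<Longrightarrow> integrable M (indicat_real C)"
      by (auto simp: less_top[symmetric] intro!: integrable_real_indicator)
    have iA: "integrable M (indicat_real A)" and iB: "integrable M (indicat_real B)"
      and iAB: "integrable M (indicat_real (A \<inter> B))" using i A B AB by auto
    show ?thesis using iA iB iAB A B AB by (simp add: prob_space)
  qed
  finally have X: "(\<integral>x. (if x \<in> A then 1 else -1) * (if x \<in> B then 1 else -1::real) \<partial>M) = 4 * prob (A \<inter> B) - 2 * prob A - 2 * prob B + 1" .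
  show ?thesis unfolding X e1[OF A] e1[OF B] by (simp add: algebra_simps)
qed

lemma mixing_covariance_real:
  assumes M: "prob_space M" and subG: "subalgebra M G" and subH: "subalgebra M H"
    and alpha: "\<And>A B. A \<in> sets G \<Longrightarrow> B \<in> sets H \<Longrightarrow> \<bar>measure M (A \<inter> B) - measure M A * measure M B\<bar> \<le> a"
    and U: "U \<in> borel_measurable G" and Ub: "\<And>x. x \<in> space M \<Longrightarrow> \<bar>U x\<bar> \<le> B1"
    and V: "V \<in> borel_measurable H" and Vb: "\<And>x. x \<in> space M \<Longrightarrow> \<bar>V x\<bar> \<le> B2"
  shows "\<bar>(\<integral>x. U x * V x \<partial>M) - (\<integral>x. U x \<partial>M) * (\<integral>x. V x \<partial>M)\<bar> \<le> 4 * a * B1 * B2"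
proof -
  interpret prob_space M by (rule M)
  obtain x0 where x0: "x0 \<in> space M" using not_empty by blast
  have B1: "B1 \<ge> 0" using Ub[OF x0] by linarith
  have B2: "B2 \<ge> 0" using Vb[OF x0] by linarith
  have UM: "U \<in> borel_measurable M" by (rule measurable_from_subalg[OF subG U])
  obtain B where B: "B \<in> sets H" and
    c1: "\<bar>(\<integral>x. V x * U x \<partial>M) - (\<integral>x. V x \<partial>M) * (\<integral>x. U x \<partial>M)\<bar>
     \<le> B2 * ((\<integral>x. (if x \<in> B then 1 else -1) * U x \<partial>M) - (\<integral>x. (if x \<in> B then 1 else -1::real) \<partial>M) * (\<integral>x. U x \<partial>M))"
    using cond_exp_sign_covariance[OF M subH V Vb UM Ub] by blast
  have BM: "B \<in> sets M" using B subH by (auto simp: subalgebra_def)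
  have \<xi>m: "(\<lambda>x. if x \<in> B then 1 else -1::real) \<in> borel_measurable M" using BM by measurable
  have \<xi>b: "\<And>x. x \<in> space M \<Longrightarrow> \<bar>if x \<in> B then 1 else -1::real\<bar> \<le> 1" by auto
  obtain A where A: "A \<in> sets G" and
    c2: "\<bar>(\<integral>x. U x * (if x \<in> B then 1 else -1) \<partial>M) - (\<integral>x. U x \<partial>M) * (\<integral>x. (if x \<in> B then 1 else -1::real) \<partial>M)\<bar>
     \<le> B1 * ((\<integral>x. (if x \<in> A then 1 else -1) * (if x \<in> B then 1 else -1::real) \<partial>M) - (\<integral>x. (if x \<in> A then 1 else -1::real) \<partial>M) * (\<integral>x. (if x \<in> B then 1 else -1::real) \<partial>M))"
    using cond_exp_sign_covariance[OF M subG U Ub \<xi>m \<xi>b] by blast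
  have AM: "A \<in> sets M" using A subG by (auto simp: subalgebra_def)
  have c3: "B1 * ((\<integral>x. (if x \<in> A then 1 else -1) * (if x \<in> B then 1 else -1::real) \<partial>M) - (\<integral>x. (if x \<in> A then 1 else -1::real) \<partial>M) * (\<integral>x. (if x \<in> B then 1 else -1::real) \<partial>M)) = B1 * (4 * (measure M (A \<inter> B) - measure M A * measure M B))"
    using sign_covariance_eq[OF M AM BM] by simp
  have c4: "B1 * (4 * (measure M (A \<inter> B) - measure M A * measure M B)) \<le> B1 * (4 * a)"
    using alpha[OF A B] B1 by (intro mult_left_mono) auto
  have "\<bar>(\<integral>x. U x * V x \<partial>M) - (\<integral>x. U x \<partial>M) * (\<integral>x. V x \<partial>M)\<bar>
       = \<bar>(\<integral>x. V x * U x \<partial>M) - (\<integral>x. V x \<partial>M) * (\<integral>x. U x \<partial>M)\<bar>"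
    by (simp add: mult.commute)
  also have "\<dots> \<le> B2 * ((\<integral>x. (if x \<in> B then 1 else -1) * U x \<partial>M) - (\<integral>x. (if x \<in> B then 1 else -1::real) \<partial>M) * (\<integral>x. U x \<partial>M))"
    by (rule c1)
  also have "\<dots> \<le> B2 * (B1 * (4 * a))"
  proof (rule mult_left_mono[OF _ B2])
    have "(\<integral>x. (if x \<in> B then 1 else -1) * U x \<partial>M) - (\<integral>x. (if x \<in> B then 1 else -1::real) \<partial>M) * (\<integral>x. U x \<partial>M)
      \<le> \<bar>(\<integral>x. U x * (if x \<in> B then 1 else -1) \<partial>M) - (\<integral>x. U x \<partial>M) * (\<integral>x. (if x \<in> B then 1 else -1::real) \<partial>M)\<bar>"
      by (simp add: mult.commute)
    then show "(\<integral>x. (if x \<in> B then 1 else -1) * U x \<partial>M) - (\<integral>x. (if x \<in> B then 1 else -1::real) \<partial>M) * (\<integral>x. U x \<partial>M) \<le> B1 * (4 * a)"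
      using c2 c3 c4 by linarith
  qed
  finally show ?thesis by (simp add: algebra_simps)
qed

lemma mixing_covariance_complex:
  fixes U V :: "'a \<Rightarrow> complex"
  assumes M: "prob_space M" and subG: "subalgebra M G" and subH: "subalgebra M H"
    and alpha: "\<And>A B. A \<in> sets G \<Longrightarrow> B \<in> sets H \<Longrightarrow> \<bar>measure M (A \<inter> B) - measure M A * measure M B\<bar> \<le> a"
    and U: "U \<in> borel_measurable G" and Ub: "\<And>x. x \<in> space M \<Longrightarrow> norm (U x) \<le> B1"
    and V: "V \<in> borel_measurable H" and Vb: "\<And>x. x \<in> space M \<Longrightarrow> norm (V x) \<le> B2"
  shows "norm ((\<integral>x. U x * V x \<partial>M) - (\<integral>x. U x \<partial>M) * (\<integral>x. V x \<partial>M)) \<le> 16 * a * B1 * B2"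
proof -
  interpret prob_space M by (rule M)
  define ur where "ur = (\<lambda>x. Re (U x))"
  define ui where "ui = (\<lambda>x. Im (U x))"
  define vr where "vr = (\<lambda>x. Re (V x))"
  define vi where "vi = (\<lambda>x. Im (V x))"
  have m: "ur \<in> borel_measurable G" "ui \<in> borel_measurable G" "vr \<in> borel_measurable H" "vi \<in> borel_measurable H"
    unfolding ur_def ui_def vr_def vi_def using U V by measurable
  have mM: "ur \<in> borel_measurable M" "ui \<in> borel_measurable M" "vr \<in> borel_measurable M" "vi \<in> borel_measurable M"
    using m measurable_from_subalg[OF subG] measurable_from_subalg[OF subH] by blast+
  have b: "\<And>x. x \<in> space M \<Longrightarrow> \<bar>ur x\<bar> \<le> B1" "\<And>x. x \<in> space M \<Longrightarrow> \<bar>ui x\<bar> \<le> B1"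
    "\<And>x. x \<in> space M \<Longrightarrow> \<bar>vr x\<bar> \<le> B2" "\<And>x. x \<in> space M \<Longrightarrow> \<bar>vi x\<bar> \<le> B2"
    unfolding ur_def ui_def vr_def vi_def
    using Ub Vb abs_Re_le_cmod abs_Im_le_cmod order_trans by blast+
  have c1: "\<bar>(\<integral>x. f x * g x \<partial>M) - (\<integral>x. f x \<partial>M) * (\<integral>x. g x \<partial>M)\<bar> \<le> 4 * a * B1 * B2"
    if "f \<in> {ur, ui}" "g \<in> {vr, vi}" for f g
    using that m b by (auto intro!: mixing_covariance_real[OF M subG subH alpha])
  have UM: "U \<in> borel_measurable M" by (rule measurable_from_subalg[OF subG U])
  have VM: "V \<in> borel_measurable M" by (rule measurable_from_subalg[OF subH V])
  have iU: "integrable M U" by (rule integrable_const_bound[where B=B1]) (auto simp: Ub UM)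
  have iV: "integrable M V" by (rule integrable_const_bound[where B=B2]) (auto simp: Vb VM)
  have ir: "integrable M (\<lambda>x. f x * g x)" if "f \<in> {ur, ui}" "g \<in> {vr, vi}" for f g
  proof (rule integrable_const_bound[where B="B1*B2"])
    show "(\<lambda>x. f x * g x) \<in> borel_measurable M" using that mM by auto
    show "AE x in M. norm (f x * g x) \<le> B1 * B2"
    proof (rule AE_I2)
      fix x assume x: "x \<in> space M"
      have "\<bar>f x\<bar> \<le> B1" "\<bar>g x\<bar> \<le> B2" using that b x by auto
      then show "norm (f x * g x) \<le> B1 * B2"
        by (simp add: abs_mult) (rule mult_mono, auto intro: order.trans[OF abs_ge_zero])
    qed
  qed
  have iUV: "integrable M (\<lambda>x. U x * V x)"
  proof (rule integrable_const_bound[where B="B1*B2"])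
    show "(\<lambda>x. U x * V x) \<in> borel_measurable M" using UM VM by auto
    show "AE x in M. norm (U x * V x) \<le> B1 * B2"
      using Ub Vb by (auto simp: norm_mult intro!: mult_mono order.trans[OF norm_ge_zero])
  qed
  define C where "C = (\<integral>x. U x * V x \<partial>M) - (\<integral>x. U x \<partial>M) * (\<integral>x. V x \<partial>M)"
  have rU: "Re (\<integral>x. U x \<partial>M) = (\<integral>x. ur x \<partial>M)" "Im (\<integral>x. U x \<partial>M) = (\<integral>x. ui x \<partial>M)"
    "Re (\<integral>x. V x \<partial>M) = (\<integral>x. vr x \<partial>M)" "Im (\<integral>x. V x \<partial>M) = (\<integral>x. vi x \<partial>M)"
    unfolding ur_def ui_def vr_def vi_def using iU iV by simp_all
  have rUV: "Re (\<integral>x. U x * V x \<partial>M) = (\<integral>x. ur x * vr x \<partial>M) - (\<integral>x. ui x * vi x \<partial>M)"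
  proof -
    have "Re (\<integral>x. U x * V x \<partial>M) = (\<integral>x. Re (U x * V x) \<partial>M)" by (rule integral_Re[OF iUV, symmetric])
    also have "\<dots> = (\<integral>x. ur x * vr x - ui x * vi x \<partial>M)"
      by (rule Bochner_Integration.integral_cong) (auto simp: ur_def ui_def vr_def vi_def)
    also have "\<dots> = (\<integral>x. ur x * vr x \<partial>M) - (\<integral>x. ui x * vi x \<partial>M)" using ir by simp
    finally show ?thesis .
  qed
  have iUV': "Im (\<integral>x. U x * V x \<partial>M) = (\<integral>x. ur x * vi x \<partial>M) + (\<integral>x. ui x * vr x \<partial>M)"
  proof -
    have "Im (\<integral>x. U x * V x \<partial>M) = (\<integral>x. Im (U x * V x) \<partial>M)" by (rule integral_Im[OF iUV, symmetric])
    also have "\<dots> = (\<integral>x. ur x * vi x + ui x * vr x \<partial>M)"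
      by (rule Bochner_Integration.integral_cong) (auto simp: ur_def ui_def vr_def vi_def)
    also have "\<dots> = (\<integral>x. ur x * vi x \<partial>M) + (\<integral>x. ui x * vr x \<partial>M)" using ir by simp
    finally show ?thesis .
  qed
  have ReC: "Re C = ((\<integral>x. ur x * vr x \<partial>M) - (\<integral>x. ur x \<partial>M) * (\<integral>x. vr x \<partial>M))
       - ((\<integral>x. ui x * vi x \<partial>M) - (\<integral>x. ui x \<partial>M) * (\<integral>x. vi x \<partial>M))"
    unfolding C_def using rU rUV by simp
  have ImC: "Im C = ((\<integral>x. ur x * vi x \<partial>M) - (\<integral>x. ur x \<partial>M) * (\<integral>x. vi x \<partial>M))
       + ((\<integral>x. ui x * vr x \<partial>M) - (\<integral>x. ui x \<partial>M) * (\<integral>x. vr x \<partial>M))"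
    unfolding C_def using rU iUV' by simp
  have "norm C \<le> \<bar>Re C\<bar> + \<bar>Im C\<bar>" by (rule cmod_le)
  also have "\<dots> \<le> 16 * a * B1 * B2"
    unfolding ReC ImC using c1[of ur vr] c1[of ui vi] c1[of ur vi] c1[of ui vr] by auto
  finally show ?thesis unfolding C_def .
qed

subsection \<open>Decoupling of ordered products\<close>

lemma mixing_decouple_ordered:
  fixes U :: "nat \<Rightarrow> 'a \<Rightarrow> complex"
  assumes M: "prob_space M" and I: "finite I"
    and Pre: "\<And>i. i \<in> I \<Longrightarrow> subalgebra M (Pre i)"
    and Post: "\<And>i. i \<in> I \<Longrightarrow> subalgebra M (Post i)"
    and alpha: "\<And>i A B. i \<in> I \<Longrightarrow> A \<in> sets (Pre i) \<Longrightarrow> B \<in> sets (Post i) \<Longrightarrow>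
                   \<bar>measure M (A \<inter> B) - measure M A * measure M B\<bar> \<le> a"
    and Um: "\<And>i. i \<in> I \<Longrightarrow> U i \<in> borel_measurable (Pre i)"
    and Upost: "\<And>i i'. i \<in> I \<Longrightarrow> i' \<in> I \<Longrightarrow> i < i' \<Longrightarrow> U i' \<in> borel_measurable (Post i)"
    and Ub: "\<And>i x. i \<in> I \<Longrightarrow> x \<in> space M \<Longrightarrow> norm (U i x) \<le> Bd i"
  shows "norm ((\<integral>x. (\<Prod>i\<in>I. U i x) \<partial>M) - (\<Prod>i\<in>I. (\<integral>x. U i x \<partial>M))) \<le> 16 * a * card I * (\<Prod>i\<in>I. Bd i)"
proof -
  interpret prob_space M by (rule M)
  obtain x0 where x0: "x0 \<in> space M" using not_empty by blast
  have Bd0: "\<And>i. i \<in> I \<Longrightarrow> 0 \<le> Bd i" using Ub[OF _ x0] norm_ge_zero order.trans by blast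
  have "J \<subseteq> I \<Longrightarrow> norm ((\<integral>x. (\<Prod>i\<in>J. U i x) \<partial>M) - (\<Prod>i\<in>J. (\<integral>x. U i x \<partial>M))) \<le> 16 * a * card J * (\<Prod>i\<in>J. Bd i)" for J
  proof -
    assume JI: "J \<subseteq> I"
    have "finite J" using JI I finite_subset by blast
    then show ?thesis using JI
    proof (induction J rule: finite_linorder_min_induct)
      case empty
      then show ?case by (simp add: prob_space)
    next
      case (insert b A)
      have bI: "b \<in> I" and AI: "A \<subseteq> I" using insert.prems by auto
      have bA: "b \<notin> A" using insert.hyps by auto
      have subG: "subalgebra M (Pre b)" and subH: "subalgebra M (Post b)" using Pre Post bI by auto
      have UbM: "U b \<in> borel_measurable (Pre b)" using Um bI by auto
      have PA: "(\<lambda>x. \<Prod>i\<in>A. U i x) \<in> borel_measurable (Post b)"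
        using AI insert.hyps by (intro borel_measurable_prod Upost[OF bI]) auto
      have nPA: "norm (\<Prod>i\<in>A. U i x) \<le> (\<Prod>i\<in>A. Bd i)" if "x \<in> space M" for x
        unfolding prod_norm[symmetric] using AI Ub that by (intro prod_mono) auto
      have c1: "norm ((\<integral>x. U b x * (\<Prod>i\<in>A. U i x) \<partial>M) - (\<integral>x. U b x \<partial>M) * (\<integral>x. (\<Prod>i\<in>A. U i x) \<partial>M))
           \<le> 16 * a * Bd b * (\<Prod>i\<in>A. Bd i)"
        by (rule mixing_covariance_complex[OF M subG subH alpha[OF bI] UbM _ PA nPA]) (use Ub bI in auto)
      have nUb: "norm (\<integral>x. U b x \<partial>M) \<le> Bd b"
        by (rule norm_integral_le_const[OF M]) (use Ub bI in auto)
      have IH: "norm ((\<integral>x. (\<Prod>i\<in>A. U i x) \<partial>M) - (\<Prod>i\<in>A. (\<integral>x. U i x \<partial>M))) \<le> 16 * a * card A * (\<Prod>i\<in>A. Bd i)"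
        using insert AI by auto
      have "(\<integral>x. (\<Prod>i\<in>insert b A. U i x) \<partial>M) - (\<Prod>i\<in>insert b A. (\<integral>x. U i x \<partial>M))
         = ((\<integral>x. U b x * (\<Prod>i\<in>A. U i x) \<partial>M) - (\<integral>x. U b x \<partial>M) * (\<integral>x. (\<Prod>i\<in>A. U i x) \<partial>M))
           + (\<integral>x. U b x \<partial>M) * ((\<integral>x. (\<Prod>i\<in>A. U i x) \<partial>M) - (\<Prod>i\<in>A. (\<integral>x. U i x \<partial>M)))"
        using insert.hyps bA by (simp add: algebra_simps)
      also have "norm \<dots> \<le> 16 * a * Bd b * (\<Prod>i\<in>A. Bd i) + Bd b * (16 * a * card A * (\<Prod>i\<in>A. Bd i))"
        by (rule order.trans[OF norm_triangle_ineq]) (auto simp: norm_mult intro!: add_mono c1 mult_mono nUb IH Bd0[OF bI])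
      also have "\<dots> = 16 * a * card (insert b A) * (\<Prod>i\<in>insert b A. Bd i)"
        using insert.hyps bA by (simp add: algebra_simps)
      finally show ?case .
    qed
  qed
  then show ?thesis by blast
qed

lemma mixing_decouple_ranked:
  fixes U :: "'i \<Rightarrow> 'a \<Rightarrow> complex" and rk :: "'i \<Rightarrow> nat"
  assumes M: "prob_space M" and I: "finite I" and rk: "inj_on rk I"
    and Pre: "\<And>i. i \<in> I \<Longrightarrow> subalgebra M (Pre i)"
    and Post: "\<And>i. i \<in> I \<Longrightarrow> subalgebra M (Post i)"
    and alpha: "\<And>i A B. i \<in> I \<Longrightarrow> A \<in> sets (Pre i) \<Longrightarrow> B \<in> sets (Post i) \<Longrightarrow>
                   \<bar>measure M (A \<inter> B) - measure M A * measure M B\<bar> \<le> a"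
    and Um: "\<And>i. i \<in> I \<Longrightarrow> U i \<in> borel_measurable (Pre i)"
    and Upost: "\<And>i i'. i \<in> I \<Longrightarrow> i' \<in> I \<Longrightarrow> rk i < rk i' \<Longrightarrow> U i' \<in> borel_measurable (Post i)"
    and Ub: "\<And>i x. i \<in> I \<Longrightarrow> x \<in> space M \<Longrightarrow> norm (U i x) \<le> Bd i"
  shows "norm ((\<integral>x. (\<Prod>i\<in>I. U i x) \<partial>M) - (\<Prod>i\<in>I. (\<integral>x. U i x \<partial>M))) \<le> 16 * a * card I * (\<Prod>i\<in>I. Bd i)"
proof -
  define g where "g = the_inv_into I rk"
  have g1: "\<And>i. i \<in> I \<Longrightarrow> g (rk i) = i" unfolding g_def using rk by (simp add: the_inv_into_f_f)
  have g2: "\<And>r. r \<in> rk ` I \<Longrightarrow> g r \<in> I \<and> rk (g r) = r" using g1 by auto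
  have D: "norm ((\<integral>x. (\<Prod>r\<in>rk ` I. U (g r) x) \<partial>M) - (\<Prod>r\<in>rk ` I. (\<integral>x. U (g r) x \<partial>M)))
     \<le> 16 * a * card (rk ` I) * (\<Prod>r\<in>rk ` I. Bd (g r))"
  proof (rule mixing_decouple_ordered[OF M, where Pre="\<lambda>r. Pre (g r)" and Post="\<lambda>r. Post (g r)"])
    show "finite (rk ` I)" using I by simp
  next
    fix r i' assume "r \<in> rk ` I" "i' \<in> rk ` I" "r < i'"
    then show "U (g i') \<in> borel_measurable (Post (g r))" using g2 by (intro Upost) auto
  next
    fix r A B assume "r \<in> rk ` I" "A \<in> sets (Pre (g r))" "B \<in> sets (Post (g r))"
    then show "\<bar>measure M (A \<inter> B) - measure M A * measure M B\<bar> \<le> a" using g2 alpha by blast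
  qed (use g2 Pre Post Um Ub in auto)
  have e: "\<And>f::'i \<Rightarrow> complex. (\<Prod>r\<in>rk ` I. f (g r)) = (\<Prod>i\<in>I. f i)"
    by (subst prod.reindex[OF rk]) (auto simp: g1)
  have e2: "(\<Prod>r\<in>rk ` I. Bd (g r)) = (\<Prod>i\<in>I. Bd i)"
    by (subst prod.reindex[OF rk]) (auto simp: g1)
  have e3: "(\<lambda>x. \<Prod>r\<in>rk ` I. U (g r) x) = (\<lambda>x. \<Prod>i\<in>I. U i x)" by (rule ext) (rule e)
  have e4: "(\<Prod>r\<in>rk ` I. (\<integral>x. U (g r) x \<partial>M)) = (\<Prod>i\<in>I. (\<integral>x. U i x \<partial>M))" by (rule e)
  show ?thesis using D unfolding e3 e4 e2 card_image[OF rk] .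
qed

lemma lex_rank_less_iff:
  fixes j j' k k' R :: nat
  assumes "k < R" "k' < R"
  shows "j * R + k < j' * R + k' \<longleftrightarrow> (j < j' \<or> (j = j' \<and> k < k'))"
proof -
  have A: "j * R + k < j' * R + k'" if "j < j'"
  proof -
    have "j * R + k < j * R + R" using assms by simp
    also have "\<dots> = Suc j * R" by simp
    also have "\<dots> \<le> j' * R" using that by (intro mult_right_mono) auto
    finally show ?thesis by simp
  qed
  have B: "\<not> j * R + k < j' * R + k'" if "j' < j"
  proof -
    have "j' * R + k' < j' * R + R" using assms by simp
    also have "\<dots> = Suc j' * R" by simp
    also have "\<dots> \<le> j * R" using that by (intro mult_right_mono) auto
    finally show ?thesis by simp
  qed
  show ?thesis using A B by (cases "j < j'"; cases "j' < j") auto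
qed

text \<open>Decoupling of a doubly indexed family W j k whose factors are ordered lexicographically in
  (j, k): the rank j * R + k with R > max K turns it into an instance of mixing_decouple_ranked.\<close>
lemma mixing_decouple_lex:
  fixes W :: "nat \<Rightarrow> nat \<Rightarrow> 'a \<Rightarrow> complex"
  assumes M: "prob_space M" and J: "finite J" and K: "finite K"
    and Pre: "\<And>j k. j \<in> J \<Longrightarrow> k \<in> K \<Longrightarrow> subalgebra M (Pre j k)"
    and Post: "\<And>j k. j \<in> J \<Longrightarrow> k \<in> K \<Longrightarrow> subalgebra M (Post j k)"
    and alpha: "\<And>j k A B. j \<in> J \<Longrightarrow> k \<in> K \<Longrightarrow> A \<in> sets (Pre j k) \<Longrightarrow> B \<in> sets (Post j k) \<Longrightarrow>
                   \<bar>measure M (A \<inter> B) - measure M A * measure M B\<bar> \<le> a"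
    and Wm: "\<And>j k. j \<in> J \<Longrightarrow> k \<in> K \<Longrightarrow> W j k \<in> borel_measurable (Pre j k)"
    and Wpost: "\<And>j k j' k'. j \<in> J \<Longrightarrow> k \<in> K \<Longrightarrow> j' \<in> J \<Longrightarrow> k' \<in> K \<Longrightarrow> (j < j' \<or> (j = j' \<and> k < k')) \<Longrightarrow>
                   W j' k' \<in> borel_measurable (Post j k)"
    and Wb: "\<And>j k x. j \<in> J \<Longrightarrow> k \<in> K \<Longrightarrow> x \<in> space M \<Longrightarrow> norm (W j k x) \<le> bd j k"
  shows "norm ((\<integral>x. (\<Prod>k\<in>K. \<Prod>j\<in>J. W j k x) \<partial>M) - (\<Prod>k\<in>K. \<Prod>j\<in>J. (\<integral>x. W j k x \<partial>M)))
     \<le> 16 * a * card J * card K * (\<Prod>k\<in>K. \<Prod>j\<in>J. bd j k)"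
proof -
  define R where "R = Suc (Max (insert 0 K))"
  have kR: "\<And>k. k \<in> K \<Longrightarrow> k < R" unfolding R_def using K by (simp add: le_imp_less_Suc)
  define rk where "rk = (\<lambda>(j::nat, k::nat). j * R + k)"
  have rk_less: "rk (j, k) < rk (j', k') \<longleftrightarrow> (j < j' \<or> (j = j' \<and> k < k'))" if "k \<in> K" "k' \<in> K" for j k j' k'
    unfolding rk_def using lex_rank_less_iff[OF kR[OF that(1)] kR[OF that(2)]] by simp
  have rk_inj: "inj_on rk (J \<times> K)"
  proof (rule inj_onI)
    fix p p' assume "p \<in> J \<times> K" "p' \<in> J \<times> K" "rk p = rk p'"
    then obtain j k j' k' where "p = (j, k)" "p' = (j', k')" "k \<in> K" "k' \<in> K" "rk (j,k) = rk (j',k')" by auto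
    moreover have "\<not> rk (j, k) < rk (j', k')" "\<not> rk (j', k') < rk (j, k)" using calculation by auto
    ultimately show "p = p'" using rk_less by (metis linorder_neqE_nat)
  qed
  have glob: "norm ((\<integral>x. (\<Prod>p\<in>J \<times> K. W (fst p) (snd p) x) \<partial>M) - (\<Prod>p\<in>J \<times> K. (\<integral>x. W (fst p) (snd p) x \<partial>M)))
     \<le> 16 * a * card (J \<times> K) * (\<Prod>p\<in>J \<times> K. bd (fst p) (snd p))"
  proof (rule mixing_decouple_ranked[OF M _ rk_inj, where Pre="\<lambda>p. Pre (fst p) (snd p)" and Post="\<lambda>p. Post (fst p) (snd p)"])
    fix p p' assume h: "p \<in> J \<times> K" "p' \<in> J \<times> K" "rk p < rk p'"
    obtain j k j' k' where pp: "p = (j, k)" "p' = (j', k')" by (cases p, cases p') auto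
    have "j < j' \<or> (j = j' \<and> k < k')" using h rk_less[of k k' j j'] unfolding pp by auto
    then show "W (fst p') (snd p') \<in> borel_measurable (Post (fst p) (snd p))"
      using h unfolding pp by (intro Wpost) auto
  qed (use J K Pre Post alpha Wm Wb in \<open>auto simp: mem_Times_iff\<close>)
  have sw: "\<And>f :: nat \<Rightarrow> nat \<Rightarrow> 'c::comm_monoid_mult. (\<Prod>k\<in>K. \<Prod>j\<in>J. f j k) = (\<Prod>p\<in>J \<times> K. f (fst p) (snd p))"
    by (subst prod.swap) (simp add: prod.cartesian_product case_prod_beta)
  have e1: "(\<lambda>x. \<Prod>k\<in>K. \<Prod>j\<in>J. W j k x) = (\<lambda>x. \<Prod>p\<in>J \<times> K. W (fst p) (snd p) x)" by (rule ext) (rule sw)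
  have e2: "(\<Prod>k\<in>K. \<Prod>j\<in>J. (\<integral>x. W j k x \<partial>M)) = (\<Prod>p\<in>J \<times> K. (\<integral>x. W (fst p) (snd p) x \<partial>M))" by (rule sw)
  have e3: "(\<Prod>k\<in>K. \<Prod>j\<in>J. bd j k) = (\<Prod>p\<in>J \<times> K. bd (fst p) (snd p))" by (rule sw)
  show ?thesis using glob unfolding e1 e2 e3 card_cartesian_product by (simp add: mult.assoc)
qed

text \<open>Decoupling between the blocks k only: the joint expectation is compared with the product
  over k of the block expectations, by decoupling completely (mixing_decouple_lex) and then
  re-coupling inside each block (mixing_decouple_ordered).\<close>
lemma mixing_decouple_blocks:
  fixes W :: "nat \<Rightarrow> nat \<Rightarrow> 'a \<Rightarrow> complex"
  assumes M: "prob_space M" and J: "finite J" and K: "finite K" and a0: "0 \<le> a"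
    and Pre: "\<And>j k. j \<in> J \<Longrightarrow> k \<in> K \<Longrightarrow> subalgebra M (Pre j k)"
    and Post: "\<And>j k. j \<in> J \<Longrightarrow> k \<in> K \<Longrightarrow> subalgebra M (Post j k)"
    and alpha: "\<And>j k A B. j \<in> J \<Longrightarrow> k \<in> K \<Longrightarrow> A \<in> sets (Pre j k) \<Longrightarrow> B \<in> sets (Post j k) \<Longrightarrow>
                   \<bar>measure M (A \<inter> B) - measure M A * measure M B\<bar> \<le> a"
    and Wm: "\<And>j k. j \<in> J \<Longrightarrow> k \<in> K \<Longrightarrow> W j k \<in> borel_measurable (Pre j k)"
    and Wpost: "\<And>j k j' k'. j \<in> J \<Longrightarrow> k \<in> K \<Longrightarrow> j' \<in> J \<Longrightarrow> k' \<in> K \<Longrightarrow> (j < j' \<or> (j = j' \<and> k < k')) \<Longrightarrow>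
                   W j' k' \<in> borel_measurable (Post j k)"
    and Wb: "\<And>j k x. j \<in> J \<Longrightarrow> k \<in> K \<Longrightarrow> x \<in> space M \<Longrightarrow> norm (W j k x) \<le> bd j k"
    and bd1: "\<And>j k. j \<in> J \<Longrightarrow> k \<in> K \<Longrightarrow> 1 \<le> bd j k"
  shows "norm ((\<integral>x. (\<Prod>k\<in>K. \<Prod>j\<in>J. W j k x) \<partial>M) - (\<Prod>k\<in>K. \<integral>x. (\<Prod>j\<in>J. W j k x) \<partial>M))
     \<le> 32 * a * card J * card K * (\<Prod>k\<in>K. \<Prod>j\<in>J. bd j k)^2"
proof -
  interpret prob_space M by (rule M)
  define Bk where "Bk = (\<lambda>k. \<Prod>j\<in>J. bd j k)"
  have Bk1: "\<And>k. k \<in> K \<Longrightarrow> 1 \<le> Bk k" unfolding Bk_def using bd1 by (intro prod_ge_1) auto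
  define P where "P = (\<Prod>k\<in>K. Bk k)"
  have P1: "1 \<le> P" unfolding P_def using Bk1 by (intro prod_ge_1) auto
  have BkP: "\<And>k. k \<in> K \<Longrightarrow> Bk k \<le> P"
  proof -
    fix k assume k: "k \<in> K"
    have "P = Bk k * (\<Prod>k'\<in>K - {k}. Bk k')" unfolding P_def using k K by (simp add: prod.remove)
    moreover have "1 \<le> (\<Prod>k'\<in>K - {k}. Bk k')" using Bk1 by (intro prod_ge_1) auto
    ultimately show "Bk k \<le> P" using Bk1[OF k] by (metis mult_le_cancel_left1 order.trans zero_le_one linorder_not_le less_le_not_le)
  qed
  have glob': "norm ((\<integral>x. (\<Prod>k\<in>K. \<Prod>j\<in>J. W j k x) \<partial>M) - (\<Prod>k\<in>K. \<Prod>j\<in>J. (\<integral>x. W j k x \<partial>M)))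
     \<le> 16 * a * card J * card K * P"
    unfolding P_def Bk_def by (rule mixing_decouple_lex[OF M J K Pre Post alpha Wm Wpost Wb])
  have blk: "norm ((\<integral>x. (\<Prod>j\<in>J. W j k x) \<partial>M) - (\<Prod>j\<in>J. (\<integral>x. W j k x \<partial>M))) \<le> 16 * a * card J * Bk k"
    if k: "k \<in> K" for k
    unfolding Bk_def
  proof (rule mixing_decouple_ordered[OF M J, where Pre="\<lambda>j. Pre j k" and Post="\<lambda>j. Post j k"])
    fix j j' assume "j \<in> J" "j' \<in> J" "j < j'"
    then show "W j' k \<in> borel_measurable (Post j k)" using k by (intro Wpost) auto
  qed (use k Pre Post alpha Wm Wb in auto)
  have nB: "norm (\<integral>x. (\<Prod>j\<in>J. W j k x) \<partial>M) \<le> Bk k" if k: "k \<in> K" for k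
    unfolding Bk_def by (rule norm_integral_le_const[OF M]) (use k Wb in \<open>auto simp: prod_norm[symmetric] intro!: prod_mono\<close>)
  have nC: "norm (\<Prod>j\<in>J. (\<integral>x. W j k x \<partial>M)) \<le> Bk k" if k: "k \<in> K" for k
    unfolding Bk_def prod_norm[symmetric]
    by (intro prod_mono conjI norm_ge_zero norm_integral_le_const[OF M]) (use k Wb in auto)
  have BC: "norm ((\<Prod>k\<in>K. \<integral>x. (\<Prod>j\<in>J. W j k x) \<partial>M) - (\<Prod>k\<in>K. \<Prod>j\<in>J. (\<integral>x. W j k x \<partial>M)))
     \<le> P * (\<Sum>k\<in>K. norm ((\<integral>x. (\<Prod>j\<in>J. W j k x) \<partial>M) - (\<Prod>j\<in>J. (\<integral>x. W j k x \<partial>M))))"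
    unfolding P_def by (rule norm_prod_diff_le[OF K]) (use nB nC Bk1 in auto)
  also have "\<dots> \<le> P * (\<Sum>k\<in>K. 16 * a * card J * P)"
    using P1 blk BkP a0 by (intro mult_left_mono sum_mono order.trans[OF blk] mult_left_mono) auto
  also have "\<dots> = 16 * a * card J * card K * P * P" by (simp add: algebra_simps)
  finally have BC: "norm ((\<Prod>k\<in>K. \<integral>x. (\<Prod>j\<in>J. W j k x) \<partial>M) - (\<Prod>k\<in>K. \<Prod>j\<in>J. (\<integral>x. W j k x \<partial>M)))
     \<le> 16 * a * card J * card K * P * P" .
  have c0: "0 \<le> 16 * a * card J * card K" using a0 by simp
  have "16 * a * card J * card K * P \<le> 16 * a * card J * card K * P * P"
    using c0 P1 mult_left_mono[OF P1, of "16 * a * card J * card K * P"] by simp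
  have "norm ((\<integral>x. (\<Prod>k\<in>K. \<Prod>j\<in>J. W j k x) \<partial>M) - (\<Prod>k\<in>K. \<integral>x. (\<Prod>j\<in>J. W j k x) \<partial>M))
      \<le> norm ((\<integral>x. (\<Prod>k\<in>K. \<Prod>j\<in>J. W j k x) \<partial>M) - (\<Prod>k\<in>K. \<Prod>j\<in>J. (\<integral>x. W j k x \<partial>M)))
        + norm ((\<Prod>k\<in>K. \<integral>x. (\<Prod>j\<in>J. W j k x) \<partial>M) - (\<Prod>k\<in>K. \<Prod>j\<in>J. (\<integral>x. W j k x \<partial>M)))"
    using norm_triangle_ineq4[of "(\<integral>x. (\<Prod>k\<in>K. \<Prod>j\<in>J. W j k x) \<partial>M) - (\<Prod>k\<in>K. \<Prod>j\<in>J. (\<integral>x. W j k x \<partial>M))"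
         "(\<Prod>k\<in>K. \<integral>x. (\<Prod>j\<in>J. W j k x) \<partial>M) - (\<Prod>k\<in>K. \<Prod>j\<in>J. (\<integral>x. W j k x \<partial>M))"] by simp
  also have "\<dots> \<le> 16 * a * card J * card K * P + 16 * a * card J * card K * P * P"
    by (rule add_mono[OF glob' BC])
  also have "\<dots> \<le> 32 * a * card J * card K * P^2"
    using \<open>16 * a * card J * card K * P \<le> 16 * a * card J * card K * P * P\<close> by (simp add: power2_eq_square algebra_simps)
  finally show ?thesis unfolding P_def Bk_def .
qed

lemma decoupling_error_expand_sums:
  fixes cc :: "nat \<Rightarrow> 'b \<Rightarrow> complex" and w :: "nat \<Rightarrow> 'b \<Rightarrow> 'a \<Rightarrow> complex"
  assumes M: "prob_space M" and K: "finite K" and A: "\<And>k. k \<in> K \<Longrightarrow> finite (A k)"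
    and wm: "\<And>k a. k \<in> K \<Longrightarrow> a \<in> A k \<Longrightarrow> w k a \<in> borel_measurable M"
    and wb: "\<And>k a x. k \<in> K \<Longrightarrow> a \<in> A k \<Longrightarrow> x \<in> space M \<Longrightarrow> norm (w k a x) \<le> Bw k a"
  shows "norm ((\<integral>x. (\<Prod>k\<in>K. \<Sum>a\<in>A k. cc k a * w k a x) \<partial>M) - (\<Prod>k\<in>K. \<integral>x. (\<Sum>a\<in>A k. cc k a * w k a x) \<partial>M))
    \<le> (\<Sum>\<beta>\<in>PiE K A. (\<Prod>k\<in>K. norm (cc k (\<beta> k))) * norm ((\<integral>x. (\<Prod>k\<in>K. w k (\<beta> k) x) \<partial>M) - (\<Prod>k\<in>K. \<integral>x. w k (\<beta> k) x \<partial>M)))"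
proof -
  interpret prob_space M by (rule M)
  have iw: "integrable M (w k a)" if "k \<in> K" "a \<in> A k" for k a
    by (rule integrable_bounded_prob[OF M wm wb]) (use that in auto)
  have iP: "integrable M (\<lambda>x. \<Prod>k\<in>K. w k (\<beta> k) x)" if "\<beta> \<in> PiE K A" for \<beta>
  proof (rule integrable_bounded_prob[OF M, where B="\<Prod>k\<in>K. Bw k (\<beta> k)"])
    show "(\<lambda>x. \<Prod>k\<in>K. w k (\<beta> k) x) \<in> borel_measurable M"
      using that by (intro borel_measurable_prod wm) auto
    fix x assume "x \<in> space M"
    then show "norm (\<Prod>k\<in>K. w k (\<beta> k) x) \<le> (\<Prod>k\<in>K. Bw k (\<beta> k))"
      unfolding prod_norm[symmetric] using that wb by (intro prod_mono) auto
  qed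
  have e1: "(\<Prod>k\<in>K. \<Sum>a\<in>A k. cc k a * w k a x) = (\<Sum>\<beta>\<in>PiE K A. (\<Prod>k\<in>K. cc k (\<beta> k)) * (\<Prod>k\<in>K. w k (\<beta> k) x))" for x
    by (subst prod_sum_PiE[OF K A]) (auto simp: prod.distrib)
  have l: "(\<integral>x. (\<Prod>k\<in>K. \<Sum>a\<in>A k. cc k a * w k a x) \<partial>M)
      = (\<Sum>\<beta>\<in>PiE K A. (\<Prod>k\<in>K. cc k (\<beta> k)) * (\<integral>x. (\<Prod>k\<in>K. w k (\<beta> k) x) \<partial>M))"
    unfolding e1 by (subst Bochner_Integration.integral_sum) (auto intro: iP)
  have r: "(\<Prod>k\<in>K. \<integral>x. (\<Sum>a\<in>A k. cc k a * w k a x) \<partial>M)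
      = (\<Sum>\<beta>\<in>PiE K A. (\<Prod>k\<in>K. cc k (\<beta> k)) * (\<Prod>k\<in>K. \<integral>x. w k (\<beta> k) x \<partial>M))"
  proof -
    have "(\<Prod>k\<in>K. \<integral>x. (\<Sum>a\<in>A k. cc k a * w k a x) \<partial>M) = (\<Prod>k\<in>K. \<Sum>a\<in>A k. cc k a * (\<integral>x. w k a x \<partial>M))"
      by (intro prod.cong refl, subst Bochner_Integration.integral_sum) (auto intro: iw)
    also have "\<dots> = (\<Sum>\<beta>\<in>PiE K A. (\<Prod>k\<in>K. cc k (\<beta> k)) * (\<Prod>k\<in>K. \<integral>x. w k (\<beta> k) x \<partial>M))"
      by (subst prod_sum_PiE[OF K A]) (auto simp: prod.distrib)
    finally show ?thesis .
  qed
  have "(\<integral>x. (\<Prod>k\<in>K. \<Sum>a\<in>A k. cc k a * w k a x) \<partial>M) - (\<Prod>k\<in>K. \<integral>x. (\<Sum>a\<in>A k. cc k a * w k a x) \<partial>M)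
    = (\<Sum>\<beta>\<in>PiE K A. (\<Prod>k\<in>K. cc k (\<beta> k)) * ((\<integral>x. (\<Prod>k\<in>K. w k (\<beta> k) x) \<partial>M) - (\<Prod>k\<in>K. \<integral>x. w k (\<beta> k) x \<partial>M)))"
    unfolding l r by (simp add: sum_subtractf right_diff_distrib)
  also have "norm \<dots> \<le> (\<Sum>\<beta>\<in>PiE K A. norm ((\<Prod>k\<in>K. cc k (\<beta> k)) * ((\<integral>x. (\<Prod>k\<in>K. w k (\<beta> k) x) \<partial>M) - (\<Prod>k\<in>K. \<integral>x. w k (\<beta> k) x \<partial>M))))"
    by (rule norm_sum)
  also have "\<dots> = (\<Sum>\<beta>\<in>PiE K A. (\<Prod>k\<in>K. norm (cc k (\<beta> k))) * norm ((\<integral>x. (\<Prod>k\<in>K. w k (\<beta> k) x) \<partial>M) - (\<Prod>k\<in>K. \<integral>x. w k (\<beta> k) x \<partial>M)))"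
    by (simp add: norm_mult prod_norm)
  finally show ?thesis .
qed

lemma taylor_product_expand:
  fixes x :: "nat \<Rightarrow> nat \<Rightarrow> real" and s :: real
  assumes G: "finite G" and J: "finite J"
  shows "(\<Prod>n\<in>G. \<Sum>b\<le>d. (\<i> * complex_of_real (s * (\<Prod>j\<in>J. x j n)))^b / fact b)
    = (\<Sum>\<alpha>\<in>PiE G (\<lambda>_. {..d}). (\<Prod>n\<in>G. (\<i> * complex_of_real s)^(\<alpha> n) / fact (\<alpha> n))
         * (\<Prod>j\<in>J. \<Prod>n\<in>G. complex_of_real (x j n)^(\<alpha> n)))"
proof -
  have e: "(\<i> * complex_of_real (s * (\<Prod>j\<in>J. x j n)))^b / fact b
     = ((\<i> * complex_of_real s)^b / fact b) * (\<Prod>j\<in>J. complex_of_real (x j n)^b)" for n b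
    by (simp add: power_mult_distrib prod_power_distrib of_real_prod)
  have "(\<Prod>n\<in>G. \<Sum>b\<le>d. (\<i> * complex_of_real (s * (\<Prod>j\<in>J. x j n)))^b / fact b)
     = (\<Prod>n\<in>G. \<Sum>b\<le>d. ((\<i> * complex_of_real s)^b / fact b) * (\<Prod>j\<in>J. complex_of_real (x j n)^b))"
    unfolding e ..
  also have "\<dots> = (\<Sum>\<alpha>\<in>PiE G (\<lambda>_. {..d}). \<Prod>n\<in>G. ((\<i> * complex_of_real s)^(\<alpha> n) / fact (\<alpha> n)) * (\<Prod>j\<in>J. complex_of_real (x j n)^(\<alpha> n)))"
    by (rule prod_sum_PiE) (use G in auto)
  also have "\<dots> = (\<Sum>\<alpha>\<in>PiE G (\<lambda>_. {..d}). (\<Prod>n\<in>G. (\<i> * complex_of_real s)^(\<alpha> n) / fact (\<alpha> n))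
         * (\<Prod>j\<in>J. \<Prod>n\<in>G. complex_of_real (x j n)^(\<alpha> n)))"
    by (intro sum.cong refl, subst prod.distrib, subst prod.swap[of _ J G], rule refl)
  finally show ?thesis .
qed

lemma taylor_coeff_sum_le_exp:
  fixes c :: real assumes c: "0 \<le> c" and G: "finite G"
  shows "(\<Sum>\<alpha>\<in>PiE G (\<lambda>_. {..d}). \<Prod>n\<in>G. c^(\<alpha> n) / fact (\<alpha> n)) \<le> exp c ^ card G"
proof -
  have "(\<Sum>\<alpha>\<in>PiE G (\<lambda>_. {..d}). \<Prod>n\<in>G. c^(\<alpha> n) / fact (\<alpha> n)) = (\<Prod>n\<in>G. \<Sum>b\<le>d. c^b / fact b)"
    by (rule prod_sum_PiE[symmetric]) (use G in auto)
  also have "\<dots> \<le> (\<Prod>n\<in>G. exp c)"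
    by (intro prod_mono conjI sum_nonneg exp_partial_sum_le c) (use c in auto)
  also have "\<dots> = exp c ^ card G" by simp
  finally show ?thesis .
qed

text \<open>Decoupling of products of Taylor polynomials: after expansion every monomial is a product of
  factors localised in the sigma-algebras of the pairs (j, k), to which mixing_decouple_blocks
  applies; the coefficients are summed with taylor_coeff_sum_le_exp.\<close>
lemma mixing_decouple_taylor:
  fixes x :: "nat \<Rightarrow> nat \<Rightarrow> 'a \<Rightarrow> real" and s :: real and K J :: "nat set" and G :: "nat \<Rightarrow> nat set"
  assumes M: "prob_space M" and J: "finite J" and K: "finite K" and G: "\<And>k. k \<in> K \<Longrightarrow> finite (G k)"
    and a0: "0 \<le> a" and D1: "1 \<le> D1"
    and xb: "\<And>j n \<omega>. j \<in> J \<Longrightarrow> \<omega> \<in> space M \<Longrightarrow> \<bar>x j n \<omega>\<bar> \<le> D1"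
    and Pre: "\<And>j k. j \<in> J \<Longrightarrow> k \<in> K \<Longrightarrow> subalgebra M (Pre j k)"
    and Post: "\<And>j k. j \<in> J \<Longrightarrow> k \<in> K \<Longrightarrow> subalgebra M (Post j k)"
    and alpha: "\<And>j k A B. j \<in> J \<Longrightarrow> k \<in> K \<Longrightarrow> A \<in> sets (Pre j k) \<Longrightarrow> B \<in> sets (Post j k) \<Longrightarrow>
                   \<bar>measure M (A \<inter> B) - measure M A * measure M B\<bar> \<le> a"
    and xPre: "\<And>j k n. j \<in> J \<Longrightarrow> k \<in> K \<Longrightarrow> n \<in> G k \<Longrightarrow> x j n \<in> borel_measurable (Pre j k)"
    and xPost: "\<And>j k j' k' n. j \<in> J \<Longrightarrow> k \<in> K \<Longrightarrow> j' \<in> J \<Longrightarrow> k' \<in> K \<Longrightarrow> (j < j' \<or> (j = j' \<and> k < k')) \<Longrightarrow>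
                   n \<in> G k' \<Longrightarrow> x j' n \<in> borel_measurable (Post j k)"
  shows "norm ((\<integral>\<omega>. (\<Prod>k\<in>K. \<Prod>n\<in>G k. \<Sum>b\<le>d. (\<i> * complex_of_real (s * (\<Prod>j\<in>J. x j n \<omega>)))^b / fact b) \<partial>M)
      - (\<Prod>k\<in>K. \<integral>\<omega>. (\<Prod>n\<in>G k. \<Sum>b\<le>d. (\<i> * complex_of_real (s * (\<Prod>j\<in>J. x j n \<omega>)))^b / fact b) \<partial>M))
    \<le> 32 * a * card J * card K * exp (\<bar>s\<bar> * D1^(2 * card J)) ^ (\<Sum>k\<in>K. card (G k))"
proof -
  interpret prob_space M by (rule M)
  define A where "A = (\<lambda>k. PiE (G k) (\<lambda>_::nat. {..d}))"
  define cc where "cc = (\<lambda>k (\<alpha>::nat\<Rightarrow>nat). \<Prod>n\<in>G k. (\<i> * complex_of_real s)^(\<alpha> n) / fact (\<alpha> n))"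
  define Wf where "Wf = (\<lambda>j k (\<alpha>::nat\<Rightarrow>nat) \<omega>. \<Prod>n\<in>G k. complex_of_real (x j n \<omega>)^(\<alpha> n))"
  define w where "w = (\<lambda>k \<alpha> \<omega>. \<Prod>j\<in>J. Wf j k \<alpha> \<omega>)"
  define bd where "bd = (\<lambda>k (\<alpha>::nat\<Rightarrow>nat). \<Prod>n\<in>G k. D1^(\<alpha> n))"
  have bd1: "1 \<le> bd k \<alpha>" for k \<alpha> unfolding bd_def using D1 by (intro prod_ge_1 one_le_power) auto
  have Wfm: "Wf j k \<alpha> \<in> borel_measurable (Pre j k)" if "j \<in> J" "k \<in> K" for j k \<alpha>
    unfolding Wf_def using that xPre by (intro borel_measurable_prod borel_measurable_power borel_measurable_of_real) auto
  have WfM: "Wf j k \<alpha> \<in> borel_measurable M" if "j \<in> J" "k \<in> K" for j k \<alpha>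
    by (rule measurable_from_subalg[OF Pre[OF that] Wfm[OF that]])
  have Wfb: "norm (Wf j k \<alpha> \<omega>) \<le> bd k \<alpha>" if "j \<in> J" "\<omega> \<in> space M" for j k \<alpha> \<omega>
    unfolding Wf_def bd_def prod_norm[symmetric] norm_power
    using xb[OF that] by (intro prod_mono conjI power_mono) auto
  have eq: "(\<Prod>n\<in>G k. \<Sum>b\<le>d. (\<i> * complex_of_real (s * (\<Prod>j\<in>J. x j n \<omega>)))^b / fact b)
      = (\<Sum>\<alpha>\<in>A k. cc k \<alpha> * w k \<alpha> \<omega>)" if "k \<in> K" for k \<omega>
    unfolding A_def cc_def w_def Wf_def using taylor_product_expand[OF G[OF that] J, where x="\<lambda>j n. x j n \<omega>" and s=s and d=d] by simp
  have eqL: "(\<lambda>\<omega>. \<Prod>k\<in>K. \<Prod>n\<in>G k. \<Sum>b\<le>d. (\<i> * complex_of_real (s * (\<Prod>j\<in>J. x j n \<omega>)))^b / fact b)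
      = (\<lambda>\<omega>. \<Prod>k\<in>K. \<Sum>\<alpha>\<in>A k. cc k \<alpha> * w k \<alpha> \<omega>)"
    using eq by (intro ext prod.cong refl) auto
  have eqR: "(\<Prod>k\<in>K. \<integral>\<omega>. (\<Prod>n\<in>G k. \<Sum>b\<le>d. (\<i> * complex_of_real (s * (\<Prod>j\<in>J. x j n \<omega>)))^b / fact b) \<partial>M)
      = (\<Prod>k\<in>K. \<integral>\<omega>. (\<Sum>\<alpha>\<in>A k. cc k \<alpha> * w k \<alpha> \<omega>) \<partial>M)"
  proof (rule prod.cong[OF refl])
    fix k assume "k \<in> K"
    then have "(\<lambda>\<omega>. \<Prod>n\<in>G k. \<Sum>b\<le>d. (\<i> * complex_of_real (s * (\<Prod>j\<in>J. x j n \<omega>)))^b / fact b)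
      = (\<lambda>\<omega>. \<Sum>\<alpha>\<in>A k. cc k \<alpha> * w k \<alpha> \<omega>)" using eq by auto
    then show "(\<integral>\<omega>. (\<Prod>n\<in>G k. \<Sum>b\<le>d. (\<i> * complex_of_real (s * (\<Prod>j\<in>J. x j n \<omega>)))^b / fact b) \<partial>M)
      = (\<integral>\<omega>. (\<Sum>\<alpha>\<in>A k. cc k \<alpha> * w k \<alpha> \<omega>) \<partial>M)" by simp
  qed
  have expanded: "norm ((\<integral>\<omega>. (\<Prod>k\<in>K. \<Sum>\<alpha>\<in>A k. cc k \<alpha> * w k \<alpha> \<omega>) \<partial>M) - (\<Prod>k\<in>K. \<integral>\<omega>. (\<Sum>\<alpha>\<in>A k. cc k \<alpha> * w k \<alpha> \<omega>) \<partial>M))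
    \<le> (\<Sum>\<beta>\<in>PiE K A. (\<Prod>k\<in>K. norm (cc k (\<beta> k))) * norm ((\<integral>\<omega>. (\<Prod>k\<in>K. w k (\<beta> k) \<omega>) \<partial>M) - (\<Prod>k\<in>K. \<integral>\<omega>. w k (\<beta> k) \<omega> \<partial>M)))"
  proof (rule decoupling_error_expand_sums[OF M K, where Bw="\<lambda>k \<alpha>. \<Prod>j\<in>J. bd k \<alpha>"])
    show "\<And>k. k \<in> K \<Longrightarrow> finite (A k)" unfolding A_def using G by (auto intro: finite_PiE)
    show "\<And>k a. k \<in> K \<Longrightarrow> a \<in> A k \<Longrightarrow> w k a \<in> borel_measurable M"
      unfolding w_def by (intro borel_measurable_prod WfM) auto
    show "\<And>k a \<omega>. k \<in> K \<Longrightarrow> a \<in> A k \<Longrightarrow> \<omega> \<in> space M \<Longrightarrow> norm (w k a \<omega>) \<le> (\<Prod>j\<in>J. bd k a)"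
      unfolding w_def prod_norm[symmetric] using Wfb by (intro prod_mono) auto
  qed
  have monomials: "norm ((\<integral>\<omega>. (\<Prod>k\<in>K. w k (\<beta> k) \<omega>) \<partial>M) - (\<Prod>k\<in>K. \<integral>\<omega>. w k (\<beta> k) \<omega> \<partial>M))
      \<le> 32 * a * card J * card K * (\<Prod>k\<in>K. \<Prod>j\<in>J. bd k (\<beta> k))^2" for \<beta>
    unfolding w_def
  proof (rule mixing_decouple_blocks[OF M J K a0 Pre Post alpha, where W="\<lambda>j k. Wf j k (\<beta> k)" and bd="\<lambda>j k. bd k (\<beta> k)"])
    show "\<And>j k. j \<in> J \<Longrightarrow> k \<in> K \<Longrightarrow> Wf j k (\<beta> k) \<in> borel_measurable (Pre j k)" by (rule Wfm)
    fix j k j' k' assume h: "j \<in> J" "k \<in> K" "j' \<in> J" "k' \<in> K" "j < j' \<or> j = j' \<and> k < k'"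
    show "Wf j' k' (\<beta> k') \<in> borel_measurable (Post j k)"
      unfolding Wf_def using xPost[OF h] by (intro borel_measurable_prod borel_measurable_power borel_measurable_of_real) auto
  qed (use Wfb bd1 in auto)
  define c where "c = \<bar>s\<bar> * D1^(2 * card J)"
  have c0: "0 \<le> c" unfolding c_def using D1 by simp
  have trm: "norm (cc k \<alpha>) * (\<Prod>j\<in>J. bd k \<alpha>)^2 = (\<Prod>n\<in>G k. c^(\<alpha> n) / fact (\<alpha> n))" if "k \<in> K" for k \<alpha>
  proof -
    have "(\<Prod>j\<in>J. bd k \<alpha>)^2 = (\<Prod>n\<in>G k. (D1^(2 * card J))^(\<alpha> n))"
    proof -
      have "(\<Prod>j\<in>J. bd k \<alpha>)^2 = (\<Prod>n\<in>G k. D1^(\<alpha> n)) ^ (card J * 2)"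
        unfolding bd_def by (simp add: power_mult)
      also have "\<dots> = (\<Prod>n\<in>G k. (D1^(\<alpha> n)) ^ (card J * 2))" by (rule prod_power_distrib)
      also have "\<dots> = (\<Prod>n\<in>G k. (D1^(2 * card J))^(\<alpha> n))"
        by (intro prod.cong refl) (simp add: power_mult[symmetric] mult.commute)
      finally show ?thesis .
    qed
    moreover have "norm (cc k \<alpha>) = (\<Prod>n\<in>G k. \<bar>s\<bar>^(\<alpha> n) / fact (\<alpha> n))"
      unfolding cc_def prod_norm[symmetric] by (simp add: norm_divide norm_power norm_mult)
    ultimately show ?thesis unfolding c_def by (simp add: prod.distrib[symmetric] power_mult_distrib)
  qed
  have "(\<Sum>\<beta>\<in>PiE K A. (\<Prod>k\<in>K. norm (cc k (\<beta> k))) * norm ((\<integral>\<omega>. (\<Prod>k\<in>K. w k (\<beta> k) \<omega>) \<partial>M) - (\<Prod>k\<in>K. \<integral>\<omega>. w k (\<beta> k) \<omega> \<partial>M)))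
      \<le> (\<Sum>\<beta>\<in>PiE K A. (\<Prod>k\<in>K. norm (cc k (\<beta> k))) * (32 * a * card J * card K * (\<Prod>k\<in>K. \<Prod>j\<in>J. bd k (\<beta> k))^2))"
    by (intro sum_mono mult_left_mono monomials prod_nonneg) auto
  also have "\<dots> = 32 * a * card J * card K * (\<Sum>\<beta>\<in>PiE K A. \<Prod>k\<in>K. norm (cc k (\<beta> k)) * (\<Prod>j\<in>J. bd k (\<beta> k))^2)"
    by (simp add: sum_distrib_left prod.distrib prod_power_distrib algebra_simps)
  also have "(\<Sum>\<beta>\<in>PiE K A. \<Prod>k\<in>K. norm (cc k (\<beta> k)) * (\<Prod>j\<in>J. bd k (\<beta> k))^2)
      = (\<Prod>k\<in>K. \<Sum>\<alpha>\<in>A k. norm (cc k \<alpha>) * (\<Prod>j\<in>J. bd k \<alpha>)^2)"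
    by (rule prod_sum_PiE[symmetric]) (use K G in \<open>auto simp: A_def intro: finite_PiE\<close>)
  also have "\<dots> \<le> (\<Prod>k\<in>K. exp c ^ card (G k))"
  proof (rule prod_mono, rule conjI)
    fix k assume k: "k \<in> K"
    show "0 \<le> (\<Sum>\<alpha>\<in>A k. norm (cc k \<alpha>) * (\<Prod>j\<in>J. bd k \<alpha>)^2)" by (intro sum_nonneg) auto
    have "(\<Sum>\<alpha>\<in>A k. norm (cc k \<alpha>) * (\<Prod>j\<in>J. bd k \<alpha>)^2) = (\<Sum>\<alpha>\<in>A k. \<Prod>n\<in>G k. c^(\<alpha> n) / fact (\<alpha> n))"
      using trm[OF k] by simp
    also have "\<dots> \<le> exp c ^ card (G k)" unfolding A_def by (rule taylor_coeff_sum_le_exp[OF c0 G[OF k]])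
    finally show "(\<Sum>\<alpha>\<in>A k. norm (cc k \<alpha>) * (\<Prod>j\<in>J. bd k \<alpha>)^2) \<le> exp c ^ card (G k)" .
  qed
  also have "(\<Prod>k\<in>K. exp c ^ card (G k)) = exp c ^ (\<Sum>k\<in>K. card (G k))" by (simp add: power_sum)
  finally have fin: "(\<Sum>\<beta>\<in>PiE K A. (\<Prod>k\<in>K. norm (cc k (\<beta> k))) * norm ((\<integral>\<omega>. (\<Prod>k\<in>K. w k (\<beta> k) \<omega>) \<partial>M) - (\<Prod>k\<in>K. \<integral>\<omega>. w k (\<beta> k) \<omega> \<partial>M)))
      \<le> 32 * a * card J * card K * exp c ^ (\<Sum>k\<in>K. card (G k))"
    using a0 by (simp add: mult_left_mono)
  show ?thesis unfolding eqL eqR using order.trans[OF expanded fin] unfolding c_def .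
qed

lemma decoupling_error_perturb:
  fixes \<Phi> \<Psi> :: "nat \<Rightarrow> 'a \<Rightarrow> complex"
  assumes M: "prob_space M" and K: "finite K"
    and m1: "\<And>k. k \<in> K \<Longrightarrow> \<Phi> k \<in> borel_measurable M" and m2: "\<And>k. k \<in> K \<Longrightarrow> \<Psi> k \<in> borel_measurable M"
    and b1: "\<And>k \<omega>. k \<in> K \<Longrightarrow> \<omega> \<in> space M \<Longrightarrow> norm (\<Phi> k \<omega>) \<le> B k"
    and b2: "\<And>k \<omega>. k \<in> K \<Longrightarrow> \<omega> \<in> space M \<Longrightarrow> norm (\<Psi> k \<omega>) \<le> B k"
    and B1: "\<And>k. k \<in> K \<Longrightarrow> 1 \<le> B k"
  shows "norm ((\<integral>\<omega>. (\<Prod>k\<in>K. \<Phi> k \<omega>) \<partial>M) - (\<Prod>k\<in>K. \<integral>\<omega>. \<Phi> k \<omega> \<partial>M))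
     \<le> norm ((\<integral>\<omega>. (\<Prod>k\<in>K. \<Psi> k \<omega>) \<partial>M) - (\<Prod>k\<in>K. \<integral>\<omega>. \<Psi> k \<omega> \<partial>M))
       + 2 * (\<Prod>k\<in>K. B k) * (\<Sum>k\<in>K. \<integral>\<omega>. norm (\<Phi> k \<omega> - \<Psi> k \<omega>) \<partial>M)"
proof -
  interpret prob_space M by (rule M)
  have i1: "integrable M (\<Phi> k)" if "k \<in> K" for k
    by (rule integrable_bounded_prob[OF M m1 b1]) (use that in auto)
  have i2: "integrable M (\<Psi> k)" if "k \<in> K" for k
    by (rule integrable_bounded_prob[OF M m2 b2]) (use that in auto)
  have iP1: "integrable M (\<lambda>\<omega>. \<Prod>k\<in>K. \<Phi> k \<omega>)"
    by (rule integrable_bounded_prob[OF M, where B="\<Prod>k\<in>K. B k"])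
       (use m1 b1 in \<open>auto intro!: borel_measurable_prod prod_mono simp: prod_norm[symmetric]\<close>)
  have iP2: "integrable M (\<lambda>\<omega>. \<Prod>k\<in>K. \<Psi> k \<omega>)"
    by (rule integrable_bounded_prob[OF M, where B="\<Prod>k\<in>K. B k"])
       (use m2 b2 in \<open>auto intro!: borel_measurable_prod prod_mono simp: prod_norm[symmetric]\<close>)
  have id: "integrable M (\<lambda>\<omega>. norm (\<Phi> k \<omega> - \<Psi> k \<omega>))" if "k \<in> K" for k
    using i1[OF that] i2[OF that] by auto
  have PB: "0 \<le> (\<Prod>k\<in>K. B k)" using B1 by (intro prod_nonneg) (auto intro: order.trans[OF zero_le_one])
  have d1: "norm ((\<integral>\<omega>. (\<Prod>k\<in>K. \<Phi> k \<omega>) \<partial>M) - (\<integral>\<omega>. (\<Prod>k\<in>K. \<Psi> k \<omega>) \<partial>M))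
      \<le> (\<Prod>k\<in>K. B k) * (\<Sum>k\<in>K. \<integral>\<omega>. norm (\<Phi> k \<omega> - \<Psi> k \<omega>) \<partial>M)"
  proof -
    have "norm ((\<integral>\<omega>. (\<Prod>k\<in>K. \<Phi> k \<omega>) \<partial>M) - (\<integral>\<omega>. (\<Prod>k\<in>K. \<Psi> k \<omega>) \<partial>M))
        = norm (\<integral>\<omega>. (\<Prod>k\<in>K. \<Phi> k \<omega>) - (\<Prod>k\<in>K. \<Psi> k \<omega>) \<partial>M)" using iP1 iP2 by simp
    also have "\<dots> \<le> (\<integral>\<omega>. norm ((\<Prod>k\<in>K. \<Phi> k \<omega>) - (\<Prod>k\<in>K. \<Psi> k \<omega>)) \<partial>M)" by (rule integral_norm_bound)
    also have "\<dots> \<le> (\<integral>\<omega>. (\<Prod>k\<in>K. B k) * (\<Sum>k\<in>K. norm (\<Phi> k \<omega> - \<Psi> k \<omega>)) \<partial>M)"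
    proof (rule integral_mono)
      show "integrable M (\<lambda>\<omega>. norm ((\<Prod>k\<in>K. \<Phi> k \<omega>) - (\<Prod>k\<in>K. \<Psi> k \<omega>)))" using iP1 iP2 by auto
      show "integrable M (\<lambda>\<omega>. (\<Prod>k\<in>K. B k) * (\<Sum>k\<in>K. norm (\<Phi> k \<omega> - \<Psi> k \<omega>)))"
        using id by (intro integrable_mult_right integrable_sum) auto
      fix \<omega> assume "\<omega> \<in> space M"
      then show "norm ((\<Prod>k\<in>K. \<Phi> k \<omega>) - (\<Prod>k\<in>K. \<Psi> k \<omega>)) \<le> (\<Prod>k\<in>K. B k) * (\<Sum>k\<in>K. norm (\<Phi> k \<omega> - \<Psi> k \<omega>))"
        by (intro norm_prod_diff_le K) (use b1 b2 B1 in auto)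
    qed
    also have "\<dots> = (\<Prod>k\<in>K. B k) * (\<Sum>k\<in>K. \<integral>\<omega>. norm (\<Phi> k \<omega> - \<Psi> k \<omega>) \<partial>M)"
      using id by (simp add: Bochner_Integration.integral_sum)
    finally show ?thesis .
  qed
  have d2: "norm ((\<Prod>k\<in>K. \<integral>\<omega>. \<Phi> k \<omega> \<partial>M) - (\<Prod>k\<in>K. \<integral>\<omega>. \<Psi> k \<omega> \<partial>M))
      \<le> (\<Prod>k\<in>K. B k) * (\<Sum>k\<in>K. \<integral>\<omega>. norm (\<Phi> k \<omega> - \<Psi> k \<omega>) \<partial>M)"
  proof -
    have "norm ((\<Prod>k\<in>K. \<integral>\<omega>. \<Phi> k \<omega> \<partial>M) - (\<Prod>k\<in>K. \<integral>\<omega>. \<Psi> k \<omega> \<partial>M))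
       \<le> (\<Prod>k\<in>K. B k) * (\<Sum>k\<in>K. norm ((\<integral>\<omega>. \<Phi> k \<omega> \<partial>M) - (\<integral>\<omega>. \<Psi> k \<omega> \<partial>M)))"
      by (intro norm_prod_diff_le K norm_integral_le_const[OF M]) (use b1 b2 B1 in auto)
    also have "\<dots> \<le> (\<Prod>k\<in>K. B k) * (\<Sum>k\<in>K. \<integral>\<omega>. norm (\<Phi> k \<omega> - \<Psi> k \<omega>) \<partial>M)"
    proof (intro mult_left_mono sum_mono PB)
      fix k assume k: "k \<in> K"
      have "norm ((\<integral>\<omega>. \<Phi> k \<omega> \<partial>M) - (\<integral>\<omega>. \<Psi> k \<omega> \<partial>M)) = norm (\<integral>\<omega>. \<Phi> k \<omega> - \<Psi> k \<omega> \<partial>M)"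
        using i1[OF k] i2[OF k] by simp
      also have "\<dots> \<le> (\<integral>\<omega>. norm (\<Phi> k \<omega> - \<Psi> k \<omega>) \<partial>M)" by (rule integral_norm_bound)
      finally show "norm ((\<integral>\<omega>. \<Phi> k \<omega> \<partial>M) - (\<integral>\<omega>. \<Psi> k \<omega> \<partial>M)) \<le> (\<integral>\<omega>. norm (\<Phi> k \<omega> - \<Psi> k \<omega>) \<partial>M)" .
    qed
    finally show ?thesis .
  qed
  let ?a = "(\<integral>\<omega>. (\<Prod>k\<in>K. \<Phi> k \<omega>) \<partial>M)" and ?b = "(\<Prod>k\<in>K. \<integral>\<omega>. \<Phi> k \<omega> \<partial>M)"
  let ?c = "(\<integral>\<omega>. (\<Prod>k\<in>K. \<Psi> k \<omega>) \<partial>M)" and ?d = "(\<Prod>k\<in>K. \<integral>\<omega>. \<Psi> k \<omega> \<partial>M)"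
  have "norm (?a - ?b) \<le> norm (?c - ?d) + norm (?a - ?c) + norm (?b - ?d)"
    using norm_triangle_ineq[of "?c - ?d" "(?a - ?c) - (?b - ?d)"] norm_triangle_ineq4[of "?a - ?c" "?b - ?d"]
    by (simp add: algebra_simps)
  then show ?thesis using d1 d2 by simp
qed

subsection \<open>The three-step decoupling estimate for abstract blocks\<close>

text \<open>The conditional expectation of f given G, clipped to [-c, c].
  It stays measurable with respect to G but, unlike the conditional expectation itself,
  is bounded everywhere (not only almost everywhere).\<close>
definition trunc_cond_exp :: "'a measure \<Rightarrow> 'a measure \<Rightarrow> real \<Rightarrow> ('a \<Rightarrow> real) \<Rightarrow> 'a \<Rightarrow> real" where
  "trunc_cond_exp M G c f \<omega> = max (- c) (min c (real_cond_exp M G f \<omega>))"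

lemma trunc_cond_exp_measurable: "trunc_cond_exp M G c f \<in> borel_measurable G"
  unfolding trunc_cond_exp_def by measurable

lemma trunc_cond_exp_abs_le: "0 \<le> c \<Longrightarrow> \<bar>trunc_cond_exp M G c f \<omega>\<bar> \<le> c"
  unfolding trunc_cond_exp_def by auto

lemma trunc_cond_exp_approx:
  assumes M: "prob_space M" and G: "subalgebra M G" and f: "f \<in> borel_measurable M"
    and fb: "AE \<omega> in M. \<bar>f \<omega>\<bar> \<le> c" and c: "0 \<le> c"
  shows "integrable M (\<lambda>\<omega>. \<bar>f \<omega> - trunc_cond_exp M G c f \<omega>\<bar>)"
    and "(\<integral>\<omega>. \<bar>f \<omega> - trunc_cond_exp M G c f \<omega>\<bar> \<partial>M) \<le> (\<integral>\<omega>. \<bar>f \<omega> - real_cond_exp M G f \<omega>\<bar> \<partial>M)"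
proof -
  interpret prob_space M by (rule M)
  interpret S: finite_measure_subalgebra M G by unfold_locales (rule G)
  have tM: "trunc_cond_exp M G c f \<in> borel_measurable M"
    by (rule measurable_from_subalg[OF G trunc_cond_exp_measurable])
  show int: "integrable M (\<lambda>\<omega>. \<bar>f \<omega> - trunc_cond_exp M G c f \<omega>\<bar>)"
  proof (rule integrable_const_bound[where B="c + c"])
    show "AE \<omega> in M. norm \<bar>f \<omega> - trunc_cond_exp M G c f \<omega>\<bar> \<le> c + c"
      using fb
    proof eventually_elim
      case (elim \<omega>)
      moreover have "\<bar>trunc_cond_exp M G c f \<omega>\<bar> \<le> c" by (rule trunc_cond_exp_abs_le[OF c])
      ultimately show ?case by simp
    qed
  qed (use f tM in measurable)
  have iX: "integrable M f" by (rule integrable_const_bound[where B=c]) (use fb f in auto)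
  show "(\<integral>\<omega>. \<bar>f \<omega> - trunc_cond_exp M G c f \<omega>\<bar> \<partial>M) \<le> (\<integral>\<omega>. \<bar>f \<omega> - real_cond_exp M G f \<omega>\<bar> \<partial>M)"
  proof (rule integral_mono_AE[OF int])
    show "integrable M (\<lambda>\<omega>. \<bar>f \<omega> - real_cond_exp M G f \<omega>\<bar>)"
      using iX S.real_cond_exp_int(1)[OF iX] by auto
    show "AE \<omega> in M. \<bar>f \<omega> - trunc_cond_exp M G c f \<omega>\<bar> \<le> \<bar>f \<omega> - real_cond_exp M G f \<omega>\<bar>"
      using fb by eventually_elim (auto simp: trunc_cond_exp_def max_def min_def)
  qed
qed

lemma iexp_prod_diff_le:
  fixes a b :: "'i \<Rightarrow> real"
  assumes "finite G"
  shows "norm ((\<Prod>n\<in>G. exp (\<i> * complex_of_real (a n))) - (\<Prod>n\<in>G. exp (\<i> * complex_of_real (b n))))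
    \<le> (\<Sum>n\<in>G. \<bar>a n - b n\<bar>)"
proof -
  have "norm ((\<Prod>n\<in>G. exp (\<i> * complex_of_real (a n))) - (\<Prod>n\<in>G. exp (\<i> * complex_of_real (b n))))
      \<le> (\<Prod>n\<in>G. 1) * (\<Sum>n\<in>G. norm (exp (\<i> * complex_of_real (a n)) - exp (\<i> * complex_of_real (b n))))"
    by (rule norm_prod_diff_le[OF assms]) auto
  also have "\<dots> \<le> (\<Sum>n\<in>G. \<bar>a n - b n\<bar>)"
    by (simp add: sum_mono iexp_diff_le)
  finally show ?thesis .
qed

lemma taylor_prod_error:
  fixes y :: "'i \<Rightarrow> real"
  assumes G: "finite G" and y: "\<And>n. n \<in> G \<Longrightarrow> \<bar>y n\<bar> \<le> c"
  shows "norm ((\<Prod>n\<in>G. exp (\<i> * complex_of_real (y n))) - (\<Prod>n\<in>G. \<Sum>b\<le>d. (\<i> * complex_of_real (y n))^b / fact b))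
    \<le> exp c ^ card G * (real (card G) * (c ^ Suc d / fact (Suc d)))"
proof -
  have c: "0 \<le> c" if "n \<in> G" for n using y[OF that] by linarith
  have "norm ((\<Prod>n\<in>G. exp (\<i> * complex_of_real (y n))) - (\<Prod>n\<in>G. \<Sum>b\<le>d. (\<i> * complex_of_real (y n))^b / fact b))
      \<le> (\<Prod>n\<in>G. exp c) * (\<Sum>n\<in>G. norm (exp (\<i> * complex_of_real (y n)) - (\<Sum>b\<le>d. (\<i> * complex_of_real (y n))^b / fact b)))"
  proof (rule norm_prod_diff_le[OF G])
    fix n assume n: "n \<in> G"
    show "norm (exp (\<i> * complex_of_real (y n))) \<le> exp c" "1 \<le> exp c" using c[OF n] by auto
    show "norm (\<Sum>b\<le>d. (\<i> * complex_of_real (y n))^b / fact b) \<le> exp c"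
      using taylor_poly_norm_le[where x="y n" and d=d] y[OF n] by (meson exp_le_cancel_iff order_trans)
  qed
  also have "\<dots> \<le> (\<Prod>n\<in>G. exp c) * (\<Sum>n\<in>G. c ^ Suc d / fact (Suc d))"
  proof (intro mult_left_mono sum_mono prod_nonneg)
    fix n assume n: "n \<in> G"
    have "norm (exp (\<i> * complex_of_real (y n)) - (\<Sum>b\<le>d. (\<i> * complex_of_real (y n))^b / fact b))
        \<le> \<bar>y n\<bar> ^ Suc d / fact (Suc d)" by (rule iexp_approx1)
    also have "\<dots> \<le> c ^ Suc d / fact (Suc d)" using y[OF n] by (intro divide_right_mono power_mono) auto
    finally show "norm (exp (\<i> * complex_of_real (y n)) - (\<Sum>b\<le>d. (\<i> * complex_of_real (y n))^b / fact b))
        \<le> c ^ Suc d / fact (Suc d)" .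
  qed auto
  finally show ?thesis by simp
qed

lemma phase_blocks_error:
  fixes a b R :: "nat \<Rightarrow> 'a \<Rightarrow> real" and \<Gamma> :: "nat \<Rightarrow> nat set" and e :: real
  assumes M: "prob_space M" and K: "finite K" and \<Gamma>fin: "\<And>k. finite (\<Gamma> k)"
    and am: "\<And>n. a n \<in> borel_measurable M" and bm: "\<And>n. b n \<in> borel_measurable M"
    and ab: "AE \<omega> in M. \<forall>n. \<bar>a n \<omega> - b n \<omega>\<bar> \<le> R n \<omega>"
    and iR: "\<And>n. integrable M (R n)" and intR: "\<And>n. (\<integral>\<omega>. R n \<omega> \<partial>M) \<le> e"
  shows "(\<Sum>k\<in>K. \<integral>\<omega>. norm ((\<Prod>n\<in>\<Gamma> k. exp (\<i> * complex_of_real (a n \<omega>)))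
                           - (\<Prod>n\<in>\<Gamma> k. exp (\<i> * complex_of_real (b n \<omega>)))) \<partial>M)
    \<le> (\<Sum>k\<in>K. card (\<Gamma> k)) * e"
proof -
  interpret prob_space M by (rule M)
  have "(\<integral>\<omega>. norm ((\<Prod>n\<in>\<Gamma> k. exp (\<i> * complex_of_real (a n \<omega>)))
                   - (\<Prod>n\<in>\<Gamma> k. exp (\<i> * complex_of_real (b n \<omega>)))) \<partial>M) \<le> card (\<Gamma> k) * e" for k
  proof -
    have pw: "AE \<omega> in M. norm ((\<Prod>n\<in>\<Gamma> k. exp (\<i> * complex_of_real (a n \<omega>)))
                   - (\<Prod>n\<in>\<Gamma> k. exp (\<i> * complex_of_real (b n \<omega>)))) \<le> (\<Sum>n\<in>\<Gamma> k. R n \<omega>)"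
      using ab by eventually_elim (intro order.trans[OF iexp_prod_diff_le[OF \<Gamma>fin]] sum_mono, blast)
    have n1: "norm (\<Prod>n\<in>\<Gamma> k. exp (\<i> * complex_of_real (f n))) = 1" for f :: "nat \<Rightarrow> real"
      by (simp add: prod_norm[symmetric])
    have "integrable M (\<lambda>\<omega>. norm ((\<Prod>n\<in>\<Gamma> k. exp (\<i> * complex_of_real (a n \<omega>)))
                   - (\<Prod>n\<in>\<Gamma> k. exp (\<i> * complex_of_real (b n \<omega>)))))"
    proof (rule integrable_bounded_prob[OF M, where B=2])
      show "(\<lambda>\<omega>. norm ((\<Prod>n\<in>\<Gamma> k. exp (\<i> * complex_of_real (a n \<omega>)))
                   - (\<Prod>n\<in>\<Gamma> k. exp (\<i> * complex_of_real (b n \<omega>))))) \<in> borel_measurable M"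
        using am bm by measurable
      show "norm (norm ((\<Prod>n\<in>\<Gamma> k. exp (\<i> * complex_of_real (a n \<omega>)))
                   - (\<Prod>n\<in>\<Gamma> k. exp (\<i> * complex_of_real (b n \<omega>))))) \<le> 2" for \<omega>
        using norm_triangle_ineq4[of "\<Prod>n\<in>\<Gamma> k. exp (\<i> * complex_of_real (a n \<omega>))"
            "\<Prod>n\<in>\<Gamma> k. exp (\<i> * complex_of_real (b n \<omega>))"] n1[of "\<lambda>n. a n \<omega>"] n1[of "\<lambda>n. b n \<omega>"]
        by simp
    qed
    then have "(\<integral>\<omega>. norm ((\<Prod>n\<in>\<Gamma> k. exp (\<i> * complex_of_real (a n \<omega>)))
                   - (\<Prod>n\<in>\<Gamma> k. exp (\<i> * complex_of_real (b n \<omega>)))) \<partial>M) \<le> (\<integral>\<omega>. (\<Sum>n\<in>\<Gamma> k. R n \<omega>) \<partial>M)"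
      by (rule integral_mono_AE[OF _ _ pw]) (use iR in auto)
    also have "\<dots> = (\<Sum>n\<in>\<Gamma> k. \<integral>\<omega>. R n \<omega> \<partial>M)"
      using iR by (rule Bochner_Integration.integral_sum)
    also have "\<dots> \<le> (\<Sum>n\<in>\<Gamma> k. e)" by (intro sum_mono intR)
    finally show ?thesis by simp
  qed
  then have "(\<Sum>k\<in>K. \<integral>\<omega>. norm ((\<Prod>n\<in>\<Gamma> k. exp (\<i> * complex_of_real (a n \<omega>)))
                   - (\<Prod>n\<in>\<Gamma> k. exp (\<i> * complex_of_real (b n \<omega>)))) \<partial>M) \<le> (\<Sum>k\<in>K. card (\<Gamma> k) * e)"
    by (rule sum_mono)
  also have "\<dots> = (\<Sum>k\<in>K. card (\<Gamma> k)) * e" by (simp only: of_nat_sum sum_distrib_right)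
  finally show ?thesis .
qed

lemma taylor_blocks_error:
  fixes y :: "nat \<Rightarrow> 'a \<Rightarrow> real" and \<Gamma> :: "nat \<Rightarrow> nat set"
  assumes M: "prob_space M" and K: "finite K" and \<Gamma>fin: "\<And>k. finite (\<Gamma> k)"
    and ym: "\<And>n. y n \<in> borel_measurable M" and yb: "\<And>n \<omega>. \<bar>y n \<omega>\<bar> \<le> c"
  shows "(\<Sum>k\<in>K. \<integral>\<omega>. norm ((\<Prod>n\<in>\<Gamma> k. exp (\<i> * complex_of_real (y n \<omega>)))
                           - (\<Prod>n\<in>\<Gamma> k. \<Sum>b\<le>d. (\<i> * complex_of_real (y n \<omega>))^b / fact b)) \<partial>M)
    \<le> exp c ^ (\<Sum>k\<in>K. card (\<Gamma> k)) * ((\<Sum>k\<in>K. card (\<Gamma> k)) * (c ^ Suc d / fact (Suc d)))"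
proof -
  interpret prob_space M by (rule M)
  define S where "S = (\<Sum>k\<in>K. card (\<Gamma> k))"
  define r where "r = c ^ Suc d / fact (Suc d)"
  have c: "0 \<le> c" using yb[of 0 undefined] by linarith
  have r0: "0 \<le> r" unfolding r_def using c by simp
  have "(\<integral>\<omega>. norm ((\<Prod>n\<in>\<Gamma> k. exp (\<i> * complex_of_real (y n \<omega>)))
                   - (\<Prod>n\<in>\<Gamma> k. \<Sum>b\<le>d. (\<i> * complex_of_real (y n \<omega>))^b / fact b)) \<partial>M) \<le> exp c ^ S * (card (\<Gamma> k) * r)"
    if k: "k \<in> K" for k
  proof -
    have pow: "exp c ^ card (\<Gamma> k) \<le> exp c ^ S"
      unfolding S_def using k K c by (intro power_increasing member_le_sum) auto
    have pw: "norm ((\<Prod>n\<in>\<Gamma> k. exp (\<i> * complex_of_real (y n \<omega>)))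
                   - (\<Prod>n\<in>\<Gamma> k. \<Sum>b\<le>d. (\<i> * complex_of_real (y n \<omega>))^b / fact b)) \<le> exp c ^ S * (card (\<Gamma> k) * r)" for \<omega>
    proof -
      have "norm ((\<Prod>n\<in>\<Gamma> k. exp (\<i> * complex_of_real (y n \<omega>)))
                   - (\<Prod>n\<in>\<Gamma> k. \<Sum>b\<le>d. (\<i> * complex_of_real (y n \<omega>))^b / fact b))
          \<le> exp c ^ card (\<Gamma> k) * (card (\<Gamma> k) * r)"
        unfolding r_def by (rule taylor_prod_error[OF \<Gamma>fin yb])
      also have "\<dots> \<le> exp c ^ S * (card (\<Gamma> k) * r)" using pow r0 by (intro mult_right_mono) auto
      finally show ?thesis .
    qed
    have "integrable M (\<lambda>\<omega>. norm ((\<Prod>n\<in>\<Gamma> k. exp (\<i> * complex_of_real (y n \<omega>)))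
                   - (\<Prod>n\<in>\<Gamma> k. \<Sum>b\<le>d. (\<i> * complex_of_real (y n \<omega>))^b / fact b)))"
      using ym pw by (intro integrable_bounded_prob[OF M]) (measurable, auto)
    then have "(\<integral>\<omega>. norm ((\<Prod>n\<in>\<Gamma> k. exp (\<i> * complex_of_real (y n \<omega>)))
                   - (\<Prod>n\<in>\<Gamma> k. \<Sum>b\<le>d. (\<i> * complex_of_real (y n \<omega>))^b / fact b)) \<partial>M)
        \<le> (\<integral>\<omega>. exp c ^ S * (card (\<Gamma> k) * r) \<partial>M)"
      by (rule integral_mono) (use pw in auto)
    then show ?thesis by (simp add: prob_space)
  qed
  then have "(\<Sum>k\<in>K. \<integral>\<omega>. norm ((\<Prod>n\<in>\<Gamma> k. exp (\<i> * complex_of_real (y n \<omega>)))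
                   - (\<Prod>n\<in>\<Gamma> k. \<Sum>b\<le>d. (\<i> * complex_of_real (y n \<omega>))^b / fact b)) \<partial>M)
      \<le> (\<Sum>k\<in>K. exp c ^ S * (card (\<Gamma> k) * r))"
    by (rule sum_mono)
  also have "\<dots> = exp c ^ S * (S * r)"
    by (simp only: S_def of_nat_sum sum_distrib_left sum_distrib_right)
  finally show ?thesis unfolding S_def r_def .
qed

lemma localized_taylor_decoupling:
  fixes M :: "'a measure" and x :: "nat \<Rightarrow> nat \<Rightarrow> 'a \<Rightarrow> real" and F :: "ereal \<Rightarrow> ereal \<Rightarrow> 'a measure"
    and q :: "nat \<Rightarrow> nat \<Rightarrow> nat" and \<Gamma> :: "nat \<Rightarrow> nat set" and lo hi :: "nat \<Rightarrow> nat \<Rightarrow> nat"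
  assumes M: "prob_space M"
    and subalg: "\<And>k l'. subalgebra M (F k l')"
    and mono: "\<And>k l' k' l''. k' \<le> k \<Longrightarrow> l' \<le> l'' \<Longrightarrow> sets (F k l') \<subseteq> sets (F k' l'')"
    and alph: "\<And>k A B. A \<in> sets (F (-\<infinity>) (ereal (real k))) \<Longrightarrow> B \<in> sets (F (ereal (real (k + g))) \<infinity>) \<Longrightarrow>
                 \<bar>measure M (A \<inter> B) - measure M A * measure M B\<bar> \<le> aa"
    and aa0: "0 \<le> aa" and D1: "1 \<le> D1"
    and xF: "\<And>j n. j \<in> {1..l} \<Longrightarrow> x j n \<in> borel_measurable (F (ereal (real (q j n) - real h)) (ereal (real (q j n) + real h)))"
    and xb: "\<And>j n \<omega>. j \<in> {1..l} \<Longrightarrow> \<bar>x j n \<omega>\<bar> \<le> D1"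
    and \<Gamma>fin: "\<And>k. finite (\<Gamma> k)"
    and geo1: "\<And>j k n. j \<in> {1..l} \<Longrightarrow> k \<in> {1..m} \<Longrightarrow> n \<in> \<Gamma> k \<Longrightarrow> lo j k \<le> q j n \<and> q j n \<le> hi j k"
    and geo2: "\<And>j k j' k'. j \<in> {1..l} \<Longrightarrow> j' \<in> {1..l} \<Longrightarrow> k \<in> {1..m} \<Longrightarrow> k' \<in> {1..m} \<Longrightarrow>
                 (j < j' \<or> (j = j' \<and> k < k')) \<Longrightarrow> real (hi j k + h + g) \<le> real (lo j' k') - real h"
  shows "norm ((\<integral>\<omega>. (\<Prod>k=1..m. \<Prod>n\<in>\<Gamma> k. \<Sum>b\<le>d. (\<i> * complex_of_real (s * (\<Prod>j=1..l. x j n \<omega>)))^b / fact b) \<partial>M)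
      - (\<Prod>k=1..m. \<integral>\<omega>. (\<Prod>n\<in>\<Gamma> k. \<Sum>b\<le>d. (\<i> * complex_of_real (s * (\<Prod>j=1..l. x j n \<omega>)))^b / fact b) \<partial>M))
    \<le> 32 * aa * l * m * exp (\<bar>s\<bar> * D1^(2 * l)) ^ (\<Sum>k=1..m. card (\<Gamma> k))"
proof -
  have "norm ((\<integral>\<omega>. (\<Prod>k\<in>{1..m}. \<Prod>n\<in>\<Gamma> k. \<Sum>b\<le>d. (\<i> * complex_of_real (s * (\<Prod>j\<in>{1..l}. x j n \<omega>)))^b / fact b) \<partial>M)
      - (\<Prod>k\<in>{1..m}. \<integral>\<omega>. (\<Prod>n\<in>\<Gamma> k. \<Sum>b\<le>d. (\<i> * complex_of_real (s * (\<Prod>j\<in>{1..l}. x j n \<omega>)))^b / fact b) \<partial>M))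
      \<le> 32 * aa * card {1..l} * card {1..m} * exp (\<bar>s\<bar> * D1^(2 * card {1..l})) ^ (\<Sum>k\<in>{1..m}. card (\<Gamma> k))"
  proof (rule mixing_decouple_taylor[OF M _ _ _ aa0 D1, where Pre="\<lambda>j k. F (-\<infinity>) (ereal (real (hi j k + h)))"
        and Post="\<lambda>j k. F (ereal (real (hi j k + h + g))) \<infinity>"])
    fix j k A B assume "A \<in> sets (F (-\<infinity>) (ereal (real (hi j k + h))))"
      "B \<in> sets (F (ereal (real (hi j k + h + g))) \<infinity>)"
    then show "\<bar>measure M (A \<inter> B) - measure M A * measure M B\<bar> \<le> aa"
      using alph[of A "hi j k + h" B] by (simp add: add.assoc)
  next
    fix j k n assume h1: "j \<in> {1..l}" "k \<in> {1..m}" "n \<in> \<Gamma> k"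
    show "x j n \<in> borel_measurable (F (-\<infinity>) (ereal (real (hi j k + h))))"
    proof (rule measurable_sets_mono[OF _ subalg _ xF[OF h1(1)]])
      show "sets (F (ereal (real (q j n) - real h)) (ereal (real (q j n) + real h))) \<subseteq> sets (F (-\<infinity>) (ereal (real (hi j k + h))))"
        using geo1[OF h1] by (intro mono) auto
    qed (simp add: subalg)
  next
    fix j k j' k' n assume h1: "j \<in> {1..l}" "k \<in> {1..m}" "j' \<in> {1..l}" "k' \<in> {1..m}"
      "j < j' \<or> j = j' \<and> k < k'" "n \<in> \<Gamma> k'"
    show "x j' n \<in> borel_measurable (F (ereal (real (hi j k + h + g))) \<infinity>)"
    proof (rule measurable_sets_mono[OF _ subalg _ xF[OF h1(3)]])
      have "real (hi j k + h + g) \<le> real (lo j' k') - real h" using geo2 h1 by blast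
      moreover have "lo j' k' \<le> q j' n" using geo1 h1 by blast
      ultimately have "real (hi j k + h + g) \<le> real (q j' n) - real h" by linarith
      then show "sets (F (ereal (real (q j' n) - real h)) (ereal (real (q j' n) + real h))) \<subseteq> sets (F (ereal (real (hi j k + h + g))) \<infinity>)"
        by (intro mono) auto
    qed (simp add: subalg)
  qed (use \<Gamma>fin xb subalg in auto)
  then show ?thesis by simp
qed

lemma block_decoupling_bound:
  fixes M :: "'a measure" and X :: "nat \<Rightarrow> nat \<Rightarrow> 'a \<Rightarrow> real" and F :: "ereal \<Rightarrow> ereal \<Rightarrow> 'a measure"
    and q :: "nat \<Rightarrow> nat \<Rightarrow> nat" and \<Gamma> :: "nat \<Rightarrow> nat set" and lo hi :: "nat \<Rightarrow> nat \<Rightarrow> nat"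
    and s D aa bb :: real and l m h g d :: nat
  assumes M: "prob_space M"
    and Xm: "\<And>j n. j \<in> {1..l} \<Longrightarrow> X j n \<in> borel_measurable M"
    and bnd: "\<And>j n. j \<in> {1..l} \<Longrightarrow> AE \<omega> in M. \<bar>X j n \<omega>\<bar> \<le> D"
    and subalg: "\<And>k l'. subalgebra M (F k l')"
    and mono: "\<And>k l' k' l''. k' \<le> k \<Longrightarrow> l' \<le> l'' \<Longrightarrow> sets (F k l') \<subseteq> sets (F k' l'')"
    and alph: "\<And>k A B. A \<in> sets (F (-\<infinity>) (ereal (real k))) \<Longrightarrow> B \<in> sets (F (ereal (real (k + g))) \<infinity>) \<Longrightarrow>
                 \<bar>measure M (A \<inter> B) - measure M A * measure M B\<bar> \<le> aa"
    and bet: "\<And>j n. j \<in> {1..l} \<Longrightarrow>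
       (\<integral>\<omega>. \<bar>X j n \<omega> - real_cond_exp M (F (ereal (real n - real h)) (ereal (real n + real h))) (X j n) \<omega>\<bar> \<partial>M) \<le> bb"
    and \<Gamma>fin: "\<And>k. finite (\<Gamma> k)"
    and geo1: "\<And>j k n. j \<in> {1..l} \<Longrightarrow> k \<in> {1..m} \<Longrightarrow> n \<in> \<Gamma> k \<Longrightarrow> lo j k \<le> q j n \<and> q j n \<le> hi j k"
    and geo2: "\<And>j k j' k'. j \<in> {1..l} \<Longrightarrow> j' \<in> {1..l} \<Longrightarrow> k \<in> {1..m} \<Longrightarrow> k' \<in> {1..m} \<Longrightarrow>
                 (j < j' \<or> (j = j' \<and> k < k')) \<Longrightarrow> real (hi j k + h + g) \<le> real (lo j' k') - real h"
    and aa0: "0 \<le> aa"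
  shows "cmod ((\<integral>\<omega>. (\<Prod>k=1..m. \<Prod>n\<in>\<Gamma> k. exp (\<i> * complex_of_real (s * (\<Prod>j=1..l. X j (q j n) \<omega>)))) \<partial>M)
           - (\<Prod>k=1..m. \<integral>\<omega>. (\<Prod>n\<in>\<Gamma> k. exp (\<i> * complex_of_real (s * (\<Prod>j=1..l. X j (q j n) \<omega>)))) \<partial>M))
    \<le> 2 * ((\<Sum>k=1..m. card (\<Gamma> k)) * (\<bar>s\<bar> * (max 1 D)^l * l * bb))
      + 2 * exp (\<bar>s\<bar> * (max 1 D)^l) ^ (2 * (\<Sum>k=1..m. card (\<Gamma> k))) * (\<Sum>k=1..m. card (\<Gamma> k))
           * ((\<bar>s\<bar> * (max 1 D)^l) ^ Suc d / fact (Suc d))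
      + 32 * aa * l * m * exp (\<bar>s\<bar> * (max 1 D)^(2 * l)) ^ (\<Sum>k=1..m. card (\<Gamma> k))"
proof -
  interpret prob_space M by (rule M)
  define D1 where "D1 = max 1 D"
  have D1: "1 \<le> D1" "D \<le> D1" unfolding D1_def by auto
  define c0 where "c0 = \<bar>s\<bar> * D1^l"
  define S where "S = (\<Sum>k=1..m. card (\<Gamma> k))"
  define r where "r = c0 ^ Suc d / fact (Suc d)"
  define Ft where "Ft = (\<lambda>j n. F (ereal (real (q j n) - real h)) (ereal (real (q j n) + real h)))"
  define xt where "xt = (\<lambda>j n. trunc_cond_exp M (Ft j n) D1 (X j (q j n)))"
  have xtM: "xt j n \<in> borel_measurable M" for j n
    unfolding xt_def by (rule measurable_from_subalg[OF _ trunc_cond_exp_measurable]) (simp add: Ft_def subalg)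
  have xtb: "\<bar>xt j n \<omega>\<bar> \<le> D1" for j n \<omega>
    unfolding xt_def using D1 by (intro trunc_cond_exp_abs_le) auto
  have XD1: "AE \<omega> in M. \<bar>X j n \<omega>\<bar> \<le> D1" if "j \<in> {1..l}" for j n
    using bnd[OF that, of n] by eventually_elim (use D1 in auto)
  have AEX: "AE \<omega> in M. \<forall>j\<in>{1..l}. \<forall>n. \<bar>X j n \<omega>\<bar> \<le> D1"
    using XD1 by (simp add: AE_ball_countable AE_all_countable)
  have iXd: "integrable M (\<lambda>\<omega>. \<bar>X j (q j n) \<omega> - xt j n \<omega>\<bar>)"
    and xtapp: "(\<integral>\<omega>. \<bar>X j (q j n) \<omega> - xt j n \<omega>\<bar> \<partial>M) \<le> bb" if j: "j \<in> {1..l}" for j n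
  proof -
    have "subalgebra M (Ft j n)" by (simp add: Ft_def subalg)
    note approx = trunc_cond_exp_approx[OF M this Xm[OF j, of "q j n"] XD1[OF j, of "q j n"]]
    show "integrable M (\<lambda>\<omega>. \<bar>X j (q j n) \<omega> - xt j n \<omega>\<bar>)"
      using approx(1) D1 by (simp add: xt_def)
    show "(\<integral>\<omega>. \<bar>X j (q j n) \<omega> - xt j n \<omega>\<bar> \<partial>M) \<le> bb"
      using approx(2) D1 bet[OF j, of "q j n"] unfolding xt_def Ft_def by simp
  qed
  define P where "P = (\<lambda>n \<omega>. \<Prod>j=1..l. X j (q j n) \<omega>)"
  define Q where "Q = (\<lambda>n \<omega>. \<Prod>j=1..l. xt j n \<omega>)"
  define \<Phi> where "\<Phi> = (\<lambda>k \<omega>. \<Prod>n\<in>\<Gamma> k. exp (\<i> * complex_of_real (s * P n \<omega>)))"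
  define \<Psi> where "\<Psi> = (\<lambda>k \<omega>. \<Prod>n\<in>\<Gamma> k. exp (\<i> * complex_of_real (s * Q n \<omega>)))"
  define \<Theta> where "\<Theta> = (\<lambda>k \<omega>. \<Prod>n\<in>\<Gamma> k. \<Sum>b\<le>d. (\<i> * complex_of_real (s * Q n \<omega>))^b / fact b)"
  have Qb: "\<bar>s * Q n \<omega>\<bar> \<le> c0" for n \<omega>
  proof -
    have "\<bar>Q n \<omega>\<bar> \<le> (\<Prod>j=1..l. D1)"
      unfolding Q_def abs_prod using xtb by (intro prod_mono) auto
    then show ?thesis unfolding c0_def abs_mult by (intro mult_left_mono) auto
  qed
  have \<Phi>m: "\<Phi> k \<in> borel_measurable M" for k unfolding \<Phi>_def P_def using Xm by measurable
  have \<Psi>m: "\<Psi> k \<in> borel_measurable M" for k unfolding \<Psi>_def Q_def using xtM by measurable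
  have \<Theta>m: "\<Theta> k \<in> borel_measurable M" for k unfolding \<Theta>_def Q_def using xtM by measurable
  have n\<Phi>: "norm (\<Phi> k \<omega>) = 1" and n\<Psi>: "norm (\<Psi> k \<omega>) = 1" for k \<omega>
    unfolding \<Phi>_def \<Psi>_def by (simp_all add: prod_norm[symmetric])
  have ec0: "1 \<le> exp c0" unfolding c0_def using D1 by simp
  have n\<Theta>: "norm (\<Theta> k \<omega>) \<le> exp c0 ^ card (\<Gamma> k)" for k \<omega>
  proof -
    have "norm (\<Theta> k \<omega>) \<le> (\<Prod>n\<in>\<Gamma> k. exp c0)"
      unfolding \<Theta>_def prod_norm[symmetric]
      by (intro prod_mono conjI norm_ge_zero order.trans[OF taylor_poly_norm_le]) (use Qb in auto)
    then show ?thesis by simp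
  qed
  have dec\<Theta>: "norm ((\<integral>\<omega>. (\<Prod>k=1..m. \<Theta> k \<omega>) \<partial>M) - (\<Prod>k=1..m. \<integral>\<omega>. \<Theta> k \<omega> \<partial>M))
      \<le> 32 * aa * l * m * exp (\<bar>s\<bar> * D1^(2 * l)) ^ S"
    unfolding \<Theta>_def Q_def S_def
  proof (rule localized_taylor_decoupling[where F=F and x=xt and aa=aa and lo=lo and hi=hi, OF M])
    show "xt j n \<in> borel_measurable (F (ereal (real (q j n) - real h)) (ereal (real (q j n) + real h)))" for j n
      unfolding xt_def Ft_def by (rule trunc_cond_exp_measurable)
  qed (fact subalg mono alph aa0 D1(1) \<Gamma>fin geo1 geo2 | rule xtb)+
  have err\<Psi>\<Theta>: "(\<Sum>k=1..m. \<integral>\<omega>. norm (\<Psi> k \<omega> - \<Theta> k \<omega>) \<partial>M) \<le> exp c0 ^ S * (S * r)"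
    unfolding \<Psi>_def \<Theta>_def S_def r_def
  proof (rule taylor_blocks_error[where y="\<lambda>n \<omega>. s * Q n \<omega>", OF M _ \<Gamma>fin _ Qb])
    show "(\<lambda>\<omega>. s * Q n \<omega>) \<in> borel_measurable M" for n unfolding Q_def using xtM by measurable
  qed simp
  have err\<Phi>\<Psi>: "(\<Sum>k=1..m. \<integral>\<omega>. norm (\<Phi> k \<omega> - \<Psi> k \<omega>) \<partial>M) \<le> S * (\<bar>s\<bar> * D1^l * l * bb)"
  proof -
    define R where "R = (\<lambda>n \<omega>. \<bar>s\<bar> * (D1^l * (\<Sum>j=1..l. \<bar>X j (q j n) \<omega> - xt j n \<omega>\<bar>)))"
    have iR: "integrable M (R n)" for n
      unfolding R_def by (intro Bochner_Integration.integrable_sum integrable_mult_right iXd) auto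
    have intR: "(\<integral>\<omega>. R n \<omega> \<partial>M) \<le> \<bar>s\<bar> * D1^l * l * bb" for n
    proof -
      have "(\<integral>\<omega>. R n \<omega> \<partial>M) = \<bar>s\<bar> * (D1^l * (\<Sum>j=1..l. \<integral>\<omega>. \<bar>X j (q j n) \<omega> - xt j n \<omega>\<bar> \<partial>M))"
        unfolding R_def by (simp add: iXd)
      also have "\<dots> \<le> \<bar>s\<bar> * (D1^l * (\<Sum>j=1..l. bb))"
        using xtapp D1 by (intro sum_mono mult_left_mono) auto
      finally show ?thesis by (simp add: algebra_simps)
    qed
    have ab: "AE \<omega> in M. \<forall>n. \<bar>s * P n \<omega> - s * Q n \<omega>\<bar> \<le> R n \<omega>"
      using AEX
    proof eventually_elim
      case (elim \<omega>)
      show ?case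
      proof
        fix n
        have "\<bar>P n \<omega> - Q n \<omega>\<bar> \<le> (\<Prod>j=1..l. D1) * (\<Sum>j=1..l. norm (X j (q j n) \<omega> - xt j n \<omega>))"
          unfolding P_def Q_def real_norm_def[symmetric]
          by (rule norm_prod_diff_le) (use elim xtb D1 in auto)
        then show "\<bar>s * P n \<omega> - s * Q n \<omega>\<bar> \<le> R n \<omega>" unfolding R_def
          by (simp add: abs_mult mult_left_mono flip: right_diff_distrib)
      qed
    qed
    show ?thesis
      unfolding \<Phi>_def \<Psi>_def S_def
    proof (rule phase_blocks_error[where a="\<lambda>n \<omega>. s * P n \<omega>" and b="\<lambda>n \<omega>. s * Q n \<omega>", OF M _ \<Gamma>fin _ _ ab iR intR])
      show "(\<lambda>\<omega>. s * P n \<omega>) \<in> borel_measurable M" for n unfolding P_def using Xm by measurable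
      show "(\<lambda>\<omega>. s * Q n \<omega>) \<in> borel_measurable M" for n unfolding Q_def using xtM by measurable
    qed simp
  qed
  have step\<Phi>\<Psi>: "norm ((\<integral>\<omega>. (\<Prod>k=1..m. \<Phi> k \<omega>) \<partial>M) - (\<Prod>k=1..m. \<integral>\<omega>. \<Phi> k \<omega> \<partial>M))
     \<le> norm ((\<integral>\<omega>. (\<Prod>k=1..m. \<Psi> k \<omega>) \<partial>M) - (\<Prod>k=1..m. \<integral>\<omega>. \<Psi> k \<omega> \<partial>M))
       + 2 * (\<Sum>k=1..m. \<integral>\<omega>. norm (\<Phi> k \<omega> - \<Psi> k \<omega>) \<partial>M)"
    using decoupling_error_perturb[OF M, of "{1..m}" \<Phi> \<Psi> "\<lambda>_. 1"] \<Phi>m \<Psi>m n\<Phi> n\<Psi> by simp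
  have step\<Psi>\<Theta>: "norm ((\<integral>\<omega>. (\<Prod>k=1..m. \<Psi> k \<omega>) \<partial>M) - (\<Prod>k=1..m. \<integral>\<omega>. \<Psi> k \<omega> \<partial>M))
     \<le> norm ((\<integral>\<omega>. (\<Prod>k=1..m. \<Theta> k \<omega>) \<partial>M) - (\<Prod>k=1..m. \<integral>\<omega>. \<Theta> k \<omega> \<partial>M))
       + 2 * exp c0 ^ S * (\<Sum>k=1..m. \<integral>\<omega>. norm (\<Psi> k \<omega> - \<Theta> k \<omega>) \<partial>M)"
  proof -
    have eq: "(\<Prod>k=1..m. exp c0 ^ card (\<Gamma> k)) = exp c0 ^ S" by (simp add: S_def power_sum)
    have "norm ((\<integral>\<omega>. (\<Prod>k=1..m. \<Psi> k \<omega>) \<partial>M) - (\<Prod>k=1..m. \<integral>\<omega>. \<Psi> k \<omega> \<partial>M))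
     \<le> norm ((\<integral>\<omega>. (\<Prod>k=1..m. \<Theta> k \<omega>) \<partial>M) - (\<Prod>k=1..m. \<integral>\<omega>. \<Theta> k \<omega> \<partial>M))
       + 2 * (\<Prod>k=1..m. exp c0 ^ card (\<Gamma> k)) * (\<Sum>k=1..m. \<integral>\<omega>. norm (\<Psi> k \<omega> - \<Theta> k \<omega>) \<partial>M)"
      by (rule decoupling_error_perturb[OF M]) (use \<Psi>m \<Theta>m n\<Psi> n\<Theta> ec0 in auto)
    then show ?thesis unfolding eq .
  qed
  have "2 * exp c0 ^ S * (\<Sum>k=1..m. \<integral>\<omega>. norm (\<Psi> k \<omega> - \<Theta> k \<omega>) \<partial>M)
      \<le> 2 * exp c0 ^ S * (exp c0 ^ S * (S * r))"
    using err\<Psi>\<Theta> ec0 by (intro mult_left_mono) auto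
  also have "\<dots> = 2 * exp c0 ^ (2 * S) * S * r"
    unfolding mult_2[of S] power_add by (simp only: ac_simps)
  finally have "norm ((\<integral>\<omega>. (\<Prod>k=1..m. \<Phi> k \<omega>) \<partial>M) - (\<Prod>k=1..m. \<integral>\<omega>. \<Phi> k \<omega> \<partial>M))
      \<le> 2 * (S * (\<bar>s\<bar> * D1^l * l * bb)) + 2 * exp c0 ^ (2 * S) * S * r
        + 32 * aa * l * m * exp (\<bar>s\<bar> * D1^(2 * l)) ^ S"
    using step\<Phi>\<Psi> step\<Psi>\<Theta> dec\<Theta> err\<Phi>\<Psi> by linarith
  then show ?thesis unfolding \<Phi>_def P_def S_def r_def c0_def D1_def by simp
qed

subsection \<open>The mixing and approximation coefficients\<close>

lemma covariance_le_mix_alpha: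
  assumes M: "prob_space M" and subalg: "\<And>k l'. subalgebra M (F k l')"
    and A: "A \<in> sets (F (-\<infinity>) (ereal (real k)))" and B: "B \<in> sets (F (ereal (real (k + n))) \<infinity>)"
  shows "\<bar>measure M (A \<inter> B) - measure M A * measure M B\<bar> \<le> mix_alpha M F n"
proof -
  interpret prob_space M by (rule M)
  have sM: "\<And>a b C. C \<in> sets (F a b) \<Longrightarrow> C \<in> sets M" using subalg by (auto simp: subalgebra_def)
  have b1: "\<bar>measure M (fst AB \<inter> snd AB) - measure M (fst AB) * measure M (snd AB)\<bar> \<le> 1"
    if "AB \<in> sets (F a b) \<times> sets (F c e)" for AB a b c e
  proof -
    have "fst AB \<in> sets M" "snd AB \<in> sets M" using that sM by auto
    then have h: "0 \<le> prob (fst AB \<inter> snd AB)" "prob (fst AB \<inter> snd AB) \<le> 1" "0 \<le> prob (fst AB)" "prob (fst AB) \<le> 1"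
      "0 \<le> prob (snd AB)" "prob (snd AB) \<le> 1" by auto
    have "0 \<le> prob (fst AB) * prob (snd AB)" "prob (fst AB) * prob (snd AB) \<le> 1"
      using h by (auto intro: mult_le_one)
    then show ?thesis using h by linarith
  qed
  define inner where "inner = (\<lambda>k. SUP AB\<in>sets (F (-\<infinity>) (ereal (real k))) \<times> sets (F (ereal (real (k + n))) \<infinity>).
        \<bar>measure M (fst AB \<inter> snd AB) - measure M (fst AB) * measure M (snd AB)\<bar>)"
  have ne: "sets (F a b) \<times> sets (F c e) \<noteq> {}" for a b c e
    using sets.empty_sets[of "F a b"] sets.empty_sets[of "F c e"] by blast
  have i1: "inner k' \<le> 1" for k' unfolding inner_def by (rule cSUP_least[OF ne b1])
  have bdd: "bdd_above ((\<lambda>AB. \<bar>measure M (fst AB \<inter> snd AB) - measure M (fst AB) * measure M (snd AB)\<bar>) `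
      (sets (F (-\<infinity>) (ereal (real k))) \<times> sets (F (ereal (real (k + n))) \<infinity>)))"
    by (rule bdd_aboveI2[where M=1]) (rule b1)
  have "\<bar>measure M (A \<inter> B) - measure M A * measure M B\<bar> \<le> inner k"
    unfolding inner_def
    using cSUP_upper[OF _ bdd, of "(A, B)"] A B by simp
  also have "inner k \<le> (SUP k\<in>(UNIV::nat set). inner k)"
    by (rule cSUP_upper) (auto intro: bdd_aboveI2[where M=1] i1)
  finally show ?thesis unfolding mix_alpha_def inner_def .
qed

lemma approx_error_le_approx_beta:
  assumes M: "prob_space M" and subalg: "\<And>k l'. subalgebra M (F k l')"
    and Xm: "\<And>m. X m \<in> borel_measurable M" and bnd: "\<And>m. AE \<omega> in M. \<bar>X m \<omega>\<bar> \<le> D"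
  shows "(\<integral>\<omega>. \<bar>X m \<omega> - real_cond_exp M (F (ereal (real m - real n)) (ereal (real m + real n))) (X m) \<omega>\<bar> \<partial>M)
     \<le> approx_beta M F X n"
proof -
  interpret prob_space M by (rule M)
  define val where "val = (\<lambda>m. \<integral>\<omega>. \<bar>X m \<omega> - real_cond_exp M (F (ereal (real m - real n)) (ereal (real m + real n))) (X m) \<omega>\<bar> \<partial>M)"
  have D0: "0 \<le> D"
  proof (rule ccontr)
    assume "\<not> 0 \<le> D"
    then have "AE \<omega> in M. False" using bnd[of 0] by (rule_tac AE_mp) auto
    then show False by (simp add: AE_False)
  qed
  have vb: "val m' \<le> 2 * D" for m'
  proof -
    interpret S: finite_measure_subalgebra M "F (ereal (real m' - real n)) (ereal (real m' + real n))"
      by unfold_locales (rule subalg)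
    have iX: "integrable M (X m')"
      by (rule integrable_const_bound[where B=D]) (use bnd Xm in auto)
    have c1: "AE \<omega> in M. real_cond_exp M (F (ereal (real m' - real n)) (ereal (real m' + real n))) (X m') \<omega> \<le> D"
      by (rule S.real_cond_exp_le_c[OF iX]) (use bnd[of m'] in \<open>auto elim: AE_mp\<close>)
    have c2: "AE \<omega> in M. - D \<le> real_cond_exp M (F (ereal (real m' - real n)) (ereal (real m' + real n))) (X m') \<omega>"
      by (rule S.real_cond_exp_ge_c[OF iX]) (use bnd[of m'] in \<open>auto elim: AE_mp\<close>)
    have "AE \<omega> in M. \<bar>X m' \<omega> - real_cond_exp M (F (ereal (real m' - real n)) (ereal (real m' + real n))) (X m') \<omega>\<bar> \<le> 2 * D"
      using c1 c2 bnd[of m'] by eventually_elim auto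
    then show ?thesis unfolding val_def
      by (rule integral_le_const_AE[OF M]) (use D0 in auto)
  qed
  have "val m \<le> (SUP m\<in>(UNIV::nat set). val m)"
    by (rule cSUP_upper) (auto intro: bdd_aboveI2[where M="2*D"] vb)
  then show ?thesis unfolding approx_beta_def val_def .
qed

lemma mixing_rate_bounds:
  fixes M :: "'a measure" and X :: "nat \<Rightarrow> nat \<Rightarrow> 'a \<Rightarrow> real" and F :: "ereal \<Rightarrow> ereal \<Rightarrow> 'a measure"
  assumes prob: "prob_space M" and l_pos: "l \<ge> 1"
    and Xm: "\<And>j n. j \<in> {1..l} \<Longrightarrow> X j n \<in> borel_measurable M"
    and bnd: "\<And>j n. j \<in> {1..l} \<Longrightarrow> AE \<omega> in M. \<bar>X j n \<omega>\<bar> \<le> D"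
    and subalg: "\<And>k l'. subalgebra M (F k l')"
    and C1: "\<And>n. mix_alpha M F n + (MAX j\<in>{1..l}. approx_beta M F (X j) n) \<le> exp (- \<kappa> * real n) / \<kappa>"
  shows "\<And>k A B. A \<in> sets (F (-\<infinity>) (ereal (real k))) \<Longrightarrow> B \<in> sets (F (ereal (real (k + g))) \<infinity>) \<Longrightarrow>
           \<bar>measure M (A \<inter> B) - measure M A * measure M B\<bar> \<le> exp (- \<kappa> * real g) / \<kappa>"
    and "\<And>j n. j \<in> {1..l} \<Longrightarrow>
           (\<integral>\<omega>. \<bar>X j n \<omega> - real_cond_exp M (F (ereal (real n - real h)) (ereal (real n + real h))) (X j n) \<omega>\<bar> \<partial>M)
             \<le> exp (- \<kappa> * real h) / \<kappa>"
proof -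
  have a0: "0 \<le> mix_alpha M F n" for n
    using covariance_le_mix_alpha[OF prob subalg, where A="{}" and B="{}" and k=0 and n=n] by simp
  have b0: "0 \<le> approx_beta M F (X j) n" if j: "j \<in> {1..l}" for j n
    by (rule order.trans[OF integral_nonneg_AE approx_error_le_approx_beta[OF prob subalg]])
       (use Xm[OF j] bnd[OF j] in auto)
  have bM: "approx_beta M F (X j) n \<le> (MAX j\<in>{1..l}. approx_beta M F (X j) n)" if j: "j \<in> {1..l}" for j n
    by (rule Max_ge) (use j in auto)
  have one: "1 \<in> {1..l}" using l_pos by auto
  show "\<bar>measure M (A \<inter> B) - measure M A * measure M B\<bar> \<le> exp (- \<kappa> * real g) / \<kappa>"
    if "A \<in> sets (F (-\<infinity>) (ereal (real k)))" "B \<in> sets (F (ereal (real (k + g))) \<infinity>)" for k A B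
    using covariance_le_mix_alpha[OF prob subalg that] C1[of g] bM[OF one, of g] b0[OF one, of g] by linarith
  show "(\<integral>\<omega>. \<bar>X j n \<omega> - real_cond_exp M (F (ereal (real n - real h)) (ereal (real n + real h))) (X j n) \<omega>\<bar> \<partial>M)
      \<le> exp (- \<kappa> * real h) / \<kappa>" if j: "j \<in> {1..l}" for j n
    using approx_error_le_approx_beta[where F=F and X="X j" and m=n and n=h, OF prob subalg Xm[OF j] bnd[OF j]]
      C1[of h] bM[OF j, of h] a0[of h] by linarith
qed

subsection \<open>Blocks and index sequences\<close>

lemma iexp_centered_sum:
  assumes G: "finite G"
  shows "exp (\<i> * complex_of_real (s * (\<Sum>n\<in>G. (P n - A))))
       = exp (\<i> * complex_of_real (- s * A)) ^ card G * (\<Prod>n\<in>G. exp (\<i> * complex_of_real (s * P n)))"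
proof -
  have "\<i> * complex_of_real (s * (\<Sum>n\<in>G. (P n - A))) = (\<Sum>n\<in>G. \<i> * complex_of_real (s * P n) + \<i> * complex_of_real (- s * A))"
    by (simp add: sum_distrib_left algebra_simps sum_subtractf)
  then have "exp (\<i> * complex_of_real (s * (\<Sum>n\<in>G. (P n - A))))
     = (\<Prod>n\<in>G. exp (\<i> * complex_of_real (s * P n) + \<i> * complex_of_real (- s * A)))"
    by (simp add: exp_sum G)
  also have "\<dots> = (\<Prod>n\<in>G. exp (\<i> * complex_of_real (s * P n)) * exp (\<i> * complex_of_real (- s * A)))"
    by (intro prod.cong refl exp_add)
  also have "\<dots> = exp (\<i> * complex_of_real (- s * A)) ^ card G * (\<Prod>n\<in>G. exp (\<i> * complex_of_real (s * P n)))"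
    by (simp add: prod.distrib mult.commute)
  finally show ?thesis .
qed

lemma decoupling_error_centering:
  fixes P :: "nat \<Rightarrow> 'a \<Rightarrow> real" and \<Gamma> :: "nat \<Rightarrow> nat set"
  assumes M: "prob_space M" and K: "finite K" and G: "\<And>k. finite (\<Gamma> k)"
  shows "cmod ((\<integral>\<omega>. exp (\<i> * complex_of_real (s * (\<Sum>k\<in>K. \<Sum>n\<in>\<Gamma> k. (P n \<omega> - A)))) \<partial>M)
        - (\<Prod>k\<in>K. \<integral>\<omega>. exp (\<i> * complex_of_real (s * (\<Sum>n\<in>\<Gamma> k. (P n \<omega> - A)))) \<partial>M))
    = cmod ((\<integral>\<omega>. (\<Prod>k\<in>K. \<Prod>n\<in>\<Gamma> k. exp (\<i> * complex_of_real (s * P n \<omega>))) \<partial>M)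
        - (\<Prod>k\<in>K. \<integral>\<omega>. (\<Prod>n\<in>\<Gamma> k. exp (\<i> * complex_of_real (s * P n \<omega>))) \<partial>M))"
proof -
  define e0 where "e0 = exp (\<i> * complex_of_real (- s * A))"
  have ne0: "norm e0 = 1" unfolding e0_def by simp
  define E where "E = (\<Prod>k\<in>K. e0 ^ card (\<Gamma> k))"
  have nE: "norm E = 1" unfolding E_def by (simp add: prod_norm[symmetric] norm_power ne0)
  have p1: "exp (\<i> * complex_of_real (s * (\<Sum>n\<in>\<Gamma> k. (P n \<omega> - A))))
      = e0 ^ card (\<Gamma> k) * (\<Prod>n\<in>\<Gamma> k. exp (\<i> * complex_of_real (s * P n \<omega>)))" for k \<omega>
    unfolding e0_def by (rule iexp_centered_sum[OF G])
  have p2: "exp (\<i> * complex_of_real (s * (\<Sum>k\<in>K. \<Sum>n\<in>\<Gamma> k. (P n \<omega> - A))))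
      = E * (\<Prod>k\<in>K. \<Prod>n\<in>\<Gamma> k. exp (\<i> * complex_of_real (s * P n \<omega>)))" for \<omega>
  proof -
    have "exp (\<i> * complex_of_real (s * (\<Sum>k\<in>K. \<Sum>n\<in>\<Gamma> k. (P n \<omega> - A))))
        = (\<Prod>k\<in>K. exp (\<i> * complex_of_real (s * (\<Sum>n\<in>\<Gamma> k. (P n \<omega> - A)))))"
    proof -
      have "\<i> * complex_of_real (s * (\<Sum>k\<in>K. \<Sum>n\<in>\<Gamma> k. (P n \<omega> - A)))
          = (\<Sum>k\<in>K. \<i> * complex_of_real (s * (\<Sum>n\<in>\<Gamma> k. (P n \<omega> - A))))"
        by (simp add: sum_distrib_left)
      then show ?thesis by (simp only: exp_sum[OF K])
    qed
    also have "\<dots> = (\<Prod>k\<in>K. e0 ^ card (\<Gamma> k) * (\<Prod>n\<in>\<Gamma> k. exp (\<i> * complex_of_real (s * P n \<omega>))))"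
      by (simp only: p1)
    also have "\<dots> = E * (\<Prod>k\<in>K. \<Prod>n\<in>\<Gamma> k. exp (\<i> * complex_of_real (s * P n \<omega>)))"
      unfolding E_def by (rule prod.distrib)
    finally show ?thesis .
  qed
  have "(\<integral>\<omega>. exp (\<i> * complex_of_real (s * (\<Sum>k\<in>K. \<Sum>n\<in>\<Gamma> k. (P n \<omega> - A)))) \<partial>M)
        - (\<Prod>k\<in>K. \<integral>\<omega>. exp (\<i> * complex_of_real (s * (\<Sum>n\<in>\<Gamma> k. (P n \<omega> - A)))) \<partial>M)
      = E * ((\<integral>\<omega>. (\<Prod>k\<in>K. \<Prod>n\<in>\<Gamma> k. exp (\<i> * complex_of_real (s * P n \<omega>))) \<partial>M)
        - (\<Prod>k\<in>K. \<integral>\<omega>. (\<Prod>n\<in>\<Gamma> k. exp (\<i> * complex_of_real (s * P n \<omega>))) \<partial>M))"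
    unfolding p1 p2 E_def by (simp add: prod.distrib right_diff_distrib)
  then show ?thesis by (simp add: norm_mult nE)
qed

text \<open>The k-th block is the interval [theta + (k-1)(theta+tau), k(theta+tau)]: a gap of length
  theta followed by a stretch of length tau.\<close>
lemma Gamma_blk_eq:
  "Gamma_blk L \<epsilon> N k = {theta_blk L \<epsilon> N + (k - 1) * (theta_blk L \<epsilon> N + tau_blk \<epsilon> N)
                          .. k * (theta_blk L \<epsilon> N + tau_blk \<epsilon> N)}"
  unfolding Gamma_blk_def by auto

lemma m_blk_fits:
  assumes "0 < theta_blk L \<epsilon> N + tau_blk \<epsilon> N"
  shows "m_blk L \<epsilon> N * (theta_blk L \<epsilon> N + tau_blk \<epsilon> N) \<le> N"
proof -
  define P where "P = theta_blk L \<epsilon> N + tau_blk \<epsilon> N"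
  have "real (m_blk L \<epsilon> N) \<le> real N / real P"
    unfolding m_blk_def P_def by (rule nat_floor_le) simp
  then have "real (m_blk L \<epsilon> N) * real P \<le> real N" using assms by (simp add: P_def field_simps)
  then show ?thesis unfolding P_def by (metis of_nat_le_iff of_nat_mult)
qed

lemma blocks_size:
  assumes th: "1 \<le> theta_blk L \<epsilon> N"
  shows "(\<Sum>k=1..m_blk L \<epsilon> N. card (Gamma_blk L \<epsilon> N k)) \<le> N" "m_blk L \<epsilon> N \<le> N"
proof -
  define P where "P = theta_blk L \<epsilon> N + tau_blk \<epsilon> N"
  define m where "m = m_blk L \<epsilon> N"
  have P0: "0 < P" using th unfolding P_def by auto
  have mP: "m * P \<le> N" using m_blk_fits[of L \<epsilon> N] P0 unfolding m_def P_def by simp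
  have card: "card (Gamma_blk L \<epsilon> N k) \<le> P" if k: "k \<in> {1..m}" for k
  proof -
    have "k * P = (k - 1) * P + P" using k by (cases k) auto
    then show ?thesis using th unfolding Gamma_blk_eq P_def by simp
  qed
  have "(\<Sum>k=1..m. card (Gamma_blk L \<epsilon> N k)) \<le> (\<Sum>k=1..m. P)" by (rule sum_mono) (rule card)
  also have "\<dots> = m * P" by simp
  finally show "(\<Sum>k=1..m_blk L \<epsilon> N. card (Gamma_blk L \<epsilon> N k)) \<le> N" using mP unfolding m_def by simp
  have "m \<le> m * P" using P0 by simp
  then show "m_blk L \<epsilon> N \<le> N" using mP unfolding m_def by linarith
qed

lemma theta_bounds:
  assumes N: "1 \<le> N" and Le: "0 \<le> L * \<epsilon>" "L * \<epsilon> \<le> 1/4"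
  shows "real N powr (3/4) - 1 \<le> real (theta_blk L \<epsilon> N)" "theta_blk L \<epsilon> N \<le> N"
proof -
  have x1: "1 \<le> real N" using N by simp
  have "real N powr (3/4) \<le> real N powr (1 - L * \<epsilon>)" using Le x1 by (intro powr_mono) auto
  moreover have "real N powr (1 - L * \<epsilon>) - 1 \<le> real (theta_blk L \<epsilon> N)"
    unfolding theta_blk_def by (rule nat_floor_ge) simp
  ultimately show "real N powr (3/4) - 1 \<le> real (theta_blk L \<epsilon> N)" by linarith
  have "real N powr (1 - L * \<epsilon>) \<le> real N powr 1" using Le x1 by (intro powr_mono) auto
  then have y: "real N powr (1 - L * \<epsilon>) \<le> real N" using x1 by simp
  have "real (theta_blk L \<epsilon> N) \<le> real N powr (1 - L * \<epsilon>)"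
    unfolding theta_blk_def by (rule nat_floor_le) simp
  then have "real (theta_blk L \<epsilon> N) \<le> real N" using y by linarith
  then show "theta_blk L \<epsilon> N \<le> N" by simp
qed

lemma gamma_floor_le_theta:
  assumes N: "1 \<le> N" and "L * \<epsilon> \<le> \<gamma>"
  shows "nat \<lfloor>real N powr (1 - \<gamma>)\<rfloor> \<le> theta_blk L \<epsilon> N"
proof -
  have "real N powr (1 - \<gamma>) \<le> real N powr (1 - L * \<epsilon>)" using assms by (intro powr_mono) auto
  then show ?thesis unfolding theta_blk_def by (intro nat_mono floor_mono)
qed

lemma incr_gap:
  fixes f :: "nat \<Rightarrow> nat"
  assumes inc: "\<And>n. n \<ge> n0 \<Longrightarrow> f (Suc n) \<ge> f n + 1" and "n0 \<le> x" "x \<le> y"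
  shows "f x + (y - x) \<le> f y"
  using assms(3)
proof (induction y)
  case 0
  then show ?case by simp
next
  case (Suc y)
  show ?case
  proof (cases "x \<le> y")
    case True
    then have "f x + (y - x) \<le> f y" using Suc by simp
    moreover have "f (Suc y) \<ge> f y + 1" using inc assms(2) True by simp
    ultimately show ?thesis using True by (simp add: Suc_diff_le)
  next
    case False
    then have "x = Suc y" using Suc.prems by simp
    then show ?thesis by simp
  qed
qed

lemma block_separation:
  fixes q :: "nat \<Rightarrow> nat \<Rightarrow> nat" and \<theta> P N m h g l n0 :: nat
  assumes inc: "\<And>j n. j \<in> {1..l} \<Longrightarrow> n \<ge> n0 \<Longrightarrow> q j (Suc n) \<ge> q j n + 1"
    and key: "\<And>j j'. j \<in> {1..l} \<Longrightarrow> j' \<in> {1..l} \<Longrightarrow> j < j' \<Longrightarrow> q j N + \<theta> \<le> q j' \<theta>"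
    and th: "n0 \<le> \<theta>" and P: "\<theta> \<le> P" and mP: "m * P \<le> N" and hg: "2 * h + g = \<theta>"
  shows "\<And>j k n. j \<in> {1..l} \<Longrightarrow> k \<in> {1..m} \<Longrightarrow> n \<in> {n. \<theta> + (k - 1) * P \<le> n \<and> n \<le> k * P} \<Longrightarrow>
            q j (\<theta> + (k - 1) * P) \<le> q j n \<and> q j n \<le> q j (k * P)"
    and "\<And>j k j' k'. j \<in> {1..l} \<Longrightarrow> j' \<in> {1..l} \<Longrightarrow> k \<in> {1..m} \<Longrightarrow> k' \<in> {1..m} \<Longrightarrow>
            (j < j' \<or> (j = j' \<and> k < k')) \<Longrightarrow> real (q j (k * P) + h + g) \<le> real (q j' (\<theta> + (k' - 1) * P)) - real h"
proof -
  have mg: "\<And>j x y. j \<in> {1..l} \<Longrightarrow> n0 \<le> x \<Longrightarrow> x \<le> y \<Longrightarrow> q j x + (y - x) \<le> q j y"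
  proof -
    fix j x y assume j: "j \<in> {1..l}" and xy: "n0 \<le> x" "x \<le> y"
    have i: "\<And>n. n \<ge> n0 \<Longrightarrow> q j (Suc n) \<ge> q j n + 1" using inc j by auto
    show "q j x + (y - x) \<le> q j y" by (rule incr_gap[where f="q j", OF i xy])
  qed
  show "\<And>j k n. j \<in> {1..l} \<Longrightarrow> k \<in> {1..m} \<Longrightarrow> n \<in> {n. \<theta> + (k - 1) * P \<le> n \<and> n \<le> k * P} \<Longrightarrow>
            q j (\<theta> + (k - 1) * P) \<le> q j n \<and> q j n \<le> q j (k * P)"
  proof -
    fix j k n assume j: "j \<in> {1..l}" and k: "k \<in> {1..m}" and n: "n \<in> {n. \<theta> + (k - 1) * P \<le> n \<and> n \<le> k * P}"
    have "q j (\<theta> + (k - 1) * P) + (n - (\<theta> + (k - 1) * P)) \<le> q j n" using n th j by (intro mg) auto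
    moreover have "q j n + (k * P - n) \<le> q j (k * P)" using n th j by (intro mg) auto
    ultimately show "q j (\<theta> + (k - 1) * P) \<le> q j n \<and> q j n \<le> q j (k * P)" by simp
  qed
  show "\<And>j k j' k'. j \<in> {1..l} \<Longrightarrow> j' \<in> {1..l} \<Longrightarrow> k \<in> {1..m} \<Longrightarrow> k' \<in> {1..m} \<Longrightarrow>
            (j < j' \<or> (j = j' \<and> k < k')) \<Longrightarrow> real (q j (k * P) + h + g) \<le> real (q j' (\<theta> + (k' - 1) * P)) - real h"
  proof -
    fix j k j' k' assume j: "j \<in> {1..l}" and j': "j' \<in> {1..l}" and k: "k \<in> {1..m}" and k': "k' \<in> {1..m}"
      and lex: "j < j' \<or> (j = j' \<and> k < k')"
    have kP: "n0 \<le> k * P" using k th P by (metis atLeastAtMost_iff le_trans mult_1 mult_le_mono1)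
    have "q j (k * P) + \<theta> \<le> q j' (\<theta> + (k' - 1) * P)"
    proof (cases "j < j'")
      case True
      have "k * P \<le> N" using k mP by (meson atLeastAtMost_iff le_trans mult_le_mono1)
      then have "q j (k * P) \<le> q j N" using mg[OF j kP, of N] by simp
      also have "q j N + \<theta> \<le> q j' \<theta>" by (rule key[OF j j' True])
      moreover have "q j' \<theta> \<le> q j' (\<theta> + (k' - 1) * P)" using mg[OF j' th, of "\<theta> + (k' - 1) * P"] by simp
      ultimately show ?thesis by linarith
    next
      case False
      then have jj: "j' = j" "k < k'" using lex by auto
      have "k \<le> k' - 1" using jj(2) by simp
      then have "k * P \<le> (k' - 1) * P" by (rule mult_le_mono1)
      then have "k * P + \<theta> \<le> \<theta> + (k' - 1) * P" by simp
      then have le: "k * P \<le> \<theta> + (k' - 1) * P" "\<theta> \<le> (\<theta> + (k' - 1) * P) - k * P" by linarith+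
      have "q j (k * P) + ((\<theta> + (k' - 1) * P) - k * P) \<le> q j (\<theta> + (k' - 1) * P)" by (rule mg[OF j kP le(1)])
      then show ?thesis unfolding jj(1) using le(2) by linarith
    qed
    then show "real (q j (k * P) + h + g) \<le> real (q j' (\<theta> + (k' - 1) * P)) - real h"
      using hg by linarith
  qed
qed

lemma index_increments:
  fixes q :: "nat \<Rightarrow> nat \<Rightarrow> nat" and \<gamma> :: real
  assumes r_pos: "r > 0" and C2: "\<And>n. q 1 n = r * n + p" and \<gamma>: "0 < \<gamma>" and n0: "n0 > 1"
    and C3: "\<And>j n. j \<in> {2..l} \<Longrightarrow> n \<ge> n0 \<Longrightarrow> real (q j (n + 1)) \<ge> real (q j n) + real n powr \<gamma>"
    and j: "j \<in> {1..l}" and n: "n \<ge> n0"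
  shows "q j (Suc n) \<ge> q j n + 1"
proof (cases "j = 1")
  case True
  then show ?thesis using C2 r_pos by simp
next
  case False
  then have j2: "j \<in> {2..l}" using j by auto
  have "1 \<le> real n powr \<gamma>" using n n0 \<gamma> by (intro ge_one_powr_ge_zero) auto
  then have "real (q j n) + 1 \<le> real (q j (n + 1))" using C3[OF j2 n] by linarith
  then show ?thesis by simp
qed

lemma index_separation:
  fixes q :: "nat \<Rightarrow> nat \<Rightarrow> nat" and \<gamma> :: real and N \<theta> n0 l :: nat
  assumes inc: "\<And>j n. j \<in> {1..l} \<Longrightarrow> n \<ge> n0 \<Longrightarrow> q j (Suc n) \<ge> q j n + 1"
    and C4: "\<And>j n. j \<in> {1..l - 1} \<Longrightarrow> n \<ge> n0 \<Longrightarrow>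
               real (q (j + 1) (nat \<lfloor>real n powr (1 - \<gamma>)\<rfloor>)) \<ge> real (q j n) * real n powr \<gamma>"
    and G1: "n0 \<le> nat \<lfloor>real N powr (1 - \<gamma>)\<rfloor>"
    and G2: "nat \<lfloor>real N powr (1 - \<gamma>)\<rfloor> \<le> \<theta>"
    and G3: "2 * n0 \<le> N" and G4: "3 \<le> real N powr \<gamma>" and G5: "\<theta> \<le> N"
    and j: "j \<in> {1..l}" and j': "j' \<in> {1..l}" and jj': "j < j'"
  shows "q j N + \<theta> \<le> q j' \<theta>"
proof -
  define n1 where "n1 = nat \<lfloor>real N powr (1 - \<gamma>)\<rfloor>"
  have th1: "n0 \<le> \<theta>" using G1 G2 by linarith
  have mg: "q j x + (y - x) \<le> q j y" if "j \<in> {1..l}" "n0 \<le> x" "x \<le> y" for j x y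
    using incr_gap[where f="q j", OF inc[OF that(1)]] that(2,3) by blast
  have adjacent: "q j N + \<theta> \<le> q (j + 1) \<theta>" if j: "j \<in> {1..l - 1}" for j
  proof -
    have jl: "j \<in> {1..l}" "j + 1 \<in> {1..l}" using j by auto
    have N0: "n0 \<le> N" using G3 by linarith
    have c4: "real (q j N) * real N powr \<gamma> \<le> real (q (j + 1) n1)" using C4[OF j N0] unfolding n1_def .
    have q1: "q (j + 1) n1 \<le> q (j + 1) \<theta>" using mg[OF jl(2) G1[folded n1_def], of \<theta>] G2 unfolding n1_def by simp
    have qN: "q j n0 + (N - n0) \<le> q j N" using mg[OF jl(1) order.refl N0] .
    have "real (q j N) + real \<theta> \<le> real (q j N) * 3"
    proof -
      have "real \<theta> \<le> real N" using G5 by simp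
      also have "\<dots> \<le> 2 * real (q j N)" using qN G3 by linarith
      finally show ?thesis by linarith
    qed
    also have "\<dots> \<le> real (q j N) * real N powr \<gamma>" using G4 by (intro mult_left_mono) auto
    also have "\<dots> \<le> real (q (j + 1) \<theta>)" using c4 q1 by linarith
    finally show ?thesis by linarith
  qed
  show ?thesis
    using j' jj'
  proof (induction j' rule: less_induct)
    case (less j')
    show ?case
    proof (cases "j' = j + 1")
      case True
      then show ?thesis using adjacent[of j] j less.prems by auto
    next
      case False
      then have jm: "j < j' - 1" "j' - 1 \<in> {1..l}" using less.prems j by auto
      have IH: "q j N + \<theta> \<le> q (j' - 1) \<theta>" using less.IH[of "j' - 1"] jm less.prems by auto
      have "q (j' - 1) \<theta> \<le> q (j' - 1) N" using mg[OF jm(2) th1, of N] G5 by simp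
      moreover have "q (j' - 1) N + \<theta> \<le> q (j' - 1 + 1) \<theta>" using adjacent[of "j' - 1"] jm less.prems by auto
      ultimately show ?thesis using IH jm by simp
    qed
  qed
qed

lemma blockwise_error_bound:
  fixes M :: "'a measure"
    and l :: nat
    and X :: "nat \<Rightarrow> nat \<Rightarrow> 'a \<Rightarrow> real"
    and D :: real
    and F :: "ereal \<Rightarrow> ereal \<Rightarrow> 'a measure"
    and q :: "nat \<Rightarrow> nat \<Rightarrow> nat"
    and \<kappa> \<gamma> \<epsilon> L :: real
    and n0 N :: nat
  assumes prob: "prob_space M"
    and l_pos: "l \<ge> 1"
    and Xm: "\<And>j n. j \<in> {1..l} \<Longrightarrow> X j n \<in> borel_measurable M"
    and bnd: "\<And>j n. j \<in> {1..l} \<Longrightarrow> AE \<omega> in M. \<bar>X j n \<omega>\<bar> \<le> D"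
    and subalg: "\<And>k l'. subalgebra M (F k l')"
    and mono: "\<And>k l' k' l''. k' \<le> k \<Longrightarrow> l' \<le> l'' \<Longrightarrow> sets (F k l') \<subseteq> sets (F k' l'')"
    and \<kappa>_pos: "\<kappa> > 0"
    and C1: "\<And>n. mix_alpha M F n + (MAX j\<in>{1..l}. approx_beta M F (X j) n) \<le> exp (- \<kappa> * real n) / \<kappa>"
    and inc: "\<And>j n. j \<in> {1..l} \<Longrightarrow> n \<ge> n0 \<Longrightarrow> q j (Suc n) \<ge> q j n + 1"
    and C4: "\<And>j n. j \<in> {1..l - 1} \<Longrightarrow> n \<ge> n0 \<Longrightarrow>
               real (q (j + 1) (nat \<lfloor>real n powr (1 - \<gamma>)\<rfloor>)) \<ge> real (q j n) * real n powr \<gamma>"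
    and G1: "n0 \<le> nat \<lfloor>real N powr (1 - \<gamma>)\<rfloor>"
    and G2: "nat \<lfloor>real N powr (1 - \<gamma>)\<rfloor> \<le> theta_blk L \<epsilon> N"
    and G3: "2 * n0 \<le> N"
    and G4: "3 \<le> real N powr \<gamma>"
    and G5: "theta_blk L \<epsilon> N \<le> N"
  shows "cmod ((\<integral>\<omega>. exp (\<i> * complex_of_real (t / sqrt (real N)
                        * (\<Sum>k=1..m_blk L \<epsilon> N. Y_blk M l X q L \<epsilon> N k \<omega>))) \<partial>M)
                 - (\<Prod>k=1..m_blk L \<epsilon> N.
                      (\<integral>\<omega>. exp (\<i> * complex_of_real (t / sqrt (real N) * Y_blk M l X q L \<epsilon> N k \<omega>)) \<partial>M)))
    \<le> 2 * ((\<Sum>k=1..m_blk L \<epsilon> N. card (Gamma_blk L \<epsilon> N k)) * (\<bar>t / sqrt (real N)\<bar> * (max 1 D)^l * l * (exp (- \<kappa> * real (theta_blk L \<epsilon> N div 4)) / \<kappa>)))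
      + 2 * exp (\<bar>t / sqrt (real N)\<bar> * (max 1 D)^l) ^ (2 * (\<Sum>k=1..m_blk L \<epsilon> N. card (Gamma_blk L \<epsilon> N k))) * (\<Sum>k=1..m_blk L \<epsilon> N. card (Gamma_blk L \<epsilon> N k))
           * ((\<bar>t / sqrt (real N)\<bar> * (max 1 D)^l) ^ Suc N / fact (Suc N))
      + 32 * (exp (- \<kappa> * real (theta_blk L \<epsilon> N - 2 * (theta_blk L \<epsilon> N div 4))) / \<kappa>) * l * m_blk L \<epsilon> N
          * exp (\<bar>t / sqrt (real N)\<bar> * (max 1 D)^(2 * l)) ^ (\<Sum>k=1..m_blk L \<epsilon> N. card (Gamma_blk L \<epsilon> N k))"
proof -
  define \<theta> where "\<theta> = theta_blk L \<epsilon> N"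
  define P where "P = \<theta> + tau_blk \<epsilon> N"
  define m where "m = m_blk L \<epsilon> N"
  define h where "h = \<theta> div 4"
  define g where "g = \<theta> - 2 * h"
  let ?s = "t / sqrt (real N)"
  have th1: "n0 \<le> \<theta>" using G1 G2 unfolding \<theta>_def by linarith
  have thP: "\<theta> \<le> P" unfolding P_def by simp
  have mP: "m * P \<le> N"
    using m_blk_fits[of L \<epsilon> N] unfolding m_def P_def \<theta>_def by (cases "tau_blk \<epsilon> N + theta_blk L \<epsilon> N = 0") auto
  have hg: "2 * h + g = \<theta>" unfolding g_def h_def by simp
  have key: "q j N + \<theta> \<le> q j' \<theta>" if "j \<in> {1..l}" "j' \<in> {1..l}" "j < j'" for j j'
    unfolding \<theta>_def by (rule index_separation[where q=q and l=l and \<gamma>=\<gamma>, OF inc C4 G1 G2 G3 G4 G5 that])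
  note geo = block_separation[where q=q and l=l and \<theta>=\<theta> and P=P and N=N, OF inc key th1 thP mP hg]
  note alph = mixing_rate_bounds(1)[where X=X and F=F and l=l and \<kappa>=\<kappa>, OF prob l_pos Xm bnd subalg C1, where g=g]
  note bet = mixing_rate_bounds(2)[where X=X and F=F and l=l and \<kappa>=\<kappa>, OF prob l_pos Xm bnd subalg C1, where h=h]
  have \<Gamma>eq: "Gamma_blk L \<epsilon> N k = {n. \<theta> + (k - 1) * P \<le> n \<and> n \<le> k * P}" for k
    unfolding Gamma_blk_def \<theta>_def P_def ..
  have \<Gamma>fin: "finite (Gamma_blk L \<epsilon> N k)" for k unfolding Gamma_blk_eq by simp
  have aa0: "0 \<le> exp (- \<kappa> * real g) / \<kappa>" using \<kappa>_pos by simp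
  have MB: "cmod ((\<integral>\<omega>. (\<Prod>k=1..m. \<Prod>n\<in>Gamma_blk L \<epsilon> N k. exp (\<i> * complex_of_real (?s * (\<Prod>j=1..l. X j (q j n) \<omega>)))) \<partial>M)
           - (\<Prod>k=1..m. \<integral>\<omega>. (\<Prod>n\<in>Gamma_blk L \<epsilon> N k. exp (\<i> * complex_of_real (?s * (\<Prod>j=1..l. X j (q j n) \<omega>)))) \<partial>M))
    \<le> 2 * ((\<Sum>k=1..m. card (Gamma_blk L \<epsilon> N k)) * (\<bar>?s\<bar> * (max 1 D)^l * l * (exp (- \<kappa> * real h) / \<kappa>)))
      + 2 * exp (\<bar>?s\<bar> * (max 1 D)^l) ^ (2 * (\<Sum>k=1..m. card (Gamma_blk L \<epsilon> N k))) * (\<Sum>k=1..m. card (Gamma_blk L \<epsilon> N k))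
           * ((\<bar>?s\<bar> * (max 1 D)^l) ^ Suc N / fact (Suc N))
      + 32 * (exp (- \<kappa> * real g) / \<kappa>) * l * m * exp (\<bar>?s\<bar> * (max 1 D)^(2 * l)) ^ (\<Sum>k=1..m. card (Gamma_blk L \<epsilon> N k))"
  proof (rule block_decoupling_bound[where lo="\<lambda>j k. q j (\<theta> + (k - 1) * P)" and hi="\<lambda>j k. q j (k * P)"
        and X=X and F=F and q=q and \<Gamma>="Gamma_blk L \<epsilon> N" and m=m and g=g and h=h and s="?s" and d=N
        and D=D and l=l and M=M and aa="exp (- \<kappa> * real g) / \<kappa>" and bb="exp (- \<kappa> * real h) / \<kappa>", OF prob Xm bnd subalg mono alph bet \<Gamma>fin _ _ aa0])
    fix j k n assume "j \<in> {1..l}" "k \<in> {1..m}" "n \<in> Gamma_blk L \<epsilon> N k"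
    then show "q j (\<theta> + (k - 1) * P) \<le> q j n \<and> q j n \<le> q j (k * P)" using geo(1) unfolding \<Gamma>eq by blast
  next
    fix j k j' k' assume "j \<in> {1..l}" "j' \<in> {1..l}" "k \<in> {1..m}" "k' \<in> {1..m}" "j < j' \<or> j = j' \<and> k < k'"
    then show "real (q j (k * P) + h + g) \<le> real (q j' (\<theta> + (k' - 1) * P)) - real h" using geo(2) by blast
  qed
  have Yeq: "Y_blk M l X q L \<epsilon> N k \<omega> = (\<Sum>n\<in>Gamma_blk L \<epsilon> N k. ((\<Prod>j=1..l. X j (q j n) \<omega>) - (\<Prod>j=1..l. \<integral>\<omega>. X j 0 \<omega> \<partial>M)))" for k \<omega>
    unfolding Y_blk_def Rfun_def ..
  have PH: "cmod ((\<integral>\<omega>. exp (\<i> * complex_of_real (?s * (\<Sum>k=1..m. Y_blk M l X q L \<epsilon> N k \<omega>))) \<partial>M)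
                 - (\<Prod>k=1..m. (\<integral>\<omega>. exp (\<i> * complex_of_real (?s * Y_blk M l X q L \<epsilon> N k \<omega>)) \<partial>M)))
     = cmod ((\<integral>\<omega>. (\<Prod>k=1..m. \<Prod>n\<in>Gamma_blk L \<epsilon> N k. exp (\<i> * complex_of_real (?s * (\<Prod>j=1..l. X j (q j n) \<omega>)))) \<partial>M)
           - (\<Prod>k=1..m. \<integral>\<omega>. (\<Prod>n\<in>Gamma_blk L \<epsilon> N k. exp (\<i> * complex_of_real (?s * (\<Prod>j=1..l. X j (q j n) \<omega>)))) \<partial>M))"
    unfolding Yeq by (rule decoupling_error_centering[OF prob _ \<Gamma>fin]) simp
  show ?thesis using MB unfolding PH[unfolded m_def] m_def h_def g_def \<theta>_def .
qed

subsection \<open>Asymptotics and the main theorem\<close>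

lemma gap_decay:
  fixes \<kappa> :: real and N \<theta> :: nat
  assumes \<kappa>: "0 < \<kappa>" and thl: "real N powr (3/4) - 1 \<le> real \<theta>"
  shows "exp (- \<kappa> * real (\<theta> div 4)) \<le> exp (5 * \<kappa> / 4) * exp (- (\<kappa> / 4) * real N powr (3/4))"
    and "exp (- \<kappa> * real (\<theta> - 2 * (\<theta> div 4))) \<le> exp (5 * \<kappa> / 4) * exp (- (\<kappa> / 4) * real N powr (3/4))"
proof -
  have "real N powr (3/4) \<le> 4 + 4 * real (\<theta> div 4)" using thl by linarith
  then have "\<kappa> * real N powr (3/4) \<le> \<kappa> * (4 + 4 * real (\<theta> div 4))" using \<kappa> by (intro mult_left_mono) auto
  then have "- \<kappa> * real (\<theta> div 4) \<le> 5 * \<kappa> / 4 + (- (\<kappa> / 4) * real N powr (3/4))"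
    using \<kappa> by (simp add: algebra_simps)
  then show quarter: "exp (- \<kappa> * real (\<theta> div 4)) \<le> exp (5 * \<kappa> / 4) * exp (- (\<kappa> / 4) * real N powr (3/4))"
    by (simp flip: exp_add)
  have "\<theta> div 4 \<le> \<theta> - 2 * (\<theta> div 4)" by linarith
  then have "exp (- \<kappa> * real (\<theta> - 2 * (\<theta> div 4))) \<le> exp (- \<kappa> * real (\<theta> div 4))"
    using \<kappa> by (intro exp_mono) (simp add: of_nat_le_iff)
  then show "exp (- \<kappa> * real (\<theta> - 2 * (\<theta> div 4))) \<le> exp (5 * \<kappa> / 4) * exp (- (\<kappa> / 4) * real N powr (3/4))"
    using quarter by linarith
qed

lemma exp_power_le_sqrt:
  fixes a C K :: real and S N :: nat
  assumes SN: "real S \<le> K * real N" and a: "0 \<le> a" "a \<le> C / sqrt (real N)" and N: "1 \<le> N"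
  shows "exp a ^ S \<le> exp (K * C * sqrt (real N))"
proof -
  have sN: "0 < sqrt (real N)" using N by simp
  have "exp a ^ S = exp (real S * a)" by (rule exp_of_nat_mult[symmetric])
  also have "\<dots> \<le> exp ((K * real N) * (C / sqrt (real N)))"
    using SN a by (intro exp_mono mult_mono) auto
  also have "(K * real N) * (C / sqrt (real N)) = K * C * sqrt (real N)"
    using sN by (simp add: field_simps flip: real_sqrt_mult_self[of "real N"])
  finally show ?thesis .
qed

lemma taylor_remainder_tiny:
  fixes c :: real and N :: nat
  assumes "0 \<le> c" "c \<le> exp (-3)"
  shows "c ^ Suc N / fact (Suc N) \<le> exp (- 3 * real N)"
proof -
  have f1: "1 \<le> (fact (Suc N) :: real)" by (rule fact_ge_1)
  have "c ^ Suc N \<le> c ^ Suc N * fact (Suc N)" using assms(1) by (intro le_mult_ge_one[OF _ f1]) simp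
  then have "c ^ Suc N / fact (Suc N) \<le> c ^ Suc N" using f1 by (simp add: divide_le_eq)
  also have "\<dots> \<le> exp (-3) ^ Suc N" using assms by (intro power_mono)
  also have "\<dots> = exp (real (Suc N) * (- 3))" by (rule exp_of_nat_mult[symmetric])
  also have "\<dots> = exp (- 3 * real (Suc N))" by (simp add: mult.commute)
  also have "\<dots> \<le> exp (- 3 * real N)" by simp
  finally show ?thesis .
qed

lemma error_terms_bound:
  fixes t D \<kappa> :: real and l N m S \<theta> :: nat
  assumes N1: "1 \<le> N" and \<kappa>: "0 < \<kappa>" and SN: "S \<le> N" and mN: "m \<le> N"
    and thl: "real N powr (3/4) - 1 \<le> real \<theta>"
    and small: "(\<bar>t\<bar> * (max 1 D)^(2*l) + 1) / sqrt (real N) \<le> exp (-3)"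
  shows "2 * (real S * (\<bar>t / sqrt (real N)\<bar> * (max 1 D)^l * l * (exp (- \<kappa> * real (\<theta> div 4)) / \<kappa>)))
      + 2 * exp (\<bar>t / sqrt (real N)\<bar> * (max 1 D)^l) ^ (2 * S) * real S
           * ((\<bar>t / sqrt (real N)\<bar> * (max 1 D)^l) ^ Suc N / fact (Suc N))
      + 32 * (exp (- \<kappa> * real (\<theta> - 2 * (\<theta> div 4))) / \<kappa>) * l * m
          * exp (\<bar>t / sqrt (real N)\<bar> * (max 1 D)^(2 * l)) ^ S
    \<le> (2 * (\<bar>t\<bar> + 1) * (max 1 D)^l * l * exp (5 * \<kappa> / 4) / \<kappa>) * real N * exp ((\<bar>t\<bar> * (max 1 D)^(2*l) + 1) * sqrt (real N)) * exp (- (\<kappa> / 4) * real N powr (3/4))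
      + 2 * real N * exp (2 * (\<bar>t\<bar> * (max 1 D)^(2*l) + 1) * sqrt (real N)) * exp (- 3 * real N)
      + (32 * l * exp (5 * \<kappa> / 4) / \<kappa>) * real N * exp ((\<bar>t\<bar> * (max 1 D)^(2*l) + 1) * sqrt (real N)) * exp (- (\<kappa> / 4) * real N powr (3/4))"
proof -
  define x where "x = real N"
  define D1 where "D1 = max 1 D"
  define C where "C = \<bar>t\<bar> * D1^(2*l) + 1"
  define s where "s = t / sqrt (real N)"
  define Z where "Z = exp (5 * \<kappa> / 4) * exp (- (\<kappa> / 4) * x powr (3/4))"
  have x1: "1 \<le> x" unfolding x_def using N1 by simp
  have D1: "1 \<le> D1" unfolding D1_def by simp
  have Dl1: "1 \<le> D1^l" using D1 by simp
  have eC: "1 \<le> exp (C * sqrt x)" unfolding C_def using x1 by simp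
  have Z0: "0 \<le> Z" unfolding Z_def by simp
  have as: "\<bar>s\<bar> = \<bar>t\<bar> / sqrt x" unfolding s_def x_def by simp
  have ast: "\<bar>s\<bar> \<le> \<bar>t\<bar>" unfolding as using x1 by (simp add: divide_le_eq le_mult_ge_one)
  have c2: "\<bar>s\<bar> * D1^(2*l) \<le> C / sqrt (real N)"
  proof -
    have "\<bar>s\<bar> * D1^(2*l) = (\<bar>t\<bar> * D1^(2*l)) / sqrt (real N)" unfolding s_def by (simp add: abs_divide)
    also have "\<dots> \<le> C / sqrt (real N)" unfolding C_def by (intro divide_right_mono) auto
    finally show ?thesis .
  qed
  have c0: "\<bar>s\<bar> * D1^l \<le> C / sqrt (real N)"
    using c2 mult_left_mono[OF power_increasing[OF _ D1, of l "2 * l"], of "\<bar>s\<bar>"] by simp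
  have sm: "C / sqrt (real N) \<le> exp (-3)" using small unfolding C_def D1_def .
  have decay: "exp (- \<kappa> * real (\<theta> div 4)) \<le> Z" "exp (- \<kappa> * real (\<theta> - 2 * (\<theta> div 4))) \<le> Z"
    using gap_decay[OF \<kappa> thl] unfolding Z_def x_def by auto
  have T1: "2 * (real S * (\<bar>s\<bar> * D1^l * l * (exp (- \<kappa> * real (\<theta> div 4)) / \<kappa>)))
      \<le> (2 * (\<bar>t\<bar> + 1) * D1^l * l * exp (5 * \<kappa> / 4) / \<kappa>) * x * exp (C * sqrt x) * exp (- (\<kappa> / 4) * x powr (3/4))"
  proof -
    have a: "real S * \<bar>s\<bar> \<le> x * (\<bar>t\<bar> + 1)" using SN ast x1 unfolding x_def by (intro mult_mono) auto
    have b: "exp (- \<kappa> * real (\<theta> div 4)) / \<kappa> \<le> Z / \<kappa>" using decay(1) \<kappa> by (intro divide_right_mono) auto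
    have K0: "0 \<le> 2 * D1^l * real l" using Dl1 by simp
    have "2 * (real S * (\<bar>s\<bar> * D1^l * l * (exp (- \<kappa> * real (\<theta> div 4)) / \<kappa>)))
        = (2 * D1^l * real l) * (real S * \<bar>s\<bar>) * (exp (- \<kappa> * real (\<theta> div 4)) / \<kappa>)" by (simp add: ac_simps)
    also have "\<dots> \<le> (2 * D1^l * real l) * (x * (\<bar>t\<bar> + 1)) * (Z / \<kappa>)"
      using K0 x1 \<kappa> by (intro mult_mono[OF mult_left_mono[OF a K0] b]) auto
    also have "\<dots> \<le> (2 * D1^l * real l) * (x * (\<bar>t\<bar> + 1)) * (Z / \<kappa>) * exp (C * sqrt x)"
      by (rule le_mult_ge_one[OF _ eC]) (use K0 x1 Z0 \<kappa> in simp)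
    also have "\<dots> = (2 * (\<bar>t\<bar> + 1) * D1^l * l * exp (5 * \<kappa> / 4) / \<kappa>) * x * exp (C * sqrt x) * exp (- (\<kappa> / 4) * x powr (3/4))"
      unfolding Z_def by (simp add: field_simps)
    finally show ?thesis .
  qed
  have T2: "2 * exp (\<bar>s\<bar> * D1^l) ^ (2 * S) * real S * ((\<bar>s\<bar> * D1^l) ^ Suc N / fact (Suc N))
      \<le> 2 * x * exp (2 * C * sqrt x) * exp (- 3 * x)"
  proof -
    have e1: "exp (\<bar>s\<bar> * D1^l) ^ (2 * S) \<le> exp (2 * C * sqrt x)"
      using exp_power_le_sqrt[of "2 * S" 2 N "\<bar>s\<bar> * D1^l" C] SN c0 D1 N1 unfolding x_def by simp
    have e2: "(\<bar>s\<bar> * D1^l) ^ Suc N / fact (Suc N) \<le> exp (- 3 * x)"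
      unfolding x_def using c0 sm D1 by (intro taylor_remainder_tiny) auto
    have "2 * exp (\<bar>s\<bar> * D1^l) ^ (2 * S) * real S * ((\<bar>s\<bar> * D1^l) ^ Suc N / fact (Suc N))
        = 2 * (exp (\<bar>s\<bar> * D1^l) ^ (2 * S) * real S) * ((\<bar>s\<bar> * D1^l) ^ Suc N / fact (Suc N))" by simp
    also have "\<dots> \<le> 2 * (exp (2 * C * sqrt x) * x) * exp (- 3 * x)"
      using e1 e2 SN D1 unfolding x_def by (intro mult_left_mono mult_mono) auto
    also have "\<dots> = 2 * x * exp (2 * C * sqrt x) * exp (- 3 * x)" by (simp only: ac_simps)
    finally show ?thesis .
  qed
  have T3: "32 * (exp (- \<kappa> * real (\<theta> - 2 * (\<theta> div 4))) / \<kappa>) * l * m * exp (\<bar>s\<bar> * D1^(2 * l)) ^ S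
      \<le> (32 * l * exp (5 * \<kappa> / 4) / \<kappa>) * x * exp (C * sqrt x) * exp (- (\<kappa> / 4) * x powr (3/4))"
  proof -
    have e1: "exp (\<bar>s\<bar> * D1^(2 * l)) ^ S \<le> exp (C * sqrt x)"
      using exp_power_le_sqrt[of S 1 N "\<bar>s\<bar> * D1^(2 * l)" C] SN c2 D1 N1 unfolding x_def by simp
    have b: "exp (- \<kappa> * real (\<theta> - 2 * (\<theta> div 4))) / \<kappa> \<le> Z / \<kappa>"
      using decay(2) \<kappa> by (intro divide_right_mono) auto
    have "32 * (exp (- \<kappa> * real (\<theta> - 2 * (\<theta> div 4))) / \<kappa>) * l * m * exp (\<bar>s\<bar> * D1^(2 * l)) ^ S
        = (32 * real l) * ((exp (- \<kappa> * real (\<theta> - 2 * (\<theta> div 4))) / \<kappa>) * (real m * exp (\<bar>s\<bar> * D1^(2 * l)) ^ S))"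
      by (simp add: ac_simps)
    also have "\<dots> \<le> (32 * real l) * ((Z / \<kappa>) * (x * exp (C * sqrt x)))"
      using mN Z0 \<kappa> x1 by (intro mult_left_mono mult_mono e1 b) (auto simp: x_def)
    also have "\<dots> = (32 * l * exp (5 * \<kappa> / 4) / \<kappa>) * x * exp (C * sqrt x) * exp (- (\<kappa> / 4) * x powr (3/4))"
      unfolding Z_def by (simp add: field_simps)
    finally show ?thesis .
  qed
  show ?thesis using add_mono[OF add_mono[OF T1 T2] T3] unfolding s_def D1_def C_def x_def .
qed

text \<open>The error terms are o(x^(-(e/2) sqrt x)), since x^(3/4) dominates sqrt x ln x.\<close>
lemma error_terms_superexp_small:
  fixes A1 A3 C k e :: real
  assumes "A1 > 0" "A3 > 0" "C > 0" "k > 0" "e > 0"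
  shows "((\<lambda>x::real. (A1 * x * exp (C * sqrt x) * exp (- (k / 4) * x powr (3/4))
      + 2 * x * exp (2 * C * sqrt x) * exp (- 3 * x)
      + A3 * x * exp (C * sqrt x) * exp (- (k / 4) * x powr (3/4))) * x powr (e / 2 * sqrt x)) \<longlongrightarrow> 0) at_top"
  using assms by real_asymp

lemma eventually_le_powr:
  fixes b c :: real assumes "b > 0"
  shows "eventually (\<lambda>N::nat. c \<le> real N powr b) sequentially"
proof -
  have "eventually (\<lambda>x::real. c \<le> x powr b) at_top" using assms by real_asymp
  then show ?thesis using filterlim_real_sequentially unfolding filterlim_iff by blast
qed

lemma eventually_small_over_sqrt:
  fixes C :: real assumes "C \<ge> 0"
  shows "eventually (\<lambda>N::nat. C / sqrt (real N) \<le> exp (-3)) sequentially"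
proof -
  have "eventually (\<lambda>x::real. C / sqrt x \<le> exp (-3)) at_top" using assms by real_asymp
  then show ?thesis using filterlim_real_sequentially unfolding filterlim_iff by blast
qed

definition block_cf_gap :: "'a measure \<Rightarrow> nat \<Rightarrow> (nat \<Rightarrow> nat \<Rightarrow> 'a \<Rightarrow> real) \<Rightarrow> (nat \<Rightarrow> nat \<Rightarrow> nat)
                             \<Rightarrow> real \<Rightarrow> real \<Rightarrow> real \<Rightarrow> nat \<Rightarrow> real" where
  "block_cf_gap M l X q L \<epsilon> t N =
     cmod ((\<integral>\<omega>. exp (\<i> * complex_of_real (t / sqrt (real N)
                        * (\<Sum>k=1..m_blk L \<epsilon> N. Y_blk M l X q L \<epsilon> N k \<omega>))) \<partial>M)
           - (\<Prod>k=1..m_blk L \<epsilon> N.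
                (\<integral>\<omega>. exp (\<i> * complex_of_real (t / sqrt (real N) * Y_blk M l X q L \<epsilon> N k \<omega>)) \<partial>M)))"

lemma block_cf_gap_le_2:
  assumes prob: "prob_space M"
  shows "block_cf_gap M l X q L \<epsilon> t N \<le> 2"
proof -
  have a: "cmod (\<integral>\<omega>. exp (\<i> * complex_of_real (t / sqrt (real N) * (\<Sum>k=1..m_blk L \<epsilon> N. Y_blk M l X q L \<epsilon> N k \<omega>))) \<partial>M) \<le> 1"
    by (rule norm_integral_le_const[OF prob]) simp
  have b: "cmod (\<Prod>k=1..m_blk L \<epsilon> N. (\<integral>\<omega>. exp (\<i> * complex_of_real (t / sqrt (real N) * Y_blk M l X q L \<epsilon> N k \<omega>)) \<partial>M)) \<le> 1"
    unfolding prod_norm[symmetric]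
    by (intro prod_le_1 conjI norm_ge_zero norm_integral_le_const[OF prob]) simp
  show ?thesis unfolding block_cf_gap_def using norm_triangle_ineq4 a b by (smt (verit))
qed

text \<open>For all large N the gap is at most N^(-(epsilon/2) sqrt N): the explicit error terms
  decay like exp(-c N^(3/4)), which beats N^((epsilon/2) sqrt N) = exp((epsilon/2) sqrt N ln N).\<close>
lemma block_cf_gap_eventually_small:
  fixes M :: "'a measure" and X :: "nat \<Rightarrow> nat \<Rightarrow> 'a \<Rightarrow> real" and F :: "ereal \<Rightarrow> ereal \<Rightarrow> 'a measure"
    and q :: "nat \<Rightarrow> nat \<Rightarrow> nat" and \<kappa> \<gamma> \<epsilon> L :: real and n0 :: nat
  assumes prob: "prob_space M" and l_pos: "l \<ge> 1"
    and Xm: "\<And>j n. j \<in> {1..l} \<Longrightarrow> X j n \<in> borel_measurable M"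
    and bnd: "\<And>j n. j \<in> {1..l} \<Longrightarrow> AE \<omega> in M. \<bar>X j n \<omega>\<bar> \<le> D"
    and subalg: "\<And>k l'. subalgebra M (F k l')"
    and mono: "\<And>k l' k' l''. k' \<le> k \<Longrightarrow> l' \<le> l'' \<Longrightarrow> sets (F k l') \<subseteq> sets (F k' l'')"
    and \<kappa>_pos: "\<kappa> > 0"
    and C1: "\<And>n. mix_alpha M F n + (MAX j\<in>{1..l}. approx_beta M F (X j) n) \<le> exp (- \<kappa> * real n) / \<kappa>"
    and inc: "\<And>j n. j \<in> {1..l} \<Longrightarrow> n \<ge> n0 \<Longrightarrow> q j (Suc n) \<ge> q j n + 1"
    and C4: "\<And>j n. j \<in> {1..l - 1} \<Longrightarrow> n \<ge> n0 \<Longrightarrow>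
               real (q (j + 1) (nat \<lfloor>real n powr (1 - \<gamma>)\<rfloor>)) \<ge> real (q j n) * real n powr \<gamma>"
    and \<gamma>: "0 < \<gamma>" "\<gamma> < 1" and \<epsilon>_pos: "\<epsilon> > 0" and L: "L \<ge> 4" and L\<epsilon>: "L * \<epsilon> < \<gamma> / 4"
  shows "eventually (\<lambda>N. block_cf_gap M l X q L \<epsilon> t N \<le> real N powr (- (\<epsilon> / 2) * sqrt (real N))) sequentially"
proof -
  define D1 where "D1 = max 1 D"
  define C where "C = \<bar>t\<bar> * D1^(2*l) + 1"
  define A1 where "A1 = 2 * (\<bar>t\<bar> + 1) * D1^l * l * exp (5 * \<kappa> / 4) / \<kappa>"
  define A3 where "A3 = 32 * l * exp (5 * \<kappa> / 4) / \<kappa>"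
  define Bnd where "Bnd = (\<lambda>x::real. A1 * x * exp (C * sqrt x) * exp (- (\<kappa> / 4) * x powr (3/4))
      + 2 * x * exp (2 * C * sqrt x) * exp (- 3 * x)
      + A3 * x * exp (C * sqrt x) * exp (- (\<kappa> / 4) * x powr (3/4)))"
  have D1: "1 \<le> D1" unfolding D1_def by simp
  have Le: "0 \<le> L * \<epsilon>" "L * \<epsilon> \<le> 1/4" "L * \<epsilon> \<le> \<gamma>" using L \<epsilon>_pos L\<epsilon> \<gamma> by auto
  have A1: "0 < A1" unfolding A1_def using l_pos D1 \<kappa>_pos by (intro divide_pos_pos mult_pos_pos) auto
  have A3: "0 < A3" unfolding A3_def using l_pos \<kappa>_pos by simp
  have C0: "0 < C" unfolding C_def using D1 by (simp add: add_nonneg_pos)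
  have lim: "((\<lambda>N::nat. Bnd (real N) * real N powr (\<epsilon> / 2 * sqrt (real N))) \<longlongrightarrow> 0) sequentially"
    unfolding Bnd_def
    by (rule filterlim_compose[OF error_terms_superexp_small[OF A1 A3 C0 \<kappa>_pos \<epsilon>_pos] filterlim_real_sequentially])
  have ev_small: "eventually (\<lambda>N. Bnd (real N) * real N powr (\<epsilon> / 2 * sqrt (real N)) < 1) sequentially"
    using order_tendstoD(2)[OF lim, of 1] by simp
  have ev_n1: "eventually (\<lambda>N. real n0 + 1 \<le> real N powr (1 - \<gamma>)) sequentially"
    by (rule eventually_le_powr) (use \<gamma> in simp)
  have ev_n0: "eventually (\<lambda>N. 2 * n0 \<le> N) sequentially" by (rule eventually_ge_at_top)
  have ev_\<gamma>: "eventually (\<lambda>N. 3 \<le> real N powr \<gamma>) sequentially" by (rule eventually_le_powr) (use \<gamma> in simp)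
  have ev_C: "eventually (\<lambda>N. C / sqrt (real N) \<le> exp (-3)) sequentially"
    by (rule eventually_small_over_sqrt) (use C0 in simp)
  have ev_1: "eventually (\<lambda>N. 1 \<le> N) sequentially" by (rule eventually_ge_at_top)
  have ev_34: "eventually (\<lambda>N. 2 \<le> real N powr (3/4)) sequentially" by (rule eventually_le_powr) simp
  show ?thesis
    using ev_n1 ev_n0 ev_\<gamma> ev_small ev_C ev_1 ev_34
  proof eventually_elim
    case (elim N)
    have N1: "1 \<le> N" using elim by simp
    have thl: "real N powr (3/4) - 1 \<le> real (theta_blk L \<epsilon> N)" using theta_bounds(1)[OF N1 Le(1,2)] .
    have th1: "1 \<le> theta_blk L \<epsilon> N" using thl elim by linarith
    have "real N powr (1 - \<gamma>) - 1 \<le> real (nat \<lfloor>real N powr (1 - \<gamma>)\<rfloor>)" by (rule nat_floor_ge) simp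
    then have G1: "n0 \<le> nat \<lfloor>real N powr (1 - \<gamma>)\<rfloor>" using elim by linarith
    have small: "(\<bar>t\<bar> * (max 1 D)^(2*l) + 1) / sqrt (real N) \<le> exp (-3)"
      using elim(5) unfolding C_def D1_def .
    note core = blockwise_error_bound[where X=X and q=q and F=F and l=l and \<gamma>=\<gamma> and t=t,
        OF prob l_pos Xm bnd subalg mono \<kappa>_pos C1 inc C4 G1 gamma_floor_le_theta[OF N1 Le(3)]
           elim(2) elim(3) theta_bounds(2)[OF N1 Le(1,2)]]
    have "block_cf_gap M l X q L \<epsilon> t N \<le> Bnd (real N)"
      unfolding block_cf_gap_def Bnd_def A1_def A3_def C_def D1_def
      by (rule order.trans[OF core error_terms_bound[OF N1 \<kappa>_pos blocks_size[OF th1] thl small]])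
    also have "\<dots> \<le> 1 / real N powr (\<epsilon> / 2 * sqrt (real N))"
      using elim(4) N1 by (simp add: field_simps)
    also have "\<dots> = real N powr (- (\<epsilon> / 2) * sqrt (real N))"
      using N1 by (simp add: powr_minus_divide)
    finally show ?case .
  qed
qed

lemma eventually_dominated_to_uniform:
  fixes f g :: "nat \<Rightarrow> real"
  assumes bnd: "\<And>N. f N \<le> B" and ev: "eventually (\<lambda>N. f N \<le> g N) sequentially"
    and g: "\<And>N. 0 < N \<Longrightarrow> 0 < g N"
  shows "\<exists>K>0. \<forall>N>0. f N \<le> K * g N"
proof -
  obtain N1 where N1: "\<And>N. N \<ge> N1 \<Longrightarrow> f N \<le> g N" using ev unfolding eventually_sequentially by blast
  define K where "K = 1 + (\<Sum>N\<in>{0<..<N1}. \<bar>B\<bar> / g N)"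
  have "0 \<le> (\<Sum>N\<in>{0<..<N1}. \<bar>B\<bar> / g N)" using g by (intro sum_nonneg divide_nonneg_pos) auto
  then have K1: "1 \<le> K" unfolding K_def by simp
  show ?thesis
  proof (intro exI conjI allI impI)
    show "0 < K" using K1 by simp
    fix N :: nat assume N: "0 < N"
    show "f N \<le> K * g N"
    proof (cases "N \<ge> N1")
      case True
      have "g N \<le> g N * K" by (rule le_mult_ge_one) (use g[OF N] K1 in auto)
      then show ?thesis using N1[OF True] by (metis mult.commute order.trans)
    next
      case False
      then have "\<bar>B\<bar> / g N \<le> (\<Sum>N\<in>{0<..<N1}. \<bar>B\<bar> / g N)"
        using N g by (intro member_le_sum) (auto intro: divide_nonneg_pos)
      then have "\<bar>B\<bar> / g N \<le> K" unfolding K_def by simp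
      then have "\<bar>B\<bar> \<le> K * g N" using g[OF N] by (simp add: divide_le_eq)
      then show ?thesis using bnd[of N] by linarith
    qed
  qed
qed

theorem lemma4p1:
  fixes M :: "'a measure"
    and l :: nat
    and X :: "nat \<Rightarrow> nat \<Rightarrow> 'a \<Rightarrow> real"
    and D :: real
    and F :: "ereal \<Rightarrow> ereal \<Rightarrow> 'a measure"
    and q :: "nat \<Rightarrow> nat \<Rightarrow> nat"
    and \<kappa> \<gamma> \<epsilon> L :: real
    and r p n0 :: nat
  assumes prob: "prob_space M"
    and l_pos: "l \<ge> 1"
    and stat: "\<And>j. j \<in> {1..l} \<Longrightarrow> stationary_process M (X j)"
    and bnd: "\<And>j n. j \<in> {1..l} \<Longrightarrow> AE \<omega> in M. \<bar>X j n \<omega>\<bar> \<le> D"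
    and subalg: "\<And>k l'. subalgebra M (F k l')"
    and mono: "\<And>k l' k' l''. k' \<le> k \<Longrightarrow> l' \<le> l'' \<Longrightarrow> sets (F k l') \<subseteq> sets (F k' l'')"
    and \<kappa>_pos: "\<kappa> > 0"
    and C1: "\<And>n. mix_alpha M F n + (MAX j\<in>{1..l}. approx_beta M F (X j) n) \<le> exp (- \<kappa> * real n) / \<kappa>"
    and r_pos: "r > 0"
    and C2: "\<And>n. q 1 n = r * n + p"
    and \<gamma>: "0 < \<gamma>" "\<gamma> < 1"
    and n0: "n0 > 1"
    and C3: "\<And>j n. j \<in> {2..l} \<Longrightarrow> n \<ge> n0 \<Longrightarrow> real (q j (n + 1)) \<ge> real (q j n) + real n powr \<gamma>"
    and C4: "\<And>j n. j \<in> {1..l - 1} \<Longrightarrow> n \<ge> n0 \<Longrightarrow>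
               real (q (j + 1) (nat \<lfloor>real n powr (1 - \<gamma>)\<rfloor>)) \<ge> real (q j n) * real n powr \<gamma>"
    and \<epsilon>_pos: "\<epsilon> > 0"
    and L: "L \<ge> 4"
    and L\<epsilon>: "L * \<epsilon> < \<gamma> / 4"
  shows "\<forall>t::real. \<exists>K>0. \<forall>N::nat. real N \<ge> exp (2 / \<epsilon>) \<longrightarrow>
           cmod ((\<integral>\<omega>. exp (\<i> * complex_of_real (t / sqrt (real N)
                        * (\<Sum>k=1..m_blk L \<epsilon> N. Y_blk M l X q L \<epsilon> N k \<omega>))) \<partial>M)
                 - (\<Prod>k=1..m_blk L \<epsilon> N.
                      (\<integral>\<omega>. exp (\<i> * complex_of_real (t / sqrt (real N) * Y_blk M l X q L \<epsilon> N k \<omega>)) \<partial>M)))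
           \<le> K * real N powr (- (\<epsilon> / 2) * sqrt (real N))"
proof (intro allI, unfold block_cf_gap_def[symmetric])
  fix t :: real
  have Xm: "\<And>j n. j \<in> {1..l} \<Longrightarrow> X j n \<in> borel_measurable M"
    using stat unfolding stationary_process_def by blast
  have inc: "\<And>j n. j \<in> {1..l} \<Longrightarrow> n \<ge> n0 \<Longrightarrow> q j (Suc n) \<ge> q j n + 1"
    by (rule index_increments[where q=q and r=r and p=p and l=l, OF r_pos C2 \<gamma>(1) n0 C3])
  have ev: "eventually (\<lambda>N. block_cf_gap M l X q L \<epsilon> t N \<le> real N powr (- (\<epsilon> / 2) * sqrt (real N))) sequentially"
    by (rule block_cf_gap_eventually_small[where M=M and X=X and q=q and l=l and F=F and \<gamma>=\<gamma> and \<kappa>=\<kappa>,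
          OF prob l_pos Xm bnd subalg mono \<kappa>_pos C1 inc C4 \<gamma> \<epsilon>_pos L L\<epsilon>])
  have pos: "0 < real N powr (- (\<epsilon> / 2) * sqrt (real N))" if "0 < N" for N :: nat
    using that by simp
  obtain K where "K > 0"
    and K: "\<And>N. 0 < N \<Longrightarrow> block_cf_gap M l X q L \<epsilon> t N \<le> K * real N powr (- (\<epsilon> / 2) * sqrt (real N))"
    using eventually_dominated_to_uniform[OF block_cf_gap_le_2[OF prob] ev pos] by blast
  moreover have "0 < N" if "real N \<ge> exp (2 / \<epsilon>)" for N :: nat
    using that exp_gt_zero[of "2 / \<epsilon>"] by linarith
  ultimately show "\<exists>K>0. \<forall>N. exp (2 / \<epsilon>) \<le> real N \<longrightarrow>
      block_cf_gap M l X q L \<epsilon> t N \<le> K * real N powr (- (\<epsilon> / 2) * sqrt (real N))"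
    by blast
qed

end
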